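(* (i) Let $\mu\in{\cal P}(2)$ with $|\mu|=k$, and let $n\geq k$. For $\tau\in{\cal P}(2,n)$, $$d^\tau_\mu(2n)=\begin{cases}0&\text{if }|\tau|>k,\\ 0&\text{if }|\tau|=k\text{ and }\tau\neq\mu,\\ 2^{\ell(\mu)}&\text{if }\tau=\mu.\end{cases}$$ If $|\tau|=j<k$, then $$d^\tau_\mu(2n)=\sum_{r=j\vee\lfloor\frac{k+1}{2}\rfloor}^{k-1}\left\{\sum_{s=j\vee\lfloor\frac{k+1}{2}\rfloor}^{r}(-1)^{r-s}\binom{r-j}{s-j}\,m\big((\mu,1^{2s-k}),2(\tau,1^{s-j})\big)\right\}\binom{n-j}{r-j}.$$ (ii) The set $\{f(\mu,2n):\mu\in{\cal P}(2,n)\}$ is a basis of ${\cal B}_{2n}$.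
   Context: Let $K_{2n}$ be the complete graph on $\{1,\ldots,2n\}$, ${\cal M}_{2n}$ its set of perfect matchings, and $[i,j]$ the edge joining $i,j$. For $A,B\in{\cal M}_{2n}$, $d(A,B)$ is the partition of $2n$ whose parts are the numbers of vertices of the connected components of the spanning subgraph with edge set $A\cup B$; it has the form $2\nu$ with $\nu\vdash n$. The group $S_{2n}$ acts on ${\mathbb C}[{\cal M}_{2n}]$ by relabelling vertices. For $\nu\vdash n$, $N_{2\nu}(A)=\sum_{B:\,d(A,B)=2\nu}B$, and these operators form a basis of ${\cal B}_{2n}=\mathrm{End}_{S_{2n}}({\mathbb C}[{\cal M}_{2n}])$. ${\cal P}(2)$ is the set of partitions all of whose parts are $\geq 2$; it includes the empty partition $(0)$ of $0$. ${\cal P}(2,n)=\{\tau\in{\cal P}(2):|\tau|\leq n\}$, and $\ell(\mu)$ is the number of parts of $\mu$. For a partition $\mu$ and $m\geq|\mu|$, $(\mu,1^{m-|\mu|})$ is the partition of $m$ obtained by appending $m-|\mu|$ parts equal to $1$. For $\tau\in{\cal P}(2)$, $M_{2\tau}(2n)=N_{2(\tau,1^{n-|\tau|})}$ if $n\geq|\tau|$ and $M_{2\tau}(2n)=0$ otherwise. For $\mu\in{\cal P}(2)$ and $m\geq1$, $c_\mu(m)\in{\mathbb C}[S_m]$ is the sum of all permutations whose cycles of length $\geq2$ have lengths given by $\mu$; it is $0$ if $m<|\mu|$. Then $f(\mu,2n)\in{\cal B}_{2n}$ is the operator $x\mapsto c_\mu(2n)\cdot x$ on ${\mathbb C}[{\cal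 M}_{2n}]$. The integers $d^\tau_\mu(2n)$ are defined by the expansion $f(\mu,2n)=\sum_{\tau\in{\cal P}(2,n)}d^\tau_\mu(2n)M_{2\tau}(2n)$. Let $I=\{[1,n+1],\ldots,[n,2n]\}$ in ${\cal M}_{2n}$, and more generally $I_s=\{[1,s+1],\ldots,[s,2s]\}\in{\cal M}_{2s}$. For $\rho\vdash 2s$ and $\sigma\vdash s$, $m(\rho,2\sigma)$ is the number of permutations in $S_{2s}$ of cycle type $\rho$ sending $I_s$ to a fixed $A\in{\cal M}_{2s}$ with $d(I_s,A)=2\sigma$; this is independent of the choice of $A$. Finally, $a\vee b=\max(a,b)$. *)

theory Defs
  imports Complex_Main "HOL-Library.Multiset" "HOL-Combinatorics.Permutations"
begin

(* Partitions are multisets of positive naturals; |mu| = sum_mset mu, l(mu) = size mu. *)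

definition P2 :: "nat multiset set" where
  "P2 = {mu. \<forall>x\<in>#mu. 2 \<le> x}"

definition P2n :: "nat \<Rightarrow> nat multiset set" where
  "P2n n = {tau. tau \<in> P2 \<and> sum_mset tau \<le> n}"

definition pad1 :: "nat multiset \<Rightarrow> nat \<Rightarrow> nat multiset" where
  "pad1 mu m = mu + replicate_mset (m - sum_mset mu) 1"

definition dbl :: "nat multiset \<Rightarrow> nat multiset" where
  "dbl nu = image_mset (\<lambda>x. 2 * x) nu"

(* perfect matchings of K_{2n} on vertex set {1..2n}; an edge [i,j] is the set {i,j} *)
definition pmatch :: "nat \<Rightarrow> nat set set set" where
  "pmatch n = {A. (\<forall>e\<in>A. \<exists>i j. i \<noteq> j \<and> e = {i, j}) \<and> \<Union>A = {1..2*n}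
                 \<and> (\<forall>e\<in>A. \<forall>e'\<in>A. e \<noteq> e' \<longrightarrow> e \<inter> e' = {})}"

definition adj :: "nat set set \<Rightarrow> nat set set \<Rightarrow> (nat \<times> nat) set" where
  "adj A B = {(u, v). \<exists>e\<in>A \<union> B. u \<in> e \<and> v \<in> e}"

definition component :: "nat \<Rightarrow> nat set set \<Rightarrow> nat set set \<Rightarrow> nat \<Rightarrow> nat set" where
  "component n A B x = {y \<in> {1..2*n}. (x, y) \<in> (adj A B)\<^sup>*}"

(* d(A,B): multiset of vertex numbers of the connected components *)
definition mdist :: "nat \<Rightarrow> nat set set \<Rightarrow> nat set set \<Rightarrow> nat multiset" where
  "mdist n A B = image_mset card (mset_set (component n A B ` {1..2*n}))"

definition act :: "(nat \<Rightarrow> nat) \<Rightarrow> nat set set \<Rightarrow> nat set set" where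
  "act p A = (\<lambda>e. p ` e) ` A"

(* cycle type of a permutation of S (all cycle lengths, including fixed points) *)
definition cycle_type :: "nat set \<Rightarrow> (nat \<Rightarrow> nat) \<Rightarrow> nat multiset" where
  "cycle_type S p = image_mset card (mset_set ((\<lambda>x. {(p ^^ k) x | k. True}) ` S))"

(* An element of End(C[M_2n]) is represented by its values on the basis M_2n:
   T A is the vector (a function M_2n -> complex, zero outside) T(A).
   f(mu,2n) : A |-> c_mu(2n) . A *)
definition fop :: "nat multiset \<Rightarrow> nat \<Rightarrow> nat set set \<Rightarrow> nat set set \<Rightarrow> complex" where
  "fop mu n A = (\<lambda>B. of_nat (card {p. p permutes {1..2*n}
                     \<and> filter_mset (\<lambda>l. 2 \<le> l) (cycle_type {1..2*n} p) = mu
                     \<and> act p A = B}))"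

definition Nop :: "nat multiset \<Rightarrow> nat \<Rightarrow> nat set set \<Rightarrow> nat set set \<Rightarrow> complex" where
  "Nop nu2 n A = (\<lambda>B. if B \<in> pmatch n \<and> mdist n A B = nu2 then 1 else 0)"

definition Mop :: "nat multiset \<Rightarrow> nat \<Rightarrow> nat set set \<Rightarrow> nat set set \<Rightarrow> complex" where
  "Mop tau n = (if sum_mset tau \<le> n then Nop (dbl (pad1 tau n)) n else (\<lambda>A B. 0))"

(* d^tau_mu(2n): coefficients of the expansion f(mu,2n) = sum_{tau in P(2,n)} d^tau_mu(2n) M_{2tau}(2n) *)
definition dcoef :: "nat multiset \<Rightarrow> nat \<Rightarrow> nat multiset \<Rightarrow> complex" where
  "dcoef mu n = (THE d. (\<forall>tau. tau \<notin> P2n n \<longrightarrow> d tau = 0) \<and>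
       (\<forall>A\<in>pmatch n. fop mu n A = (\<lambda>B. \<Sum>tau\<in>P2n n. d tau * Mop tau n A B)))"

definition Imatch :: "nat \<Rightarrow> nat set set" where
  "Imatch s = {{i, s + i} | i. i \<in> {1..s}}"

(* m(rho, 2 sigma), rho a partition of 2s, sig2 = 2 sigma; A a fixed matching with d(I_s,A) = 2 sigma *)
definition mcount :: "nat multiset \<Rightarrow> nat multiset \<Rightarrow> nat" where
  "mcount rho sig2 = (let s = sum_mset rho div 2;
       A = (SOME A. A \<in> pmatch s \<and> mdist s (Imatch s) A = sig2)
     in card {p. p permutes {1..2*s} \<and> cycle_type {1..2*s} p = rho \<and> act p (Imatch s) = A})"

(* B_{2n} = End_{S_2n}(C[M_2n]) and the basis property of {f(mu,2n)} *)
definition equivariant_op :: "nat \<Rightarrow> (nat set set \<Rightarrow> nat set set \<Rightarrow> complex) \<Rightarrow> bool" where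
  "equivariant_op n T \<longleftrightarrow> (\<forall>A\<in>pmatch n. \<forall>B. B \<notin> pmatch n \<longrightarrow> T A B = 0) \<and>
     (\<forall>p. p permutes {1..2*n} \<longrightarrow> (\<forall>A\<in>pmatch n. \<forall>B. T (act p A) (act p B) = T A B))"

definition f_basis :: "nat \<Rightarrow> bool" where
  "f_basis n \<longleftrightarrow>
     (\<forall>mu\<in>P2n n. equivariant_op n (fop mu n)) \<and>
     (\<forall>c :: nat multiset \<Rightarrow> complex.
        (\<forall>A\<in>pmatch n. \<forall>B. (\<Sum>mu\<in>P2n n. c mu * fop mu n A B) = 0) \<longrightarrow> (\<forall>mu\<in>P2n n. c mu = 0)) \<and>
     (\<forall>T. equivariant_op n T \<longrightarrow>
        (\<exists>c :: nat multiset \<Rightarrow> complex. \<forall>A\<in>pmatch n. \<forall>B. T A B = (\<Sum>mu\<in>P2n n. c mu * fop mu n A B)))"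

end

theory Submission
  imports Defs "HOL-Combinatorics.Orbits"
begin

text \<open>
  The components of \<open>A \<union> B\<close> for two perfect matchings are alternating cycles, so two pairs of
  matchings with the same \<open>d(A, B)\<close> differ by a relabelling. Hence \<open>f(\<mu>, 2n)\<close> is constant on
  the orbits that define the \<open>M\<close>'s, and its coefficient at \<open>\<tau>\<close> counts the permutations of
  cycle type \<open>(\<mu>, 1, ..., 1)\<close> carrying \<open>I\<close> to one fixed \<open>B\<close> with \<open>d(I, B) = 2(\<tau>, 1, ..., 1)\<close>.

  Sorting these permutations by the set of edges of \<open>I\<close> containing a moved point gives
  \<open>d = \<Sum>\<^sub>r (n - j choose r - j) G(r)\<close>, where \<open>G(r)\<close> counts such permutations of \<open>2r\<close> points
  moving a point of every edge. The same identity for \<open>n = s\<close> computes the numbers \<open>m\<close>, and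
  binomial inversion expresses \<open>G\<close> through them. Every touched edge carries one or two of the
  \<open>k\<close> moved points, so \<open>G(r) = 0\<close> unless \<open>k \<le> 2r\<close> and \<open>r \<le> k\<close>. For \<open>r = k\<close> every edge carries
  exactly one moved point; such a permutation is \<open>x \<mapsto> b(a(x))\<close> on a set meeting every edge of
  \<open>I\<close> and of \<open>B\<close> once, and it rotates each alternating \<open>2t\<close>-cycle in a \<open>t\<close>-cycle. So \<open>G(k) = 0\<close>
  unless \<open>\<tau> = \<mu>\<close>, and then \<open>G(k) = 2^l(\<mu>)\<close>, one choice of half for each cycle.

  This triangularity with nonzero diagonal turns the basis of the \<open>M\<close>'s into the basis of the
  \<open>f(\<mu>, 2n)\<close>.
\<close>

lemma count_image_mset_set: "finite X \<Longrightarrow> count (image_mset f (mset_set X)) y = card {x\<in>X. f x = y}"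
proof -
  assume fX: "finite X"
  have "count (image_mset f (mset_set X)) y = (\<Sum>x\<in>f -` {y} \<inter> X. count (mset_set X) x)"
    using count_image_mset[of f "mset_set X" y] fX by simp
  also have "\<dots> = (\<Sum>x\<in>f -` {y} \<inter> X. 1)" using fX by (intro sum.cong) auto
  also have "\<dots> = card (f -` {y} \<inter> X)" by simp
  also have "f -` {y} \<inter> X = {x\<in>X. f x = y}" by auto
  finally show ?thesis .
qed

lemma image_mset_eq_imp_bij_betw:
  assumes "finite X" "finite Y" "image_mset g (mset_set X) = image_mset h (mset_set Y)"
  shows "\<exists>f. bij_betw f X Y \<and> (\<forall>x\<in>X. h (f x) = g x)"
  using assms
proof (induction X arbitrary: Y rule: finite_induct)
  case empty
  then have "mset_set Y = {#}" by simp
  then have "Y = {}" using empty.prems(1) mset_set_empty_iff[of Y] by simp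
  then show ?case by (auto simp: bij_betw_def)
next
  case (insert a X)
  have "image_mset g (mset_set (insert a X)) = add_mset (g a) (image_mset g (mset_set X))"
    using insert.hyps by simp
  then have "g a \<in># image_mset h (mset_set Y)" using insert.prems(2) by simp
  then obtain b where b: "b \<in> Y" "h b = g a" using insert.prems(1) by auto
  have "mset_set Y = add_mset b (mset_set (Y - {b}))" using mset_set.remove[OF insert.prems(1) b(1)] .
  then have "image_mset h (mset_set Y) = add_mset (g a) (image_mset h (mset_set (Y - {b})))" using b by simp
  then have eq: "image_mset g (mset_set X) = image_mset h (mset_set (Y - {b}))"
    using insert.prems(2) insert.hyps by simp
  obtain f0 where f0: "bij_betw f0 X (Y - {b})" "\<forall>x\<in>X. h (f0 x) = g x"
    using insert.IH[of "Y - {b}"] insert.prems(1) eq by auto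
  define f where "f = f0(a := b)"
  have "bij_betw f X (Y - {b})"
    by (rule bij_betw_cong[THEN iffD2, OF _ f0(1)]) (use insert.hyps(2) f_def in auto)
  moreover have "bij_betw f {a} {b}" by (simp add: f_def bij_betw_def)
  ultimately have "bij_betw f (X \<union> {a}) ((Y - {b}) \<union> {b})" by (intro bij_betw_combine) auto
  moreover have "X \<union> {a} = insert a X" "(Y - {b}) \<union> {b} = Y" using b by auto
  moreover have "\<forall>x\<in>insert a X. h (f x) = g x" using f0(2) b insert.hyps(2) f_def by auto
  ultimately show ?case by auto
qed

lemma bij_betw_glue:
  assumes f: "bij_betw f X X'" and g: "\<And>C. C \<in> X \<Longrightarrow> bij_betw (g C) C (f C)"
    and blk: "\<And>y. y \<in> S \<Longrightarrow> blk y \<in> X \<and> y \<in> blk y" "\<And>C y. C \<in> X \<Longrightarrow> y \<in> C \<Longrightarrow> blk y = C"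
    and S: "\<Union>X = S" and S': "\<Union>X' = S'" and disj: "pairwise disjnt X'"
  shows "bij_betw (\<lambda>y. g (blk y) y) S S'"
proof -
  have gin: "g (blk y) y \<in> f (blk y)" if "y \<in> S" for y
    using g[of "blk y"] blk(1)[OF that] by (auto simp: bij_betw_def)
  have fX': "f C \<in> X'" if "C \<in> X" for C using f that by (auto simp: bij_betw_def)
  have "inj_on (\<lambda>y. g (blk y) y) S"
  proof (rule inj_onI)
    fix y1 y2 assume y1: "y1 \<in> S" and y2: "y2 \<in> S" and e: "g (blk y1) y1 = g (blk y2) y2"
    have X1: "blk y1 \<in> X" "y1 \<in> blk y1" and X2: "blk y2 \<in> X" "y2 \<in> blk y2" using blk(1) y1 y2 by auto
    have "f (blk y1) \<inter> f (blk y2) \<noteq> {}" using gin[OF y1] gin[OF y2] e by auto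
    then have "f (blk y1) = f (blk y2)"
      using disj fX'[OF X1(1)] fX'[OF X2(1)] unfolding pairwise_def disjnt_def by blast
    then have "blk y1 = blk y2" using f X1(1) X2(1) by (auto simp: bij_betw_def inj_on_def)
    then show "y1 = y2" using g[OF X1(1)] X1(2) X2(2) e by (auto simp: bij_betw_def inj_on_def)
  qed
  moreover have "(\<lambda>y. g (blk y) y) ` S = S'"
  proof
    show "(\<lambda>y. g (blk y) y) ` S \<subseteq> S'" using gin fX' blk(1) S' by blast
    show "S' \<subseteq> (\<lambda>y. g (blk y) y) ` S"
    proof
      fix z assume "z \<in> S'"
      then obtain D where D: "D \<in> X'" "z \<in> D" using S' by blast
      then obtain C where C: "C \<in> X" "f C = D" using f by (auto simp: bij_betw_def)
      have "z \<in> g C ` C" using g[OF C(1)] C(2) D(2) by (simp add: bij_betw_def)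
      then obtain y where y: "y \<in> C" "g C y = z" by blast
      have "y \<in> S" "blk y = C" using y(1) C(1) S blk(2) by auto
      then show "z \<in> (\<lambda>y. g (blk y) y) ` S" using y(2) by force
    qed
  qed
  ultimately show ?thesis unfolding bij_betw_def by blast
qed

lemma card_bij_betw_Collect:
  assumes h: "bij_betw h X Y" and P: "\<And>x. x \<in> X \<Longrightarrow> Q (h x) \<longleftrightarrow> P x"
  shows "card {y \<in> Y. Q y} = card {x \<in> X. P x}"
proof -
  have "h ` {x \<in> X. P x} = {y \<in> Y. Q y}" using h P unfolding bij_betw_def by auto
  moreover have "inj_on h {x \<in> X. P x}" using h unfolding bij_betw_def by (auto intro: inj_on_subset)
  ultimately show ?thesis by (metis card_image)
qed

lemma card_supersets_eq_choose:
  assumes fA: "finite A" and DA: "D \<subseteq> A" and Dr: "card D \<le> r"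
  shows "card {W. D \<subseteq> W \<and> W \<subseteq> A \<and> card W = r} = (card A - card D) choose (r - card D)"
proof -
  have fD: "finite D" using fA DA finite_subset by blast
  have card_Un: "card (V \<union> D) = card V + card D" if "V \<subseteq> A - D" for V
    using card_Un_disjoint[of V D] that fA fD finite_subset[of V "A - D"] by auto
  have "{W. D \<subseteq> W \<and> W \<subseteq> A \<and> card W = r} = (\<lambda>V. V \<union> D) ` {V. V \<subseteq> A - D \<and> card V = r - card D}"
  proof (intro set_eqI iffI)
    fix W assume W: "W \<in> {W. D \<subseteq> W \<and> W \<subseteq> A \<and> card W = r}"
    then have "W = (W - D) \<union> D" "W - D \<subseteq> A - D" by auto
    then show "W \<in> (\<lambda>V. V \<union> D) ` {V. V \<subseteq> A - D \<and> card V = r - card D}"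
      using card_Un[of "W - D"] W by (intro image_eqI[of _ _ "W - D"]) auto
  next
    fix W assume "W \<in> (\<lambda>V. V \<union> D) ` {V. V \<subseteq> A - D \<and> card V = r - card D}"
    then obtain V where "V \<subseteq> A - D" "card V = r - card D" "W = V \<union> D" by blast
    then show "W \<in> {W. D \<subseteq> W \<and> W \<subseteq> A \<and> card W = r}" using card_Un[of V] DA Dr by auto
  qed
  moreover have "inj_on (\<lambda>V. V \<union> D) {V. V \<subseteq> A - D \<and> card V = r - card D}"
    by (rule inj_onI) blast
  ultimately show ?thesis
    using n_subsets[of "A - D" "r - card D"] fA card_Diff_subset[OF fD DA] by (simp add: card_image)
qed

lemma alternating_binomial_sum: "(\<Sum>u\<le>m. (-1::int)^(m-u) * int (m choose u)) = (if m = 0 then 1 else 0)"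
proof -
  have "(\<Sum>u\<le>m. (-1::int)^(m-u) * int (m choose u)) = (-1)^m * (\<Sum>u\<le>m. (-1)^u * int (m choose u))"
    unfolding sum_distrib_left
    by (intro sum.cong refl) (auto simp: minus_one_power_iff)
  then show ?thesis using choose_alternating_sum[of m] by (cases "m = 0") simp_all
qed

lemma alternating_binomial_sum_shift:
  assumes t: "t \<le> R"
  shows "(\<Sum>s = t..R. (-1::int)^(R-s) * int ((R - t) choose (s - t))) = (if t = R then 1 else 0)"
proof -
  have shift: "(\<Sum>s = t..R. f s) = (\<Sum>u \<le> R - t. f (u + t))" for f :: "nat \<Rightarrow> int"
    using sum.shift_bounds_cl_nat_ivl[of f 0 t "R - t"] t by (simp add: atLeast0AtMost)
  have "R - (u + t) = R - t - u" for u by simp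
  then show ?thesis unfolding shift using alternating_binomial_sum[of "R - t"] t by simp
qed

lemma binomial_inversion0: fixes g :: "nat \<Rightarrow> int"
  shows "(\<Sum>s\<le>R. (-1)^(R-s) * int (R choose s) * (\<Sum>t\<le>s. int (s choose t) * g t)) = g R"
proof -
  define a where "a s t = (-1::int)^(R-s) * int (R choose s) * int (s choose t) * g t" for s t
  have "(\<Sum>s\<le>R. (-1)^(R-s) * int (R choose s) * (\<Sum>t\<le>s. int (s choose t) * g t))
      = (\<Sum>s\<in>{..R}. \<Sum>t\<in>{t. t \<in> {..R} \<and> t \<le> s}. a s t)"
    unfolding a_def sum_distrib_left by (intro sum.cong refl) (auto simp: mult.assoc)
  also have "\<dots> = (\<Sum>t\<in>{..R}. \<Sum>s\<in>{s. s \<in> {..R} \<and> t \<le> s}. a s t)"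
    by (rule sum.swap_restrict) auto
  also have "\<dots> = (\<Sum>t\<in>{..R}. if t = R then g R else 0)"
  proof (rule sum.cong[OF refl])
    fix t assume "t \<in> {..R}" then have t: "t \<le> R" by simp
    have "a s t = int (R choose t) * g t * ((-1)^(R-s) * int ((R - t) choose (s - t)))"
      if "t \<le> s" "s \<le> R" for s
      using choose_mult[OF that] unfolding a_def by (simp add: algebra_simps flip: of_nat_mult)
    then have "(\<Sum>s\<in>{s. s \<in> {..R} \<and> t \<le> s}. a s t)
        = int (R choose t) * g t * (\<Sum>s = t..R. (-1)^(R-s) * int ((R - t) choose (s - t)))"
      unfolding sum_distrib_left by (intro sum.cong) auto
    then show "(\<Sum>s\<in>{s. s \<in> {..R} \<and> t \<le> s}. a s t) = (if t = R then g R else 0)"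
      using alternating_binomial_sum_shift[OF t] by simp
  qed
  also have "\<dots> = g R" by simp
  finally show ?thesis .
qed

lemma binomial_inversion: fixes f :: "nat \<Rightarrow> int" assumes jr: "j \<le> r"
  shows "(\<Sum>s=j..r. (-1)^(r-s) * int ((r-j) choose (s-j)) * (\<Sum>t=j..s. int ((s-j) choose (t-j)) * f t)) = f r"
proof -
  have shift: "(\<Sum>s = j..m. h s) = (\<Sum>u \<le> m - j. h (u + j))" if "j \<le> m" for h :: "nat \<Rightarrow> int" and m
    using sum.shift_bounds_cl_nat_ivl[of h 0 j "m - j"] that by (simp add: atLeast0AtMost)
  have "(\<Sum>s=j..r. (-1)^(r-s) * int ((r-j) choose (s-j)) * (\<Sum>t=j..s. int ((s-j) choose (t-j)) * f t))
      = (\<Sum>s \<le> r - j. (-1)^(r - j - s) * int ((r - j) choose s) * (\<Sum>t \<le> s. int (s choose t) * f (t + j)))"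
    using jr by (simp add: shift[OF jr] shift[of "_ + j"] diff_diff_left add.commute)
  also have "\<dots> = f r" using binomial_inversion0[of "r - j" "\<lambda>u. f (u + j)"] jr by simp
  finally show ?thesis .
qed

lemma sum_filter_le: "sum_mset (filter_mset P M) \<le> sum_mset (M::nat multiset)"
  by (induction M) auto

lemma dbl_add: "dbl (M + N) = dbl M + dbl N" unfolding dbl_def by simp
lemma dbl_rep: "dbl (replicate_mset k 1) = replicate_mset k 2" unfolding dbl_def by (induction k) auto
lemma dbl_rep': "dbl (replicate_mset k (Suc 0)) = replicate_mset k 2" unfolding dbl_def by (induction k) auto

lemma dbl_pad: "sum_mset tau \<le> m \<Longrightarrow> dbl (pad1 tau m) = dbl tau + replicate_mset (m - sum_mset tau) 2"
  unfolding pad1_def by (simp add: dbl_add dbl_rep dbl_rep')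

lemma count_dbl_2: assumes "\<forall>x\<in>#tau. 2 \<le> x" shows "count (dbl tau) 2 = 0"
proof -
  have "2 \<notin># dbl tau" unfolding dbl_def using assms by auto
  then show ?thesis by (simp add: not_in_iff)
qed

lemma P2n_D: "tau \<in> P2n n \<Longrightarrow> (\<forall>x\<in>#tau. 2 \<le> x) \<and> sum_mset tau \<le> n"
  unfolding P2n_def P2_def by simp

lemma filter_rep1: "filter_mset (\<lambda>l. 2 \<le> l) (replicate_mset k (1::nat)) = {#}"
  by (induction k) auto

lemma filter_pad1: "\<forall>x\<in>#tau. 2 \<le> x \<Longrightarrow> filter_mset (\<lambda>l. 2 \<le> l) (pad1 tau m) = tau"
proof -
  assume t: "\<forall>x\<in>#tau. 2 \<le> x"
  have "filter_mset (\<lambda>l. 2 \<le> l) tau = tau" using t by (simp add: filter_mset_eq_conv)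
  then show ?thesis unfolding pad1_def using filter_rep1 by simp
qed

lemma pad1_filter: assumes H1: "\<forall>x\<in>#H. 1 \<le> x" and Hs: "sum_mset H = m"
  shows "pad1 (filter_mset (\<lambda>l. 2 \<le> l) H) m = (H :: nat multiset)"
proof -
  have split: "H = filter_mset (\<lambda>l. 2 \<le> l) H + filter_mset (\<lambda>l. \<not> 2 \<le> l) H"
    by (simp add: multiset_partition)
  have ones: "filter_mset (\<lambda>l. \<not> 2 \<le> l) H = replicate_mset (count H 1) 1"
  proof (rule multiset_eqI)
    fix a
    show "count (filter_mset (\<lambda>l. \<not> 2 \<le> l) H) a = count (replicate_mset (count H 1) 1) a"
    proof (cases "a = 1")
      case True then show ?thesis by simp
    next
      case False
      have "a \<in># H \<Longrightarrow> 1 \<le> a" using H1 by blast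
      then show ?thesis using False by (cases "a \<in># H") (auto simp: not_in_iff)
    qed
  qed
  have "sum_mset H = sum_mset (filter_mset (\<lambda>l. 2 \<le> l) H + filter_mset (\<lambda>l. \<not> 2 \<le> l) H)"
    using arg_cong[OF split, of sum_mset] .
  also have "\<dots> = sum_mset (filter_mset (\<lambda>l. 2 \<le> l) H) + sum_mset (filter_mset (\<lambda>l. \<not> 2 \<le> l) H)"
    by (rule sum_mset.union)
  also have "\<dots> = sum_mset (filter_mset (\<lambda>l. 2 \<le> l) H) + count H 1" using ones by simp
  finally have "count H 1 = m - sum_mset (filter_mset (\<lambda>l. 2 \<le> l) H)" using Hs by simp
  then show ?thesis unfolding pad1_def using split ones by simp
qed

lemma image_half_dbl: "image_mset (\<lambda>m. m div 2) (dbl M) = M"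
  unfolding dbl_def by (simp add: multiset.map_comp comp_def)

lemma dbl_inj: "dbl M = dbl N \<Longrightarrow> M = N"
  using image_half_dbl by metis

lemma dbl_pad1_inj: assumes t1: "\<forall>x\<in>#tau1. 2 \<le> x" and t2: "\<forall>x\<in>#tau2. 2 \<le> x"
  and e: "dbl (pad1 tau1 n) = dbl (pad1 tau2 n)" shows "tau1 = tau2"
proof -
  have pe: "pad1 tau1 n = pad1 tau2 n" using dbl_inj[OF e] .
  have "tau1 = filter_mset (\<lambda>l. 2 \<le> l) (pad1 tau1 n)" using filter_pad1[OF t1, of n] by (rule sym)
  also have "\<dots> = filter_mset (\<lambda>l. 2 \<le> l) (pad1 tau2 n)" by (rule arg_cong[OF pe])
  also have "\<dots> = tau2" by (rule filter_pad1[OF t2])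
  finally show ?thesis .
qed

lemma sum_dbl: "sum_mset (dbl M) = 2 * sum_mset M"
  unfolding dbl_def by (induction M) auto

definition is_matching :: "nat set \<Rightarrow> nat set set \<Rightarrow> bool" where
  "is_matching S A \<longleftrightarrow> (\<forall>e\<in>A. \<exists>i j. i \<noteq> j \<and> e = {i, j}) \<and> \<Union>A = S \<and>
     (\<forall>e\<in>A. \<forall>e'\<in>A. e \<noteq> e' \<longrightarrow> e \<inter> e' = {})"

lemma pmatch_iff_is_matching: "A \<in> pmatch n \<longleftrightarrow> is_matching {1..2*n} A"
  by (simp add: pmatch_def is_matching_def)

text \<open>\<open>mate A x\<close> is the other end of the edge at \<open>x\<close>; it is unspecified off the vertex set.\<close>

definition mate :: "nat set set \<Rightarrow> nat \<Rightarrow> nat" where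
  "mate A x = (THE y. y \<noteq> x \<and> {x, y} \<in> A)"

lemma is_matching_edge_form: "is_matching S A \<Longrightarrow> e \<in> A \<Longrightarrow> \<exists>i j. i \<noteq> j \<and> e = {i, j}"
  unfolding is_matching_def by blast
lemma is_matching_Union: "is_matching S A \<Longrightarrow> \<Union>A = S"
  unfolding is_matching_def by blast
lemma is_matching_disjoint: "is_matching S A \<Longrightarrow> e \<in> A \<Longrightarrow> e' \<in> A \<Longrightarrow> e \<noteq> e' \<Longrightarrow> e \<inter> e' = {}"
  unfolding is_matching_def by blast

lemma is_matching_ex1_mate: assumes "is_matching S A" "x \<in> S" shows "\<exists>!y. y \<noteq> x \<and> {x,y} \<in> A"
proof -
  from is_matching_Union[OF assms(1)] assms(2) obtain e where e: "e \<in> A" "x \<in> e" by blast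
  from is_matching_edge_form[OF assms(1) e(1)] obtain i j where ij: "i \<noteq> j" "e = {i,j}" by blast
  define y where "y = (if x = i then j else i)"
  have y: "y \<noteq> x" "e = {x,y}" using ij e y_def by auto
  show ?thesis
  proof (rule ex1I[of _ y])
    show "y \<noteq> x \<and> {x, y} \<in> A" using y e by simp
    fix z assume z: "z \<noteq> x \<and> {x, z} \<in> A"
    have "x \<in> {x,z} \<inter> e" using e by simp
    then have "{x,z} = e" using is_matching_disjoint[OF assms(1), of "{x,z}" e] z e by blast
    then show "z = y" using y z by (auto simp: doubleton_eq_iff)
  qed
qed

context fixes S A assumes mA: "is_matching S A"
begin

lemma mate_prop: "x \<in> S \<Longrightarrow> mate A x \<noteq> x \<and> {x, mate A x} \<in> A"
  unfolding mate_def using theI'[OF is_matching_ex1_mate[OF mA]] by blast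

lemma mate_neq: "x \<in> S \<Longrightarrow> mate A x \<noteq> x" using mate_prop by blast
lemma mate_edge: "x \<in> S \<Longrightarrow> {x, mate A x} \<in> A" using mate_prop by blast

lemma mate_eqI: "x \<in> S \<Longrightarrow> y \<noteq> x \<Longrightarrow> {x, y} \<in> A \<Longrightarrow> mate A x = y"
  using is_matching_ex1_mate[OF mA] mate_prop by blast

lemma edge_subset: "e \<in> A \<Longrightarrow> e \<subseteq> S" using is_matching_Union[OF mA] by blast

lemma mate_in: "x \<in> S \<Longrightarrow> mate A x \<in> S" using mate_edge edge_subset by blast

lemma mate_mate: "x \<in> S \<Longrightarrow> mate A (mate A x) = x"
proof -
  assume x: "x \<in> S"
  have "{mate A x, x} \<in> A" using mate_edge[OF x] by (simp add: insert_commute)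
  then show ?thesis using mate_eqI[of "mate A x" x] mate_in[OF x] mate_neq[OF x] by simp
qed

lemma edge_eq_mate: "e \<in> A \<Longrightarrow> x \<in> e \<Longrightarrow> e = {x, mate A x}"
proof -
  assume e: "e \<in> A" "x \<in> e"
  then obtain i j where ij: "i \<noteq> j" "e = {i,j}" using is_matching_edge_form[OF mA] by blast
  define y where "y = (if x = i then j else i)"
  have y: "y \<noteq> x" "e = {x,y}" using ij e y_def by auto
  have "x \<in> S" using e edge_subset by blast
  then have "mate A x = y" using mate_eqI y e by simp
  then show ?thesis using y by simp
qed

lemma edge_card: "e \<in> A \<Longrightarrow> card e = 2"
  using is_matching_edge_form[OF mA] by fastforce

lemma matching_eq_image_mate: "A = (\<lambda>x. {x, mate A x}) ` S"
proof
  show "A \<subseteq> (\<lambda>x. {x, mate A x}) ` S"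
  proof
    fix e assume e: "e \<in> A"
    then obtain i j where ij: "i \<noteq> j" "e = {i,j}" using is_matching_edge_form[OF mA] by blast
    then have "e = {i, mate A i}" using edge_eq_mate e by blast
    moreover have "i \<in> S" using e ij edge_subset by blast
    ultimately show "e \<in> (\<lambda>x. {x, mate A x}) ` S" by blast
  qed
qed (use mate_edge in blast)

lemma edges_disjoint: "e \<in> A \<Longrightarrow> e' \<in> A \<Longrightarrow> e \<noteq> e' \<Longrightarrow> e \<inter> e' = {}"
  using is_matching_disjoint[OF mA] by blast

lemma edge_unique: "e \<in> A \<Longrightarrow> e' \<in> A \<Longrightarrow> x \<in> e \<Longrightarrow> x \<in> e' \<Longrightarrow> e = e'"
  using edges_disjoint by blast

lemma Union_matching: "\<Union>A = S" using is_matching_Union[OF mA] .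

lemma finite_matching: "finite S \<Longrightarrow> finite A"
  using matching_eq_image_mate by (metis finite_imageI)

lemma card_carrier_matching: "finite S \<Longrightarrow> card S = 2 * card A"
proof -
  assume f: "finite S"
  have "card S = card (\<Union>A)" using Union_matching by simp
  also have "\<dots> = (\<Sum>e\<in>A. card e)"
    by (rule card_Union_disjoint) (use finite_matching f edge_subset edges_disjoint in \<open>auto simp: pairwise_def disjnt_def intro: finite_subset\<close>)
  also have "\<dots> = 2 * card A" using edge_card by simp
  finally show ?thesis .
qed

end

lemma matching_subset_eq: assumes m1: "is_matching S A1" and m2: "is_matching S A2" and s: "A1 \<subseteq> A2" shows "A1 = A2"
proof
  show "A2 \<subseteq> A1"
  proof
    fix b assume b: "b \<in> A2"
    obtain i j where ij: "i \<noteq> j" "b = {i,j}" using is_matching_edge_form[OF m2 b] by blast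
    have "i \<in> S" using edge_subset[OF m2 b] ij by blast
    then obtain e where e: "e \<in> A1" "i \<in> e" using is_matching_Union[OF m1] by blast
    have "e = b" using edge_unique[OF m2 _ b, of e i] e s ij by blast
    then show "b \<in> A1" using e by simp
  qed
qed (rule s)

lemma is_matching_subset:
  assumes m: "is_matching S A" and W: "W \<subseteq> A" shows "is_matching (\<Union>W) W"
  unfolding is_matching_def using W is_matching_edge_form[OF m] is_matching_disjoint[OF m] by blast

lemma Union_disjoint_edges:
  "is_matching S A \<Longrightarrow> X \<subseteq> A \<Longrightarrow> Y \<subseteq> A \<Longrightarrow> X \<inter> Y = {} \<Longrightarrow> \<Union>X \<inter> \<Union>Y = {}"
  using is_matching_disjoint by blast

section \<open>Alternating walks and the components of \<open>A \<union> B\<close>\<close>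

fun alt_walk :: "nat set set \<Rightarrow> nat set set \<Rightarrow> nat \<Rightarrow> nat \<Rightarrow> nat" where
  "alt_walk A B x 0 = x"
| "alt_walk A B x (Suc i) = (if even i then mate A else mate B) (alt_walk A B x i)"

declare alt_walk.simps(2)[simp del]

definition walk_period :: "nat set set \<Rightarrow> nat set set \<Rightarrow> nat \<Rightarrow> nat" where
  "walk_period A B x = (LEAST p. 0 < p \<and> alt_walk A B x p = x)"

definition comp_of :: "nat set \<Rightarrow> nat set set \<Rightarrow> nat set set \<Rightarrow> nat \<Rightarrow> nat set" where
  "comp_of S A B x = {y \<in> S. (x, y) \<in> (adj A B)\<^sup>*}"

text \<open>\<open>mdist_on\<close> is \<open>mdist\<close> on an arbitrary finite vertex set, needed for sub- and relabelled pairs.\<close>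

definition mdist_on :: "nat set \<Rightarrow> nat set set \<Rightarrow> nat set set \<Rightarrow> nat multiset" where
  "mdist_on S A B = image_mset card (mset_set (comp_of S A B ` S))"

lemma mdist_eq_mdist_on: "mdist n A B = mdist_on {1..2*n} A B"
  unfolding mdist_def mdist_on_def comp_of_def component_def by simp

text \<open>On a closed alternating walk of length \<open>P\<close>, taking \<open>A\<close>-steps from even positions, the
  \<open>A\<close>-mate and the \<open>B\<close>-mate of the \<open>i\<close>-th vertex sit at these positions.\<close>

definition mate_A_index :: "nat \<Rightarrow> nat \<Rightarrow> nat" where
  "mate_A_index P i = (if even i then Suc i else i - 1) mod P"
definition mate_B_index :: "nat \<Rightarrow> nat \<Rightarrow> nat" where
  "mate_B_index P i = (if odd i then Suc i else i + P - 1) mod P"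

lemma mate_A_index_lt: "0 < P \<Longrightarrow> mate_A_index P i < P"
  by (simp add: mate_A_index_def)

lemma mate_B_index_lt: "0 < P \<Longrightarrow> mate_B_index P i < P"
  by (simp add: mate_B_index_def)

lemma mate_A_index_parity: "even P \<Longrightarrow> even (mate_A_index P i) \<longleftrightarrow> odd i"
  unfolding mate_A_index_def by (cases "even i") (auto simp: dvd_mod_iff)

lemma mate_B_index_parity: "even P \<Longrightarrow> 0 < P \<Longrightarrow> even (mate_B_index P i) \<longleftrightarrow> odd i"
  unfolding mate_B_index_def by (cases "even i") (auto simp: dvd_mod_iff)

locale mpair =
  fixes S A B
  assumes fin: "finite S" and mA: "is_matching S A" and mB: "is_matching S B"
begin

definition walk_step :: "nat \<Rightarrow> nat \<Rightarrow> nat" where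
  "walk_step i = (if even i then mate A else mate B)"

lemma alt_walk_Suc: "alt_walk A B x (Suc i) = walk_step i (alt_walk A B x i)" by (simp add: walk_step_def alt_walk.simps(2))

lemma walk_step_in: "y \<in> S \<Longrightarrow> walk_step i y \<in> S"
  using mate_in[OF mA] mate_in[OF mB] by (simp add: walk_step_def)
lemma walk_step_involution: "y \<in> S \<Longrightarrow> walk_step i (walk_step i y) = y"
  using mate_mate[OF mA] mate_mate[OF mB] by (simp add: walk_step_def)
lemma walk_step_neq: "y \<in> S \<Longrightarrow> walk_step i y \<noteq> y"
  using mate_neq[OF mA] mate_neq[OF mB] by (simp add: walk_step_def)
lemma walk_step_parity: "even i = even j \<Longrightarrow> walk_step i = walk_step j"
  by (simp add: walk_step_def)

lemma alt_walk_in: "x \<in> S \<Longrightarrow> alt_walk A B x i \<in> S"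
  by (induction i) (auto simp: alt_walk_Suc walk_step_in)

lemma alt_walk_back: "x \<in> S \<Longrightarrow> alt_walk A B x i = walk_step i (alt_walk A B x (Suc i))"
  by (simp add: alt_walk_Suc walk_step_involution alt_walk_in)

lemma alt_walk_odd_shift_neq: "x \<in> S \<Longrightarrow> alt_walk A B x (d + 2*m + 1) \<noteq> alt_walk A B x d"
proof (induction m arbitrary: d)
  case 0
  then show ?case using walk_step_neq alt_walk_in by (simp add: alt_walk_Suc)
next
  case (Suc m)
  show ?case
  proof
    assume h: "alt_walk A B x (d + 2 * Suc m + 1) = alt_walk A B x d"
    have "alt_walk A B x (d + 2*m + 2) = walk_step (d + 2*m+2) (alt_walk A B x (d + 2 * Suc m + 1))"
      using alt_walk_back[OF Suc.prems, of "d + 2*m+2"] by simp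
    also have "\<dots> = walk_step d (alt_walk A B x d)" using h walk_step_parity[of "d+2*m+2" d] by simp
    also have "\<dots> = alt_walk A B x (Suc d)" by (simp add: alt_walk_Suc)
    finally have "alt_walk A B x (Suc d + 2*m + 1) = alt_walk A B x (Suc d)" by simp
    then show False using Suc.IH[OF Suc.prems] by blast
  qed
qed

lemma alt_walk_odd_distance_neq: assumes "x \<in> S" "odd (c + d)" shows "alt_walk A B x c \<noteq> alt_walk A B x d"
proof -
  { fix c d :: nat assume "d < c" "odd (c + d)"
    then have "c = d + 2*((c - d) div 2) + 1" by presburger
    then obtain m where "c = d + 2*m + 1" by blast
    then have "alt_walk A B x c \<noteq> alt_walk A B x d" using alt_walk_odd_shift_neq[OF assms(1)] by simp }
  note * = this
  show ?thesis
  proof (cases "d < c")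
    case True then show ?thesis using * assms(2) by blast
  next
    case False
    then have "c < d \<or> c = d" by auto
    then show ?thesis using *[of c d] assms(2) by (auto simp: add.commute)
  qed
qed

lemma alt_walk_cancel_prefix: assumes "x \<in> S" "alt_walk A B x (d + c) = alt_walk A B x d" shows "alt_walk A B x c = x"
  using assms(2)
proof (induction d)
  case 0 then show ?case by simp
next
  case (Suc d)
  have ev: "even c"
  proof (rule ccontr)
    assume "odd c"
    then have "odd (Suc d + c + Suc d)" by simp
    from alt_walk_odd_distance_neq[OF assms(1) this] Suc.prems show False by simp
  qed
  have eq1: "walk_step (d + c) = walk_step d" by (rule walk_step_parity) (use ev in simp)
  have "alt_walk A B x (d + c) = walk_step (d + c) (alt_walk A B x (Suc (d + c)))" by (rule alt_walk_back[OF assms(1)])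
  then have "alt_walk A B x (d + c) = walk_step d (alt_walk A B x (Suc d))" using Suc.prems eq1 by simp
  then have "alt_walk A B x (d + c) = alt_walk A B x d" using alt_walk_back[OF assms(1), of d] by simp
  then show ?case by (rule Suc.IH)
qed

lemma alt_walk_returns: assumes "x \<in> S" shows "\<exists>p>0. alt_walk A B x p = x"
proof -
  have sub: "alt_walk A B x ` {0..card S} \<subseteq> S" using alt_walk_in[OF assms] by blast
  have "\<not> inj_on (alt_walk A B x) {0..card S}"
  proof
    assume "inj_on (alt_walk A B x) {0..card S}"
    then have "card (alt_walk A B x ` {0..card S}) = card S + 1" by (simp add: card_image)
    moreover have "card (alt_walk A B x ` {0..card S}) \<le> card S" using card_mono[OF fin sub] .
    ultimately show False by simp
  qed
  then obtain i j where ij: "i \<noteq> j" "alt_walk A B x i = alt_walk A B x j" unfolding inj_on_def by blast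
  have *: "\<exists>p>0. alt_walk A B x p = x" if "i < j" "alt_walk A B x i = alt_walk A B x j" for i j
  proof -
    have "alt_walk A B x (i + (j - i)) = alt_walk A B x i" using that by simp
    then have "alt_walk A B x (j - i) = x" using alt_walk_cancel_prefix[OF assms] by blast
    then show ?thesis using \<open>i < j\<close> by (intro exI[of _ "j - i"]) simp
  qed
  show ?thesis
  proof (cases "i < j")
    case True then show ?thesis using * ij by blast
  next
    case False then have "j < i" using ij by simp
    then show ?thesis using *[of j i] ij by simp
  qed
qed

context fixes x assumes xS: "x \<in> S"
begin

lemma walk_period_prop: "0 < walk_period A B x \<and> alt_walk A B x (walk_period A B x) = x"
  unfolding walk_period_def using LeastI_ex[OF alt_walk_returns[OF xS]] .

lemma walk_period_pos: "0 < walk_period A B x" using walk_period_prop by blast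
lemma alt_walk_period: "alt_walk A B x (walk_period A B x) = x" using walk_period_prop by blast
lemma walk_period_minimal: "0 < q \<Longrightarrow> q < walk_period A B x \<Longrightarrow> alt_walk A B x q \<noteq> x"
  unfolding walk_period_def using not_less_Least by blast

lemma walk_period_even: "even (walk_period A B x)"
  using alt_walk_odd_distance_neq[OF xS, of "walk_period A B x" 0] alt_walk_period by auto

lemma walk_period_ge2: "2 \<le> walk_period A B x" using walk_period_even walk_period_pos by presburger

lemma alt_walk_periodic: "alt_walk A B x (i + walk_period A B x) = alt_walk A B x i"
proof (induction i)
  case 0 then show ?case using alt_walk_period by simp
next
  case (Suc i)
  have "alt_walk A B x (Suc i + walk_period A B x) = walk_step (i + walk_period A B x) (alt_walk A B x (i + walk_period A B x))"
    by (simp add: alt_walk_Suc)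
  also have "\<dots> = walk_step i (alt_walk A B x i)" using Suc.IH walk_step_parity[of "i + walk_period A B x" i] walk_period_even by simp
  finally show ?case by (simp add: alt_walk_Suc)
qed

lemma alt_walk_mod: "alt_walk A B x i = alt_walk A B x (i mod walk_period A B x)"
proof (induction i rule: less_induct)
  case (less i)
  show ?case
  proof (cases "i < walk_period A B x")
    case True then show ?thesis by simp
  next
    case False
    define m where "m = i - walk_period A B x"
    have m: "i = m + walk_period A B x" using False m_def by simp
    have "m < i" using m walk_period_pos by simp
    then show ?thesis using less.IH[of m] m alt_walk_periodic by (simp add: mod_add_self2)
  qed
qed

lemma alt_walk_inj_on: "inj_on (alt_walk A B x) {..<walk_period A B x}"
proof (rule inj_onI)
  fix i j assume i: "i \<in> {..<walk_period A B x}" and j: "j \<in> {..<walk_period A B x}" and e: "alt_walk A B x i = alt_walk A B x j"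
  have *: False if "i < j" "j < walk_period A B x" "alt_walk A B x i = alt_walk A B x j" for i j
  proof -
    have "alt_walk A B x (i + (j - i)) = alt_walk A B x i" using that by simp
    then have "alt_walk A B x (j - i) = x" using alt_walk_cancel_prefix[OF xS] by blast
    then show False using walk_period_minimal[of "j - i"] that by simp
  qed
  show "i = j"
  proof (rule ccontr)
    assume "i \<noteq> j"
    then have "i < j \<or> j < i" by arith
    then show False using *[of i j] *[of j i] i j e by auto
  qed
qed

lemma mate_A_alt_walk_even: "even i \<Longrightarrow> mate A (alt_walk A B x i) = alt_walk A B x (Suc i)"
  by (simp add: alt_walk_Suc walk_step_def)
lemma mate_A_alt_walk_odd: "odd i \<Longrightarrow> mate A (alt_walk A B x i) = alt_walk A B x (i - 1)"
proof -
  assume o: "odd i"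
  define m where "m = i - 1"
  have m: "i = Suc m" "even m" using o m_def by presburger+
  have "alt_walk A B x i = mate A (alt_walk A B x m)" using m by (simp add: alt_walk_Suc walk_step_def)
  then show ?thesis using m mate_mate[OF mA] alt_walk_in[OF xS] by simp
qed
lemma mate_B_alt_walk_odd: "odd i \<Longrightarrow> mate B (alt_walk A B x i) = alt_walk A B x (Suc i)"
  by (simp add: alt_walk_Suc walk_step_def)
lemma mate_B_alt_walk_even: "even i \<Longrightarrow> mate B (alt_walk A B x i) = alt_walk A B x (i + walk_period A B x - 1)"
proof -
  assume e: "even i"
  define m where "m = i + walk_period A B x - 1"
  have m: "i + walk_period A B x = Suc m" using walk_period_pos m_def by simp
  have om: "odd m" using m e walk_period_even by presburger
  have "alt_walk A B x (Suc m) = alt_walk A B x i" using alt_walk_periodic[of i] m by simp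
  moreover have "alt_walk A B x (Suc m) = mate B (alt_walk A B x m)" using om by (simp add: alt_walk_Suc walk_step_def)
  ultimately have "mate B (alt_walk A B x i) = mate B (mate B (alt_walk A B x m))" by simp
  also have "\<dots> = alt_walk A B x m" using mate_mate[OF mB] alt_walk_in[OF xS] by simp
  finally show ?thesis using m_def by simp
qed

end
end

context mpair begin

lemma adj_cases: "(u,v) \<in> adj A B \<Longrightarrow> u \<in> S \<and> v \<in> S \<and> (v = u \<or> v = mate A u \<or> v = mate B u)"
proof -
  assume "(u,v) \<in> adj A B"
  then obtain e where e: "e \<in> A \<union> B" "u \<in> e" "v \<in> e" unfolding adj_def by blast
  show ?thesis
  proof (cases "e \<in> A")
    case True
    have "e = {u, mate A u}" by (rule edge_eq_mate[OF mA True e(2)])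
    moreover have "e \<subseteq> S" using edge_subset[OF mA] True by blast
    ultimately show ?thesis using e by auto
  next
    case False
    then have eB: "e \<in> B" using e by blast
    have "e = {u, mate B u}" by (rule edge_eq_mate[OF mB eB e(2)])
    moreover have "e \<subseteq> S" using edge_subset[OF mB] eB by blast
    ultimately show ?thesis using e by auto
  qed
qed

lemma adj_mate_A: "u \<in> S \<Longrightarrow> (u, mate A u) \<in> adj A B"
  unfolding adj_def using mate_edge[OF mA] by blast
lemma adj_mate_B: "u \<in> S \<Longrightarrow> (u, mate B u) \<in> adj A B"
  unfolding adj_def using mate_edge[OF mB] by blast
lemma adj_walk_step: "u \<in> S \<Longrightarrow> (u, walk_step i u) \<in> adj A B"
  using adj_mate_A adj_mate_B by (simp add: walk_step_def)
lemma adj_sym: "(u,v) \<in> adj A B \<Longrightarrow> (v,u) \<in> adj A B"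
  unfolding adj_def by blast

lemma adj_rtrancl_sym: "(u,v) \<in> (adj A B)\<^sup>* \<Longrightarrow> (v,u) \<in> (adj A B)\<^sup>*"
proof (induction rule: rtrancl_induct)
  case base then show ?case by simp
next
  case (step y z)
  have "(z,y) \<in> adj A B" using adj_sym[OF step(2)] .
  then show ?case using step(3) by (rule converse_rtrancl_into_rtrancl)
qed

lemma alt_walk_reachable: "x \<in> S \<Longrightarrow> (x, alt_walk A B x i) \<in> (adj A B)\<^sup>*"
proof (induction i)
  case 0 then show ?case by simp
next
  case (Suc i)
  have "(alt_walk A B x i, walk_step i (alt_walk A B x i)) \<in> adj A B" using adj_walk_step alt_walk_in[OF Suc.prems] by blast
  then show ?case using Suc by (simp add: alt_walk_Suc)
qed

lemma range_alt_walk: "x \<in> S \<Longrightarrow> range (alt_walk A B x) = alt_walk A B x ` {..<walk_period A B x}"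
proof
  assume x: "x \<in> S"
  show "range (alt_walk A B x) \<subseteq> alt_walk A B x ` {..<walk_period A B x}"
  proof
    fix y assume "y \<in> range (alt_walk A B x)"
    then obtain i where yi: "y = alt_walk A B x i" by blast
    have "y = alt_walk A B x (i mod walk_period A B x)" using yi alt_walk_mod[OF x, of i] by (rule trans)
    moreover have "i mod walk_period A B x < walk_period A B x" using walk_period_pos[OF x] by simp
    ultimately show "y \<in> alt_walk A B x ` {..<walk_period A B x}" by blast
  qed
qed auto

lemma mate_A_alt_walk: assumes x: "x \<in> S" shows "mate A (alt_walk A B x i) = alt_walk A B x (mate_A_index (walk_period A B x) i)"
proof -
  have "mate A (alt_walk A B x i) = alt_walk A B x (if even i then Suc i else i - 1)"
    using mate_A_alt_walk_even[OF x, of i] mate_A_alt_walk_odd[OF x, of i] by (cases "even i") simp_all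
  also have "\<dots> = alt_walk A B x (mate_A_index (walk_period A B x) i)" unfolding mate_A_index_def by (rule alt_walk_mod[OF x])
  finally show ?thesis .
qed

lemma mate_B_alt_walk: assumes x: "x \<in> S" shows "mate B (alt_walk A B x i) = alt_walk A B x (mate_B_index (walk_period A B x) i)"
proof -
  have "mate B (alt_walk A B x i) = alt_walk A B x (if odd i then Suc i else i + walk_period A B x - 1)"
    using mate_B_alt_walk_even[OF x, of i] mate_B_alt_walk_odd[OF x, of i] by (cases "even i") simp_all
  also have "\<dots> = alt_walk A B x (mate_B_index (walk_period A B x) i)" unfolding mate_B_index_def by (rule alt_walk_mod[OF x])
  finally show ?thesis .
qed

lemma reachable_in_range_alt_walk: assumes "x \<in> S" "(x,y) \<in> (adj A B)\<^sup>*" shows "y \<in> range (alt_walk A B x)"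
  using assms(2)
proof (induction rule: rtrancl_induct)
  case base
  show ?case by (metis rangeI alt_walk.simps(1))
next
  case (step y z)
  then obtain i where i: "y = alt_walk A B x i" by blast
  have "z = y \<or> z = mate A y \<or> z = mate B y" using adj_cases step(2) by blast
  then show ?case using mate_A_alt_walk[OF assms(1)] mate_B_alt_walk[OF assms(1)] i step(3) by auto
qed

lemma comp_of_eq_alt_walk: "x \<in> S \<Longrightarrow> comp_of S A B x = alt_walk A B x ` {..<walk_period A B x}"
proof -
  assume x: "x \<in> S"
  have "comp_of S A B x = range (alt_walk A B x)"
    unfolding comp_of_def using reachable_in_range_alt_walk[OF x] alt_walk_reachable[OF x] alt_walk_in[OF x] by auto
  then show ?thesis using range_alt_walk[OF x] by simp
qed

lemma card_comp_of: "x \<in> S \<Longrightarrow> card (comp_of S A B x) = walk_period A B x"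
  using comp_of_eq_alt_walk[of x] card_image[OF alt_walk_inj_on[of x]] by simp

lemma comp_of_self: "x \<in> S \<Longrightarrow> x \<in> comp_of S A B x"
  unfolding comp_of_def by simp

lemma comp_of_subset: "comp_of S A B x \<subseteq> S"
  unfolding comp_of_def by blast

lemma finite_comp_of: "finite (comp_of S A B x)"
  using comp_of_subset fin finite_subset by blast

lemma comp_of_eq: assumes "y \<in> comp_of S A B x" shows "comp_of S A B y = comp_of S A B x"
proof -
  have xy: "(x,y) \<in> (adj A B)\<^sup>*" using assms unfolding comp_of_def by blast
  have yx: "(y,x) \<in> (adj A B)\<^sup>*" using adj_rtrancl_sym[OF xy] .
  have "(y,z) \<in> (adj A B)\<^sup>* \<longleftrightarrow> (x,z) \<in> (adj A B)\<^sup>*" for z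
    using rtrancl_trans[OF xy, of z] rtrancl_trans[OF yx, of z] by blast
  then show ?thesis unfolding comp_of_def by simp
qed

lemma comp_of_disjoint: "comp_of S A B x \<inter> comp_of S A B y \<noteq> {} \<Longrightarrow> comp_of S A B x = comp_of S A B y"
proof -
  assume "comp_of S A B x \<inter> comp_of S A B y \<noteq> {}"
  then obtain z where z: "z \<in> comp_of S A B x" "z \<in> comp_of S A B y" by blast
  show ?thesis using comp_of_eq[OF z(1)] comp_of_eq[OF z(2)] by simp
qed

lemma comp_of_mate_A: "y \<in> comp_of S A B x \<Longrightarrow> mate A y \<in> comp_of S A B x"
proof -
  assume y: "y \<in> comp_of S A B x"
  then have yS: "y \<in> S" using comp_of_subset by blast
  have "(x, mate A y) \<in> (adj A B)\<^sup>*" using y adj_mate_A[OF yS] unfolding comp_of_def by auto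
  then show ?thesis unfolding comp_of_def using mate_in[OF mA yS] by blast
qed

lemma comp_of_mate_B: "y \<in> comp_of S A B x \<Longrightarrow> mate B y \<in> comp_of S A B x"
proof -
  assume y: "y \<in> comp_of S A B x"
  then have yS: "y \<in> S" using comp_of_subset by blast
  have "(x, mate B y) \<in> (adj A B)\<^sup>*" using y adj_mate_B[OF yS] unfolding comp_of_def by auto
  then show ?thesis unfolding comp_of_def using mate_in[OF mB yS] by blast
qed

lemma finite_comps: "finite (comp_of S A B ` S)" using fin by simp

lemma Union_comps: "\<Union>(comp_of S A B ` S) = S"
  using comp_of_subset comp_of_self by blast

lemma sum_mdist_on: "sum_mset (mdist_on S A B) = card S"
proof -
  have "sum_mset (mdist_on S A B) = sum card (comp_of S A B ` S)"
    unfolding mdist_on_def by (simp add: sum_unfold_sum_mset)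
  also have "\<dots> = card (\<Union>(comp_of S A B ` S))"
  proof (rule card_Union_disjoint[symmetric])
    show "pairwise disjnt (comp_of S A B ` S)"
      unfolding pairwise_def disjnt_def using comp_of_disjoint by blast
  qed (use finite_comp_of in auto)
  also have "\<dots> = card S" using Union_comps by simp
  finally show ?thesis .
qed

lemma mdist_on_member: "m \<in># mdist_on S A B \<Longrightarrow> even m \<and> 2 \<le> m"
proof -
  assume "m \<in># mdist_on S A B"
  then obtain x where x: "x \<in> S" "m = card (comp_of S A B x)" unfolding mdist_on_def using fin by auto
  then show ?thesis using card_comp_of walk_period_even walk_period_ge2 by simp
qed

lemma walk_period_eq_2_iff: assumes "x \<in> S" shows "walk_period A B x = 2 \<longleftrightarrow> mate A x = mate B x"
proof -
  have w2: "alt_walk A B x 2 = mate B (mate A x)"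
    by (simp add: numeral_2_eq_2 alt_walk_Suc walk_step_def)
  have "walk_period A B x = 2 \<longleftrightarrow> alt_walk A B x 2 = x"
  proof
    assume "walk_period A B x = 2" then show "alt_walk A B x 2 = x" using alt_walk_period[OF assms] by simp
  next
    assume "alt_walk A B x 2 = x"
    then have "walk_period A B x \<le> 2" unfolding walk_period_def by (intro Least_le) simp
    then show "walk_period A B x = 2" using walk_period_ge2[OF assms] by simp
  qed
  also have "\<dots> \<longleftrightarrow> mate A x = mate B x"
  proof
    assume h: "alt_walk A B x 2 = x"
    have "mate B x = mate B (mate B (mate A x))" using h w2 by simp
    also have "\<dots> = mate A x" using mate_mate[OF mB] mate_in[OF mA assms] by simp
    finally show "mate A x = mate B x" by simp
  next
    assume "mate A x = mate B x"
    then show "alt_walk A B x 2 = x" using w2 mate_mate[OF mB assms] by simp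
  qed
  finally show ?thesis .
qed

lemma comps_card_2_eq: "{C \<in> comp_of S A B ` S. card C = 2} = A \<inter> B"
proof
  show "{C \<in> comp_of S A B ` S. card C = 2} \<subseteq> A \<inter> B"
  proof
    fix C assume "C \<in> {C \<in> comp_of S A B ` S. card C = 2}"
    then obtain x where x: "x \<in> S" "C = comp_of S A B x" "card C = 2" by blast
    then have p2: "walk_period A B x = 2" using card_comp_of by simp
    then have e: "mate A x = mate B x" using walk_period_eq_2_iff[OF x(1)] by simp
    have "C = alt_walk A B x ` {..<2}" using comp_of_eq_alt_walk[OF x(1)] p2 x(2) by simp
    also have "{..<2::nat} = {0,1}" by auto
    finally have "C = {x, mate A x}" by (simp add: alt_walk_Suc walk_step_def)
    then show "C \<in> A \<inter> B" using mate_edge[OF mA x(1)] mate_edge[OF mB x(1)] e by simp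
  qed
next
  show "A \<inter> B \<subseteq> {C \<in> comp_of S A B ` S. card C = 2}"
  proof
    fix e assume e: "e \<in> A \<inter> B"
    obtain i j where ij: "i \<noteq> j" "e = {i,j}" using is_matching_edge_form[OF mA] e by blast
    have iS: "i \<in> S" using edge_subset[OF mA] e ij by blast
    have "e = {i, mate A i}" using edge_eq_mate[OF mA] e ij by blast
    moreover have "e = {i, mate B i}" using edge_eq_mate[OF mB] e ij by blast
    ultimately have eq: "mate A i = mate B i" using mate_neq[OF mA iS] mate_neq[OF mB iS]
      by (metis doubleton_eq_iff)
    then have p2: "walk_period A B i = 2" using walk_period_eq_2_iff[OF iS] by simp
    have "comp_of S A B i = alt_walk A B i ` {..<2}" using comp_of_eq_alt_walk[OF iS] p2 by simp
    also have "{..<2::nat} = {0,1}" by auto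
    finally have "comp_of S A B i = e" using \<open>e = {i, mate A i}\<close> by (simp add: alt_walk_Suc walk_step_def)
    then show "e \<in> {C \<in> comp_of S A B ` S. card C = 2}" using iS edge_card[OF mA] e by force
  qed
qed

lemma count_mdist_on_2: "count (mdist_on S A B) 2 = card (A \<inter> B)"
  unfolding mdist_on_def using count_image_mset_set[OF finite_comps, of card 2] comps_card_2_eq by simp

end

lemma (in mpair) bij_betw_alt_walk_comp_of:
  "x \<in> S \<Longrightarrow> bij_betw (alt_walk A B x) {..<walk_period A B x} (comp_of S A B x)"
  unfolding bij_betw_def using alt_walk_inj_on comp_of_eq_alt_walk by simp

section \<open>Pairs of matchings with equal \<open>d\<close> are isomorphic\<close>

locale mpair2 = c1: mpair S A B + c2: mpair S' A' B' for S A B S' A' B'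
begin

lemma act_eqI:
  assumes q: "bij_betw q S S'" and m1: "is_matching S M" and m2: "is_matching S' M'"
    and c: "\<And>y. y \<in> S \<Longrightarrow> q (mate M y) = mate M' (q y)"
  shows "act q M = M'"
proof -
  have "act q M = (\<lambda>e. q ` e) ` ((\<lambda>x. {x, mate M x}) ` S)" unfolding act_def using matching_eq_image_mate[OF m1] by simp
  also have "\<dots> = (\<lambda>x. {q x, mate M' (q x)}) ` S" using c by (auto simp: image_image)
  also have "\<dots> = (\<lambda>z. {z, mate M' z}) ` (q ` S)" by (auto simp: image_image)
  also have "\<dots> = M'" using matching_eq_image_mate[OF m2] q unfolding bij_betw_def by simp
  finally show ?thesis .
qed

text \<open>Both components are enumerated by their alternating walks, and the mates are read off
  from the walk index alone.\<close>

lemma comp_of_iso: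
  assumes x: "x \<in> S" and x': "x' \<in> S'" and P: "walk_period A' B' x' = walk_period A B x"
  obtains q where "bij_betw q (comp_of S A B x) (comp_of S' A' B' x')"
    "\<And>y. y \<in> comp_of S A B x \<Longrightarrow> q (mate A y) = mate A' (q y) \<and> q (mate B y) = mate B' (q y)"
proof -
  let ?P = "walk_period A B x"
  let ?w = "alt_walk A B x" and ?w' = "alt_walk A' B' x'"
  have b: "bij_betw ?w {..<?P} (comp_of S A B x)" by (rule c1.bij_betw_alt_walk_comp_of[OF x])
  have b': "bij_betw ?w' {..<?P} (comp_of S' A' B' x')" using c2.bij_betw_alt_walk_comp_of[OF x'] P by simp
  define q where "q = ?w' \<circ> inv_into {..<?P} ?w"
  have q: "q (?w i) = ?w' i" if "i < ?P" for i
    unfolding q_def using bij_betw_inv_into_left[OF b] that by simp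
  have pos: "0 < ?P" by (rule c1.walk_period_pos[OF x])
  have "q (mate A y) = mate A' (q y) \<and> q (mate B y) = mate B' (q y)" if y: "y \<in> comp_of S A B x" for y
  proof -
    obtain i where i: "i < ?P" "y = ?w i" using y c1.comp_of_eq_alt_walk[OF x] by auto
    show ?thesis
      using q[OF i(1)] q[OF mate_A_index_lt[OF pos]] q[OF mate_B_index_lt[OF pos]] i(2)
        c1.mate_A_alt_walk[OF x, of i] c1.mate_B_alt_walk[OF x, of i]
        c2.mate_A_alt_walk[OF x', of i] c2.mate_B_alt_walk[OF x', of i] P
      by simp
  qed
  moreover have "bij_betw q (comp_of S A B x) (comp_of S' A' B' x')"
    unfolding q_def by (rule bij_betw_trans[OF bij_betw_inv_into[OF b] b'])
  ultimately show ?thesis using that by blast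
qed

theorem mdist_on_eq_imp_iso:
  assumes md: "mdist_on S A B = mdist_on S' A' B'"
  shows "\<exists>q. bij_betw q S S' \<and> act q A = A' \<and> act q B = B'"
proof -
  let ?X = "comp_of S A B ` S" and ?X' = "comp_of S' A' B' ` S'"
  let ?comm = "\<lambda>C g. \<forall>y\<in>C. g (mate A y) = mate A' (g y) \<and> g (mate B y) = mate B' (g y)"
  obtain f where f: "bij_betw f ?X ?X'" "\<forall>C\<in>?X. card (f C) = card C"
    using image_mset_eq_imp_bij_betw[of ?X ?X' card card] c1.finite_comps c2.finite_comps md
    unfolding mdist_on_def by auto
  have "\<exists>g. bij_betw g C (f C) \<and> ?comm C g" if C: "C \<in> ?X" for C
  proof -
    obtain x where x: "x \<in> S" "C = comp_of S A B x" using C by blast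
    have "f C \<in> ?X'" using f(1) C by (auto simp: bij_betw_def)
    then obtain x' where x': "x' \<in> S'" "f C = comp_of S' A' B' x'" by blast
    have "walk_period A' B' x' = walk_period A B x"
      using f(2) C x x' c1.card_comp_of[OF x(1)] c2.card_comp_of[OF x'(1)] by metis
    then show ?thesis using comp_of_iso[OF x(1) x'(1)] x(2) x'(2) by metis
  qed
  then obtain g where g: "\<forall>C\<in>?X. bij_betw (g C) C (f C) \<and> ?comm C (g C)" by metis
  define q where "q y = g (comp_of S A B y) y" for y
  have bij: "bij_betw q S S'"
    unfolding q_def
  proof (rule bij_betw_glue[OF f(1)])
    show "\<Union>?X = S" "\<Union>?X' = S'" by (rule c1.Union_comps, rule c2.Union_comps)
    show "pairwise disjnt ?X'" using c2.comp_of_disjoint unfolding pairwise_def disjnt_def by blast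
  qed (use g c1.comp_of_self c1.comp_of_eq in auto)
  have "q (mate A y) = mate A' (q y) \<and> q (mate B y) = mate B' (q y)" if y: "y \<in> S" for y
  proof -
    have "comp_of S A B (mate A y) = comp_of S A B y" "comp_of S A B (mate B y) = comp_of S A B y"
      using c1.comp_of_eq c1.comp_of_mate_A c1.comp_of_mate_B c1.comp_of_self[OF y] by blast+
    then show ?thesis using g c1.comp_of_self[OF y] y unfolding q_def by auto
  qed
  then show ?thesis using act_eqI[OF bij c1.mA c2.mA] act_eqI[OF bij c1.mB c2.mB] bij by blast
qed

end

lemma is_matching_act: assumes m: "is_matching S A" and q: "inj_on q S" shows "is_matching (q ` S) (act q A)"
proof -
  have f: "\<forall>e\<in>act q A. \<exists>i j. i \<noteq> j \<and> e = {i,j}"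
  proof
    fix e' assume "e' \<in> act q A"
    then obtain e where e: "e \<in> A" "e' = q ` e" unfolding act_def by blast
    obtain i j where ij: "i \<noteq> j" "e = {i,j}" using is_matching_edge_form[OF m e(1)] by blast
    have "i \<in> S" "j \<in> S" using edge_subset[OF m e(1)] ij by auto
    then have "q i \<noteq> q j" using q ij(1) unfolding inj_on_def by blast
    then show "\<exists>i j. i \<noteq> j \<and> e' = {i,j}" using e ij by auto
  qed
  have c: "\<Union>(act q A) = q ` S" using is_matching_Union[OF m] unfolding act_def by blast
  have d: "\<forall>e\<in>act q A. \<forall>e'\<in>act q A. e \<noteq> e' \<longrightarrow> e \<inter> e' = {}"
  proof (intro ballI impI)
    fix e1 e2 assume e12: "e1 \<in> act q A" "e2 \<in> act q A" "e1 \<noteq> e2"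
    then obtain f1 f2 where ff: "f1 \<in> A" "f2 \<in> A" "e1 = q ` f1" "e2 = q ` f2" unfolding act_def by blast
    then have "f1 \<noteq> f2" using e12(3) by blast
    then have "f1 \<inter> f2 = {}" using is_matching_disjoint[OF m ff(1) ff(2)] by blast
    moreover have "f1 \<subseteq> S" "f2 \<subseteq> S" using edge_subset[OF m] ff by auto
    ultimately have "q ` f1 \<inter> q ` f2 = {}" using inj_on_image_Int[OF q, of f1 f2] by simp
    then show "e1 \<inter> e2 = {}" using ff by simp
  qed
  show ?thesis unfolding is_matching_def using f c d by blast
qed

lemma mate_act: assumes m: "is_matching S A" and q: "inj_on q S" and x: "x \<in> S"
  shows "mate (act q A) (q x) = q (mate A x)"
proof -
  have m': "is_matching (q ` S) (act q A)" by (rule is_matching_act[OF m q])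
  have "mate A x \<in> S" using mate_in[OF m x] .
  then have ne: "q (mate A x) \<noteq> q x" using mate_neq[OF m x] q x unfolding inj_on_def by metis
  have "q ` {x, mate A x} \<in> act q A" unfolding act_def using mate_edge[OF m x] by blast
  then have "{q x, q (mate A x)} \<in> act q A" by simp
  then show ?thesis using mate_eqI[OF m', of "q x" "q (mate A x)"] ne x by simp
qed

lemma act_inj: assumes q: "inj_on q S" and "M1 \<subseteq> Pow S" "M2 \<subseteq> Pow S" "act q M1 = act q M2"
  shows "M1 = M2"
proof -
  have i1: "inj_on (image q) (Pow S)" using inj_on_image_Pow[OF q] .
  have "inj_on (image (image q)) (Pow (Pow S))" using inj_on_image_Pow[OF i1] .
  then show ?thesis using assms(2-4) unfolding act_def inj_on_def by blast
qed

lemma act_comp: "act f (act g A) = act (f \<circ> g) A"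
  unfolding act_def by (auto simp: image_comp)

lemma matching_subset_Pow: "is_matching S A \<Longrightarrow> A \<subseteq> Pow S"
  using edge_subset by blast

lemma mpair_act: "mpair S A B \<Longrightarrow> inj_on q S \<Longrightarrow> mpair (q ` S) (act q A) (act q B)"
  unfolding mpair_def using is_matching_act by blast

context mpair begin

context fixes q :: "nat \<Rightarrow> nat" assumes q: "inj_on q S"
begin

lemma alt_walk_act: "x \<in> S \<Longrightarrow> alt_walk (act q A) (act q B) (q x) i = q (alt_walk A B x i)"
proof (induction i)
  case 0 then show ?case by simp
next
  case (Suc i)
  have w: "alt_walk A B x i \<in> S" using alt_walk_in[OF Suc.prems] .
  show ?case using Suc mate_act[OF mA q w] mate_act[OF mB q w] by (simp add: alt_walk.simps(2))
qed

lemma walk_period_act: assumes x: "x \<in> S" shows "walk_period (act q A) (act q B) (q x) = walk_period A B x"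
proof -
  have "(0 < p \<and> alt_walk (act q A) (act q B) (q x) p = q x) \<longleftrightarrow> (0 < p \<and> alt_walk A B x p = x)" for p
    using alt_walk_act[OF x, of p] q alt_walk_in[OF x, of p] x unfolding inj_on_def by metis
  then show ?thesis unfolding walk_period_def by simp
qed

lemma comp_of_act: assumes x: "x \<in> S"
  shows "comp_of (q ` S) (act q A) (act q B) (q x) = q ` comp_of S A B x"
proof -
  interpret m2: mpair "q ` S" "act q A" "act q B" using mpair_act[OF mpair_axioms q] .
  have qx: "q x \<in> q ` S" using x by blast
  have "comp_of (q ` S) (act q A) (act q B) (q x) = alt_walk (act q A) (act q B) (q x) ` {..<walk_period A B x}"
    using m2.comp_of_eq_alt_walk[OF qx] walk_period_act[OF x] by simp
  also have "\<dots> = q ` (alt_walk A B x ` {..<walk_period A B x})" using alt_walk_act[OF x] by (auto simp: image_image)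
  also have "\<dots> = q ` comp_of S A B x" using comp_of_eq_alt_walk[OF x] by simp
  finally show ?thesis .
qed

lemma mdist_on_act: "mdist_on (q ` S) (act q A) (act q B) = mdist_on S A B"
proof -
  have "comp_of (q ` S) (act q A) (act q B) ` (q ` S) = image q ` (comp_of S A B ` S)"
    using comp_of_act by (auto simp: image_image)
  moreover have inj: "inj_on (image q) (comp_of S A B ` S)"
    by (rule inj_on_subset[OF inj_on_image_Pow[OF q]]) (use comp_of_subset in auto)
  ultimately have "mset_set (comp_of (q ` S) (act q A) (act q B) ` (q ` S)) =
      image_mset (image q) (mset_set (comp_of S A B ` S))"
    using image_mset_mset_set[OF inj] by simp
  then have "mdist_on (q ` S) (act q A) (act q B) = image_mset (card \<circ> image q) (mset_set (comp_of S A B ` S))"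
    unfolding mdist_on_def by (simp add: multiset.map_comp)
  also have "\<dots> = image_mset card (mset_set (comp_of S A B ` S))"
  proof (rule image_mset_cong)
    fix C assume "C \<in># mset_set (comp_of S A B ` S)"
    then have "C \<subseteq> S" using comp_of_subset fin by auto
    then show "(card \<circ> image q) C = card C" using card_image[OF inj_on_subset[OF q]] by simp
  qed
  finally show ?thesis unfolding mdist_on_def .
qed

end
end

section \<open>Counting permutations carrying one matching to another\<close>

text \<open>With \<open>b\<close> set, only permutations moving a point of every edge of \<open>A\<close> are counted.\<close>

definition perm_count :: "nat multiset \<Rightarrow> bool \<Rightarrow> nat set \<Rightarrow> nat set set \<Rightarrow> nat set set \<Rightarrow> nat" where
  "perm_count mu b S A B = card {p. p permutes S \<and> filter_mset (\<lambda>l. 2 \<le> l) (cycle_type S p) = mu \<and> act p A = B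
       \<and> (b \<longrightarrow> (\<forall>e\<in>A. \<exists>x\<in>e. p x \<noteq> x))}"

lemma fop_eq_perm_count: "fop mu n A B = of_nat (perm_count mu False {1..2*n} A B)"
  unfolding fop_def perm_count_def by simp

lemma funpow_permutes_in: "p permutes S \<Longrightarrow> x \<in> S \<Longrightarrow> (p ^^ k) x \<in> S"
  by (induction k) (auto simp: permutes_in_image)

lemma cycle_type_transport:
  assumes q: "bij_betw q S S'" and p: "p permutes S" and fS: "finite S"
    and c: "\<And>x. x \<in> S \<Longrightarrow> c (q x) = q (p x)"
  shows "cycle_type S' c = cycle_type S p"
proof -
  have iq: "inj_on q S" using q by (simp add: bij_betw_def)
  have S': "S' = q ` S" using q by (simp add: bij_betw_def)
  define Ob where "Ob x = {(p ^^ k) x | k. True}" for x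
  have ck: "(c ^^ k) (q x) = q ((p ^^ k) x)" if "x \<in> S" for x k
    using that by (induction k) (auto simp: c funpow_permutes_in[OF p])
  have Osub: "Ob x \<subseteq> S" if "x \<in> S" for x using funpow_permutes_in[OF p that] unfolding Ob_def by blast
  have Oc: "{(c ^^ k) (q x) | k. True} = q ` Ob x" if "x \<in> S" for x
    using ck[OF that] unfolding Ob_def by auto
  have "(\<lambda>z. {(c ^^ k) z | k. True}) ` S' = image q ` (Ob ` S)"
    unfolding S' using Oc by (auto simp: image_image)
  moreover have inj: "inj_on (image q) (Ob ` S)"
    by (rule inj_on_subset[OF inj_on_image_Pow[OF iq]]) (use Osub in auto)
  ultimately have "mset_set ((\<lambda>z. {(c ^^ k) z | k. True}) ` S') = image_mset (image q) (mset_set (Ob ` S))"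
    using image_mset_mset_set[OF inj] by simp
  then have "cycle_type S' c = image_mset (card \<circ> image q) (mset_set (Ob ` S))"
    unfolding cycle_type_def by (simp add: multiset.map_comp)
  also have "\<dots> = image_mset card (mset_set (Ob ` S))"
  proof (rule image_mset_cong)
    fix C assume "C \<in># mset_set (Ob ` S)"
    then have "C \<subseteq> S" using Osub fS by auto
    then show "(card \<circ> image q) C = card C" using card_image[OF inj_on_subset[OF iq]] by simp
  qed
  finally show ?thesis unfolding cycle_type_def Ob_def by simp
qed

lemma act_transport:
  assumes A: "A \<subseteq> Pow S" and c: "\<And>x. x \<in> S \<Longrightarrow> c (q x) = q (p x)"
  shows "act c (act q A) = act q (act p A)"
proof -
  have "c ` (q ` e) = q ` (p ` e)" if "e \<in> A" for e
    using A that c by (force simp: image_image intro!: image_cong)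
  then show ?thesis unfolding act_def by (auto simp: image_image)
qed

lemma touching_transport:
  assumes q: "inj_on q S" and A: "A \<subseteq> Pow S" and p: "p permutes S"
    and c: "\<And>x. x \<in> S \<Longrightarrow> c (q x) = q (p x)"
  shows "(\<forall>e\<in>act q A. \<exists>x\<in>e. c x \<noteq> x) \<longleftrightarrow> (\<forall>e\<in>A. \<exists>x\<in>e. p x \<noteq> x)"
proof -
  have moved: "c (q x) \<noteq> q x \<longleftrightarrow> p x \<noteq> x" if "x \<in> S" for x
    using c[OF that] inj_on_eq_iff[OF q permutes_in_image[OF p, THEN iffD2, OF that] that] by simp
  have "(\<exists>x\<in>q ` e. c x \<noteq> x) \<longleftrightarrow> (\<exists>x\<in>e. p x \<noteq> x)" if "e \<in> A" for e
  proof -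
    have "e \<subseteq> S" using A that by blast
    then have "(\<exists>x\<in>e. c (q x) \<noteq> q x) \<longleftrightarrow> (\<exists>x\<in>e. p x \<noteq> x)" using moved by (intro bex_cong) auto
    then show ?thesis by simp
  qed
  then show ?thesis unfolding act_def by simp
qed

lemma perm_count_transport:
  assumes q: "bij_betw q S S'" and fS: "finite S" and AS: "A \<subseteq> Pow S" and BS: "B \<subseteq> Pow S"
  shows "perm_count mu b S' (act q A) (act q B) = perm_count mu b S A B"
proof -
  have iq: "inj_on q S" using q by (simp add: bij_betw_def)
  define cj where "cj = (\<lambda>\<pi> x. if x \<in> S' then q (\<pi> (inv_into S q x)) else x)"
  have bij: "bij_betw cj {\<pi>. \<pi> permutes S} {\<pi>. \<pi> permutes S'}"
    unfolding cj_def by (rule bij_betw_permutations[OF q])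
  have c: "cj p (q x) = q (p x)" if "x \<in> S" for p x
    unfolding cj_def using that iq q by (auto simp: bij_betw_def)
  have a: "act (cj p) (act q A) = act q B \<longleftrightarrow> act p A = B" if p: "p permutes S" for p
  proof -
    have "act p A \<subseteq> Pow S" using AS permutes_in_image[OF p] unfolding act_def by blast
    then show ?thesis using act_transport[where c="cj p" and q=q and p=p, OF AS c[where p=p]] act_inj[OF iq _ BS] by metis
  qed
  have ct: "cycle_type S' (cj p) = cycle_type S p" if "p permutes S" for p
    by (rule cycle_type_transport[where c="cj p", OF q that fS c[where p=p]])
  have t: "(\<forall>e\<in>act q A. \<exists>x\<in>e. cj p x \<noteq> x) \<longleftrightarrow> (\<forall>e\<in>A. \<exists>x\<in>e. p x \<noteq> x)"
    if "p permutes S" for p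
    by (rule touching_transport[where c="cj p", OF iq AS that c[where p=p]])
  have "card {p' \<in> {\<pi>. \<pi> permutes S'}. filter_mset (\<lambda>l. 2 \<le> l) (cycle_type S' p') = mu
        \<and> act p' (act q A) = act q B \<and> (b \<longrightarrow> (\<forall>e\<in>act q A. \<exists>x\<in>e. p' x \<noteq> x))}
      = card {p \<in> {\<pi>. \<pi> permutes S}. filter_mset (\<lambda>l. 2 \<le> l) (cycle_type S p) = mu
        \<and> act p A = B \<and> (b \<longrightarrow> (\<forall>e\<in>A. \<exists>x\<in>e. p x \<noteq> x))}"
    using a ct t by (intro card_bij_betw_Collect[OF bij]) simp
  then show ?thesis unfolding perm_count_def by simp
qed

context fixes p :: "nat \<Rightarrow> nat" and S :: "nat set"
  assumes p: "p permutes S" and fS: "finite S"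
begin

lemma permutation_p: "permutation p" using p fS permutation_permutes by blast

lemma orbit_eq_funpow_set: "{(p ^^ k) x | k. True} = orbit p x"
  using orbit_altdef_permutation[OF permutation_p] by simp

lemma orbit_subset: "x \<in> S \<Longrightarrow> orbit p x \<subseteq> S"
  using permutes_orbit_subset[OF p] .

lemma orbit_self: "x \<in> orbit p x"
  using permutation_self_in_orbit[OF permutation_p] .

lemma orbit_eq_of_mem: "y \<in> orbit p x \<Longrightarrow> orbit p y = orbit p x"
  by (rule orbit_cyclic_eq3[OF cyclic_on_orbit[OF p fS, of x]])

lemma orbit_finite: "finite (orbit p x)"
  using finite_orbit[OF orbit_self] .

lemma orbit_disjoint: "orbit p x \<inter> orbit p y \<noteq> {} \<Longrightarrow> orbit p x = orbit p y"
proof -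
  assume "orbit p x \<inter> orbit p y \<noteq> {}"
  then obtain z where "z \<in> orbit p x" "z \<in> orbit p y" by blast
  then show ?thesis using orbit_eq_of_mem[of z x] orbit_eq_of_mem[of z y] by simp
qed

lemma cycle_type_eq_orbits: "cycle_type S p = image_mset card (mset_set (orbit p ` S))"
  unfolding cycle_type_def orbit_eq_funpow_set ..

lemma sum_cycle_type: "sum_mset (cycle_type S p) = card S"
proof -
  have "sum_mset (cycle_type S p) = sum card (orbit p ` S)"
    unfolding cycle_type_eq_orbits by (simp add: sum_unfold_sum_mset)
  also have "\<dots> = card (\<Union>(orbit p ` S))"
  proof (rule card_Union_disjoint[symmetric])
    show "pairwise disjnt (orbit p ` S)"
      unfolding pairwise_def disjnt_def using orbit_disjoint by blast
  qed (use fS orbit_finite in auto)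
  also have "\<Union>(orbit p ` S) = S" using orbit_subset orbit_self by blast
  finally show ?thesis .
qed

lemma cycle_type_pos: "m \<in># cycle_type S p \<Longrightarrow> 1 \<le> m"
proof -
  assume "m \<in># cycle_type S p"
  then obtain x where "m = card (orbit p x)" unfolding cycle_type_eq_orbits using fS by auto
  then show ?thesis using orbit_finite[of x] orbit_self[of x] by (auto simp: card_gt_0_iff Suc_le_eq)
qed

lemma card_orbit_ge2_iff: "2 \<le> card (orbit p x) \<longleftrightarrow> p x \<noteq> x"
proof
  assume c: "2 \<le> card (orbit p x)"
  show "p x \<noteq> x"
  proof
    assume "p x = x"
    then have "orbit p x = {x}" using orbit_eq_singleton_iff[of p x] by simp
    then show False using c by simp
  qed
next
  assume ne: "p x \<noteq> x"
  have "{x, p x} \<subseteq> orbit p x" using orbit_self orbit.base by auto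
  then have "card {x, p x} \<le> card (orbit p x)" using card_mono orbit_finite by blast
  then show "2 \<le> card (orbit p x)" using ne by simp
qed

lemma sum_nontrivial_cycle_type: "sum_mset (filter_mset (\<lambda>l. 2 \<le> l) (cycle_type S p)) = card {x\<in>S. p x \<noteq> x}"
proof -
  define OS where "OS = orbit p ` S"
  have fOS: "finite OS" unfolding OS_def using fS by simp
  have "filter_mset (\<lambda>l. 2 \<le> l) (cycle_type S p) = image_mset card (mset_set {ob\<in>OS. 2 \<le> card ob})"
    unfolding cycle_type_eq_orbits OS_def[symmetric] filter_mset_image_mset using fOS by simp
  then have "sum_mset (filter_mset (\<lambda>l. 2 \<le> l) (cycle_type S p)) = sum card {ob\<in>OS. 2 \<le> card ob}"
    by (simp add: sum_unfold_sum_mset)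
  also have "\<dots> = card (\<Union>{ob\<in>OS. 2 \<le> card ob})"
  proof (rule card_Union_disjoint[symmetric])
    show "pairwise disjnt {ob\<in>OS. 2 \<le> card ob}"
      unfolding pairwise_def disjnt_def OS_def using orbit_disjoint by blast
  qed (use fOS orbit_finite OS_def in auto)
  also have "\<Union>{ob\<in>OS. 2 \<le> card ob} = {x\<in>S. p x \<noteq> x}"
  proof
    show "\<Union>{ob\<in>OS. 2 \<le> card ob} \<subseteq> {x\<in>S. p x \<noteq> x}"
    proof
      fix y assume "y \<in> \<Union>{ob\<in>OS. 2 \<le> card ob}"
      then obtain x where x: "x \<in> S" "y \<in> orbit p x" "2 \<le> card (orbit p x)" unfolding OS_def by blast
      have yS: "y \<in> S" using orbit_subset[OF x(1)] x(2) by blast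
      have "orbit p y = orbit p x" using orbit_eq_of_mem[OF x(2)] .
      then have "p y \<noteq> y" using card_orbit_ge2_iff[of y] x(3) by simp
      then show "y \<in> {x\<in>S. p x \<noteq> x}" using yS by simp
    qed
  next
    show "{x\<in>S. p x \<noteq> x} \<subseteq> \<Union>{ob\<in>OS. 2 \<le> card ob}"
    proof
      fix y assume y: "y \<in> {x\<in>S. p x \<noteq> x}"
      then have "2 \<le> card (orbit p y)" using card_orbit_ge2_iff by simp
      then show "y \<in> \<Union>{ob\<in>OS. 2 \<le> card ob}" using y orbit_self unfolding OS_def by blast
    qed
  qed
  finally show ?thesis .
qed

lemma nontrivial_cycle_type_eq_iff:
  assumes "\<forall>x\<in>#mu. 2 \<le> x" "sum_mset mu \<le> card S"
  shows "filter_mset (\<lambda>l. 2 \<le> l) (cycle_type S p) = mu \<longleftrightarrow> cycle_type S p = pad1 mu (card S)"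
proof -
  define c where "c = cycle_type S p"
  have split: "c = filter_mset (\<lambda>l. 2 \<le> l) c + filter_mset (\<lambda>l. \<not> 2 \<le> l) c"
    by (simp add: multiset_partition)
  have ones: "filter_mset (\<lambda>l. \<not> 2 \<le> l) c = replicate_mset (count c 1) 1"
  proof (rule multiset_eqI)
    fix a
    show "count (filter_mset (\<lambda>l. \<not> 2 \<le> l) c) a = count (replicate_mset (count c 1) 1) a"
    proof (cases "a = 1")
      case True then show ?thesis by simp
    next
      case False
      have "a \<in># c \<Longrightarrow> 1 \<le> a" using cycle_type_pos unfolding c_def by blast
      then show ?thesis using False by (cases "a \<in># c") (auto simp: not_in_iff)
    qed
  qed
  have sc: "sum_mset c = card S" unfolding c_def by (rule sum_cycle_type)
  show ?thesis
  proof
    assume h: "filter_mset (\<lambda>l. 2 \<le> l) (cycle_type S p) = mu"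
    have "sum_mset c = sum_mset (filter_mset (\<lambda>l. 2 \<le> l) c + filter_mset (\<lambda>l. \<not> 2 \<le> l) c)"
      using arg_cong[OF split, of sum_mset] .
    also have "\<dots> = sum_mset (filter_mset (\<lambda>l. 2 \<le> l) c) + sum_mset (filter_mset (\<lambda>l. \<not> 2 \<le> l) c)"
      by (rule sum_mset.union)
    also have "\<dots> = sum_mset mu + count c 1" using ones h unfolding c_def by simp
    finally have "card S = sum_mset mu + count c 1" using sc by simp
    then have "count c 1 = card S - sum_mset mu" by simp
    then show "cycle_type S p = pad1 mu (card S)" using split ones h unfolding c_def pad1_def by simp
  next
    assume h: "cycle_type S p = pad1 mu (card S)"
    have "filter_mset (\<lambda>l. 2 \<le> l) mu = mu" using assms(1) by (simp add: filter_mset_eq_conv)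
    moreover have "filter_mset (\<lambda>l. 2 \<le> l) (replicate_mset k (1::nat)) = {#}" for k
      by (induction k) auto
    ultimately show "filter_mset (\<lambda>l. 2 \<le> l) (cycle_type S p) = mu" using h unfolding pad1_def by simp
  qed
qed

end

lemma cycle_type_superset:
  assumes p: "p permutes U" and US: "U \<subseteq> S" and fS: "finite S"
  shows "cycle_type S p = cycle_type U p + replicate_mset (card (S - U)) 1"
proof -
  have fU: "finite U" using US fS finite_subset by blast
  have pS: "p permutes S" using permutes_subset[OF p US] .
  have e1: "cycle_type S p = image_mset card (mset_set (orbit p ` S))" using cycle_type_eq_orbits[OF pS fS] .
  have e2: "cycle_type U p = image_mset card (mset_set (orbit p ` U))" using cycle_type_eq_orbits[OF p fU] .
  have fx: "p x = x" if "x \<notin> U" for x using p that unfolding permutes_def by blast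
  have sing: "orbit p x = {x}" if "x \<notin> U" for x using fx[OF that] orbit_eq_singleton_iff[of p x] by simp
  have "orbit p ` S = orbit p ` U \<union> orbit p ` (S - U)" using US by blast
  moreover have "orbit p ` (S - U) = (\<lambda>x. {x}) ` (S - U)" using sing by auto
  moreover have "orbit p ` U \<inter> (\<lambda>x. {x}) ` (S - U) = {}"
  proof -
    have "orbit p x \<subseteq> U" if "x \<in> U" for x using orbit_subset[OF p fU that] .
    then show ?thesis by auto
  qed
  ultimately have "mset_set (orbit p ` S) = mset_set (orbit p ` U) + mset_set ((\<lambda>x. {x}) ` (S - U))"
    using mset_set_Union[of "orbit p ` U" "(\<lambda>x. {x}) ` (S - U)"] fU fS by simp
  moreover have "image_mset card (mset_set ((\<lambda>x. {x}) ` (S - U))) = replicate_mset (card (S - U)) 1"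
  proof -
    have "inj_on (\<lambda>x. {x}) (S - U)" by (auto simp: inj_on_def)
    then have "mset_set ((\<lambda>x. {x}) ` (S - U)) = image_mset (\<lambda>x. {x}) (mset_set (S - U))"
      using image_mset_mset_set[of "\<lambda>x. {x}" "S - U"] by simp
    then have "image_mset card (mset_set ((\<lambda>x. {x}) ` (S - U))) = image_mset (\<lambda>x. 1) (mset_set (S - U))"
      by (simp add: multiset.map_comp comp_def)
    also have "\<dots> = replicate_mset (card (S - U)) 1" by (simp add: image_mset_const_eq)
    finally show ?thesis .
  qed
  ultimately show ?thesis using e1 e2 by simp
qed

lemma nontrivial_cycle_type_superset:
  assumes p: "p permutes U" and US: "U \<subseteq> S" and fS: "finite S"
  shows "filter_mset (\<lambda>l. 2 \<le> l) (cycle_type S p) = filter_mset (\<lambda>l. 2 \<le> l) (cycle_type U p)"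
proof -
  have "filter_mset (\<lambda>l. 2 \<le> l) (replicate_mset k (1::nat)) = {#}" for k
    by (induction k) auto
  then show ?thesis using cycle_type_superset[OF assms] by simp
qed

lemma is_matching_Un: assumes m1: "is_matching S1 A1" and m2: "is_matching S2 A2" and dj: "S1 \<inter> S2 = {}"
  shows "is_matching (S1 \<union> S2) (A1 \<union> A2)"
proof -
  have "e \<inter> e' = {}" if "e \<in> A1" "e' \<in> A2" for e e'
    using that edge_subset[OF m1] edge_subset[OF m2] dj by blast
  then show ?thesis using m1 m2 unfolding is_matching_def by (metis Int_commute Un_iff Union_Un_distrib)
qed

lemma mate_Un: assumes m1: "is_matching S1 A1" and m2: "is_matching S2 A2" and dj: "S1 \<inter> S2 = {}" and x: "x \<in> S1"
  shows "mate (A1 \<union> A2) x = mate A1 x"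
proof (rule mate_eqI[OF is_matching_Un[OF m1 m2 dj]])
  show "x \<in> S1 \<union> S2" using x by simp
  show "mate A1 x \<noteq> x" using mate_neq[OF m1 x] .
  show "{x, mate A1 x} \<in> A1 \<union> A2" using mate_edge[OF m1 x] by simp
qed

locale mpair_Un = m1: mpair S1 A1 B1 + m2: mpair S2 A2 B2 for S1 A1 B1 S2 A2 B2 +
  assumes dj: "S1 \<inter> S2 = {}"
begin

lemma dj_sym: "S2 \<inter> S1 = {}" using dj by blast

lemma mpair_union: "mpair (S1 \<union> S2) (A1 \<union> A2) (B1 \<union> B2)"
  unfolding mpair_def using m1.fin m2.fin is_matching_Un[OF m1.mA m2.mA dj] is_matching_Un[OF m1.mB m2.mB dj] by simp

lemma mate_A_Un1: "x \<in> S1 \<Longrightarrow> mate (A1 \<union> A2) x = mate A1 x" using mate_Un[OF m1.mA m2.mA dj] .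
lemma mate_B_Un1: "x \<in> S1 \<Longrightarrow> mate (B1 \<union> B2) x = mate B1 x" using mate_Un[OF m1.mB m2.mB dj] .
lemma mate_A_Un2: "x \<in> S2 \<Longrightarrow> mate (A1 \<union> A2) x = mate A2 x" using mate_Un[OF m2.mA m1.mA dj_sym] by (simp add: Un_commute)
lemma mate_B_Un2: "x \<in> S2 \<Longrightarrow> mate (B1 \<union> B2) x = mate B2 x" using mate_Un[OF m2.mB m1.mB dj_sym] by (simp add: Un_commute)

lemma alt_walk_Un1: "x \<in> S1 \<Longrightarrow> alt_walk (A1 \<union> A2) (B1 \<union> B2) x i = alt_walk A1 B1 x i"
proof (induction i)
  case 0 then show ?case by simp
next
  case (Suc i)
  have w: "alt_walk A1 B1 x i \<in> S1" using m1.alt_walk_in[OF Suc.prems] .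
  show ?case using Suc mate_A_Un1[OF w] mate_B_Un1[OF w] by (simp add: alt_walk.simps(2))
qed

lemma alt_walk_Un2: "x \<in> S2 \<Longrightarrow> alt_walk (A1 \<union> A2) (B1 \<union> B2) x i = alt_walk A2 B2 x i"
proof (induction i)
  case 0 then show ?case by simp
next
  case (Suc i)
  have w: "alt_walk A2 B2 x i \<in> S2" using m2.alt_walk_in[OF Suc.prems] .
  show ?case using Suc mate_A_Un2[OF w] mate_B_Un2[OF w] by (simp add: alt_walk.simps(2))
qed

lemma walk_period_Un1: "x \<in> S1 \<Longrightarrow> walk_period (A1 \<union> A2) (B1 \<union> B2) x = walk_period A1 B1 x"
  unfolding walk_period_def using alt_walk_Un1 by simp
lemma walk_period_Un2: "x \<in> S2 \<Longrightarrow> walk_period (A1 \<union> A2) (B1 \<union> B2) x = walk_period A2 B2 x"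
  unfolding walk_period_def using alt_walk_Un2 by simp

lemma comp_of_Un1: assumes x: "x \<in> S1"
  shows "comp_of (S1 \<union> S2) (A1 \<union> A2) (B1 \<union> B2) x = comp_of S1 A1 B1 x"
proof -
  interpret u: mpair "S1 \<union> S2" "A1 \<union> A2" "B1 \<union> B2" by (rule mpair_union)
  have "comp_of (S1 \<union> S2) (A1 \<union> A2) (B1 \<union> B2) x = alt_walk (A1 \<union> A2) (B1 \<union> B2) x ` {..<walk_period (A1 \<union> A2) (B1 \<union> B2) x}"
    using u.comp_of_eq_alt_walk x by simp
  also have "\<dots> = alt_walk A1 B1 x ` {..<walk_period A1 B1 x}" using walk_period_Un1[OF x] alt_walk_Un1[OF x] by simp
  also have "\<dots> = comp_of S1 A1 B1 x" using m1.comp_of_eq_alt_walk[OF x] by simp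
  finally show ?thesis .
qed

lemma comp_of_Un2: assumes x: "x \<in> S2"
  shows "comp_of (S1 \<union> S2) (A1 \<union> A2) (B1 \<union> B2) x = comp_of S2 A2 B2 x"
proof -
  interpret u: mpair "S1 \<union> S2" "A1 \<union> A2" "B1 \<union> B2" by (rule mpair_union)
  have "comp_of (S1 \<union> S2) (A1 \<union> A2) (B1 \<union> B2) x = alt_walk (A1 \<union> A2) (B1 \<union> B2) x ` {..<walk_period (A1 \<union> A2) (B1 \<union> B2) x}"
    using u.comp_of_eq_alt_walk x by simp
  also have "\<dots> = alt_walk A2 B2 x ` {..<walk_period A2 B2 x}" using walk_period_Un2[OF x] alt_walk_Un2[OF x] by simp
  also have "\<dots> = comp_of S2 A2 B2 x" using m2.comp_of_eq_alt_walk[OF x] by simp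
  finally show ?thesis .
qed

lemma mdist_on_Un: "mdist_on (S1 \<union> S2) (A1 \<union> A2) (B1 \<union> B2) = mdist_on S1 A1 B1 + mdist_on S2 A2 B2"
proof -
  have e: "comp_of (S1 \<union> S2) (A1 \<union> A2) (B1 \<union> B2) ` (S1 \<union> S2) = comp_of S1 A1 B1 ` S1 \<union> comp_of S2 A2 B2 ` S2"
    using comp_of_Un1 comp_of_Un2 by (auto simp: image_Un)
  have d: "comp_of S1 A1 B1 ` S1 \<inter> comp_of S2 A2 B2 ` S2 = {}"
  proof -
    have "C \<noteq> D" if CD: "C \<in> comp_of S1 A1 B1 ` S1" "D \<in> comp_of S2 A2 B2 ` S2" for C D
    proof -
      obtain x where x: "x \<in> S1" "C = comp_of S1 A1 B1 x" using CD(1) by blast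
      have "x \<in> C" "C \<subseteq> S1" using x m1.comp_of_self m1.comp_of_subset by auto
      moreover have "D \<subseteq> S2" using CD(2) m2.comp_of_subset by blast
      ultimately show ?thesis using dj by blast
    qed
    then show ?thesis by blast
  qed
  show ?thesis unfolding mdist_on_def e
    using mset_set_Union[OF m1.finite_comps m2.finite_comps d] by simp
qed

end

lemma mdist_on_self: assumes m: "is_matching S A" and f: "finite S"
  shows "mdist_on S A A = replicate_mset (card A) 2"
proof -
  interpret mpair S A A using m f by (simp add: mpair_def)
  have c2: "card C = 2" if CC: "C \<in> comp_of S A A ` S" for C
  proof -
    obtain x where x: "x \<in> S" "C = comp_of S A A x" using CC by blast
    have "walk_period A A x = 2" using walk_period_eq_2_iff[OF x(1)] by simp
    then show ?thesis using card_comp_of[OF x(1)] x(2) by simp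
  qed
  have "comp_of S A A ` S = {C \<in> comp_of S A A ` S. card C = 2}" using c2 by blast
  also have "\<dots> = A" using comps_card_2_eq by simp
  finally have e: "comp_of S A A ` S = A" .
  have "mdist_on S A A = image_mset card (mset_set A)" unfolding mdist_on_def e ..
  also have "\<dots> = image_mset (\<lambda>_. 2) (mset_set A)"
    by (rule image_mset_cong) (use edge_card[OF m] finite_matching[OF m f] in auto)
  also have "\<dots> = replicate_mset (card A) 2" by (simp add: image_mset_const_eq)
  finally show ?thesis .
qed

lemma matching_split:
  assumes m: "mpair S A B" and W: "W \<subseteq> A" and AW: "A - W \<subseteq> B"
  shows "is_matching (\<Union>W) W" "is_matching (\<Union>W) (B - (A - W))" "is_matching (\<Union>(A - W)) (A - W)"
    "\<Union>W \<inter> \<Union>(A - W) = {}" "\<Union>W \<union> \<Union>(A - W) = S"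
proof -
  interpret mpair S A B by (rule m)
  show d: "\<Union>W \<inter> \<Union>(A - W) = {}" using Union_disjoint_edges[OF mA W] by blast
  show c: "\<Union>W \<union> \<Union>(A - W) = S" using W is_matching_Union[OF mA] by blast
  show "is_matching (\<Union>W) W" by (rule is_matching_subset[OF mA W])
  show "is_matching (\<Union>(A - W)) (A - W)" by (rule is_matching_subset[OF mA]) blast
  have "\<Union>(B - (A - W)) \<inter> \<Union>(A - W) = {}" using Union_disjoint_edges[OF mB _ AW] by blast
  moreover have "\<Union>(B - (A - W)) \<union> \<Union>(A - W) = S" using AW is_matching_Union[OF mB] by blast
  ultimately have "\<Union>(B - (A - W)) = \<Union>W" using c d by blast
  then show "is_matching (\<Union>W) (B - (A - W))" using is_matching_subset[OF mB, of "B - (A - W)"] by simp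
qed

lemma mdist_on_split:
  assumes m: "mpair S A B" and W: "W \<subseteq> A" and AW: "A - W \<subseteq> B"
  shows "mdist_on S A B = mdist_on (\<Union>W) W (B - (A - W)) + mdist_on (\<Union>(A - W)) (A - W) (A - W)"
    "mpair (\<Union>W) W (B - (A - W))"
proof -
  note ss = matching_split[OF m W AW]
  have fS: "finite S" using m mpair_def by blast
  have f1: "finite (\<Union>W)" using ss(5) fS finite_subset by blast
  have f2: "finite (\<Union>(A - W))" using ss(5) fS finite_subset by blast
  show m1: "mpair (\<Union>W) W (B - (A - W))" unfolding mpair_def using f1 ss(1,2) by simp
  have m2: "mpair (\<Union>(A - W)) (A - W) (A - W)" unfolding mpair_def using f2 ss(3) by simp
  interpret mpair_Un "\<Union>W" W "B - (A - W)" "\<Union>(A - W)" "A - W" "A - W"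
    unfolding mpair_Un_def mpair_Un_axioms_def using m1 m2 ss(4) by simp
  have "W \<union> (A - W) = A" using W by blast
  moreover have "B - (A - W) \<union> (A - W) = B" using AW by blast
  ultimately show "mdist_on S A B = mdist_on (\<Union>W) W (B - (A - W)) + mdist_on (\<Union>(A - W)) (A - W) (A - W)"
    using mdist_on_Un ss(5) by simp
qed

section \<open>Matchings with prescribed component sizes\<close>

lemma is_matching_Imatch: "is_matching {1..2*s} (Imatch s)"
proof -
  have f: "\<forall>e\<in>Imatch s. \<exists>i j. i \<noteq> j \<and> e = {i,j}"
  proof
    fix e assume "e \<in> Imatch s"
    then obtain i where i: "e = {i, s + i}" "i \<in> {1..s}" unfolding Imatch_def by blast
    then have "i \<noteq> s + i" by simp
    then show "\<exists>i j. i \<noteq> j \<and> e = {i,j}" using i(1) by blast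
  qed
  have c: "\<Union>(Imatch s) = {1..2*s}"
  proof
    show "\<Union>(Imatch s) \<subseteq> {1..2*s}" unfolding Imatch_def by auto
    show "{1..2*s} \<subseteq> \<Union>(Imatch s)"
    proof
      fix x assume x: "x \<in> {1..2*s}"
      show "x \<in> \<Union>(Imatch s)"
      proof (cases "x \<le> s")
        case True then have "{x, s + x} \<in> Imatch s" using x unfolding Imatch_def by auto
        then show ?thesis by blast
      next
        case False then have "{x - s, s + (x - s)} \<in> Imatch s" using x unfolding Imatch_def by auto
        moreover have "s + (x - s) = x" using False by simp
        ultimately have "{x - s, x} \<in> Imatch s" by simp
        then show ?thesis by blast
      qed
    qed
  qed
  have d: "\<forall>e\<in>Imatch s. \<forall>e'\<in>Imatch s. e \<noteq> e' \<longrightarrow> e \<inter> e' = {}"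
  proof (intro ballI impI)
    fix e e' assume e: "e \<in> Imatch s" and e': "e' \<in> Imatch s" and ne: "e \<noteq> e'"
    obtain i where i: "e = {i, s + i}" "i \<in> {1..s}" using e unfolding Imatch_def by blast
    obtain j where j: "e' = {j, s + j}" "j \<in> {1..s}" using e' unfolding Imatch_def by blast
    have "i \<noteq> j" using ne i j by blast
    then show "e \<inter> e' = {}" using i j by auto
  qed
  show ?thesis unfolding is_matching_def using f c d by blast
qed

lemma card_Imatch: "card (Imatch s) = s"
  using card_carrier_matching[OF is_matching_Imatch, of s] by simp

definition cycle_A :: "nat \<Rightarrow> nat set set" where
  "cycle_A t = (\<lambda>i. {2*i, 2*i+1}) ` {..<t}"

definition cycle_B :: "nat \<Rightarrow> nat set set" where
  "cycle_B t = act (\<lambda>x. Suc x mod (2*t)) (cycle_A t)"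

lemma is_matching_cycle_A: "is_matching {..<2*t} (cycle_A t)"
proof -
  have f: "\<forall>e\<in>cycle_A t. \<exists>i j. i \<noteq> j \<and> e = {i,j}"
  proof
    fix e assume "e \<in> cycle_A t"
    then obtain i where i: "e = {2*i, 2*i+1}" unfolding cycle_A_def by blast
    have "2*i \<noteq> 2*i+1" by simp
    then show "\<exists>i j. i \<noteq> j \<and> e = {i,j}" using i by blast
  qed
  have c: "\<Union>(cycle_A t) = {..<2*t}"
  proof
    show "\<Union>(cycle_A t) \<subseteq> {..<2*t}" unfolding cycle_A_def by auto
    show "{..<2*t} \<subseteq> \<Union>(cycle_A t)"
    proof
      fix x assume x: "x \<in> {..<2*t}"
      define i where "i = x div 2"
      have "i < t" using x i_def by auto
      moreover have "x = 2*i \<or> x = 2*i+1" using i_def by presburger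
      ultimately show "x \<in> \<Union>(cycle_A t)" unfolding cycle_A_def by blast
    qed
  qed
  have d: "\<forall>e\<in>cycle_A t. \<forall>e'\<in>cycle_A t. e \<noteq> e' \<longrightarrow> e \<inter> e' = {}"
  proof (intro ballI impI)
    fix e e' assume e: "e \<in> cycle_A t" and e': "e' \<in> cycle_A t" and ne: "e \<noteq> e'"
    obtain i where i: "e = {2*i, 2*i+1}" using e unfolding cycle_A_def by blast
    obtain j where j: "e' = {2*j, 2*j+1}" using e' unfolding cycle_A_def by blast
    have "i \<noteq> j" using ne i j by blast
    then show "e \<inter> e' = {}" using i j by (auto; presburger)
  qed
  show ?thesis unfolding is_matching_def using f c d by blast
qed

lemma bij_betw_Suc_mod: "bij_betw (\<lambda>x. Suc x mod m) {..<m} {..<m}"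
proof -
  have inj: "inj_on (\<lambda>x. Suc x mod m) {..<m}"
    by (rule inj_onI) (auto simp: mod_if split: if_splits)
  have "(\<lambda>x. Suc x mod m) ` {..<m} \<subseteq> {..<m}" by auto
  then show ?thesis using endo_inj_surj[OF finite_lessThan _ inj] inj unfolding bij_betw_def by blast
qed

lemma is_matching_cycle_B: "is_matching {..<2*t} (cycle_B t)"
  using is_matching_act[OF is_matching_cycle_A, of "\<lambda>x. Suc x mod (2*t)" t] bij_betw_Suc_mod[of "2*t"]
  unfolding cycle_B_def bij_betw_def by simp

lemma mpair_cycle: "mpair {..<2*t} (cycle_A t) (cycle_B t)"
  unfolding mpair_def using is_matching_cycle_A is_matching_cycle_B by simp

lemma alt_walk_cycle: "j < 2*t \<Longrightarrow> alt_walk (cycle_A t) (cycle_B t) 0 j = j"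
proof (induction j)
  case 0 then show ?case by simp
next
  case (Suc j)
  have IH: "alt_walk (cycle_A t) (cycle_B t) 0 j = j" using Suc by simp
  show ?case
  proof (cases "even j")
    case True
    define i where "i = j div 2"
    have ji: "j = 2*i" using True i_def by simp
    have "mate (cycle_A t) j = j + 1"
    proof (rule mate_eqI[OF is_matching_cycle_A])
      show "j \<in> {..<2*t}" using Suc.prems by simp
      show "j + 1 \<noteq> j" by simp
      have "i < t" using Suc.prems ji by simp
      then show "{j, j + 1} \<in> cycle_A t" unfolding cycle_A_def using ji by blast
    qed
    then show ?thesis using IH True by (simp add: alt_walk.simps(2))
  next
    case False
    define i where "i = j div 2"
    have ji: "j = 2*i+1" using False i_def by presburger
    have "mate (cycle_B t) j = j + 1"
    proof (rule mate_eqI[OF is_matching_cycle_B])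
      show "j \<in> {..<2*t}" using Suc.prems by simp
      show "j + 1 \<noteq> j" by simp
      have "{j, j + 1} = (\<lambda>x. Suc x mod (2*t)) ` {2*i, 2*i+1}" using Suc.prems ji by auto
      moreover have "i < t" using Suc.prems ji by simp
      ultimately show "{j, j + 1} \<in> cycle_B t" unfolding cycle_B_def act_def cycle_A_def by blast
    qed
    then show ?thesis using IH False by (simp add: alt_walk.simps(2))
  qed
qed

lemma mdist_on_cycle: assumes t: "1 \<le> t" shows "mdist_on {..<2*t} (cycle_A t) (cycle_B t) = {#2*t#}"
proof -
  interpret mpair "{..<2*t}" "cycle_A t" "cycle_B t" using mpair_cycle .
  have z: "0 \<in> {..<2*t}" using t by simp
  have sub: "{..<2*t} \<subseteq> comp_of {..<2*t} (cycle_A t) (cycle_B t) 0"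
  proof
    fix y assume y: "y \<in> {..<2*t}"
    have "(0, alt_walk (cycle_A t) (cycle_B t) 0 y) \<in> (adj (cycle_A t) (cycle_B t))\<^sup>*" using alt_walk_reachable[OF z] .
    then have "(0, y) \<in> (adj (cycle_A t) (cycle_B t))\<^sup>*" using alt_walk_cycle y by simp
    then show "y \<in> comp_of {..<2*t} (cycle_A t) (cycle_B t) 0" unfolding comp_of_def using y by simp
  qed
  have C0: "comp_of {..<2*t} (cycle_A t) (cycle_B t) 0 = {..<2*t}" using sub comp_of_subset by blast
  have "comp_of {..<2*t} (cycle_A t) (cycle_B t) ` {..<2*t} = {{..<2*t}}"
  proof -
    have "comp_of {..<2*t} (cycle_A t) (cycle_B t) x = {..<2*t}" if "x \<in> {..<2*t}" for x
      using comp_of_eq[of x 0] that C0 by simp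
    then have "comp_of {..<2*t} (cycle_A t) (cycle_B t) ` {..<2*t} = (\<lambda>x. {..<2*t}) ` {..<2*t}" by (rule image_cong[OF refl])
    also have "\<dots> = {{..<2*t}}" using z by blast
    finally show ?thesis .
  qed
  then show ?thesis unfolding mdist_on_def by simp
qed

lemma ex_mpair_mdist_on: "(\<forall>t\<in>set ts. 1 \<le> t) \<Longrightarrow>
   \<exists>A B. mpair {..<2 * sum_list ts} A B \<and> mdist_on {..<2 * sum_list ts} A B = mset (map (\<lambda>t. 2*t) ts)"
proof (induction ts)
  case Nil
  have "mpair {} {} {}" unfolding mpair_def is_matching_def by simp
  moreover have "mdist_on {} {} {} = {#}" unfolding mdist_on_def by simp
  ultimately show ?case by auto
next
  case (Cons t ts)
  then obtain A0 B0 where AB0: "mpair {..<2 * sum_list ts} A0 B0"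
     "mdist_on {..<2 * sum_list ts} A0 B0 = mset (map (\<lambda>t. 2*t) ts)" by auto
  have t: "1 \<le> t" using Cons.prems by simp
  define sh where "sh = (\<lambda>x::nat. x + 2*t)"
  have ish: "inj_on sh {..<2 * sum_list ts}" unfolding sh_def by (simp add: inj_on_def)
  have shS: "sh ` {..<2 * sum_list ts} = {2*t..<2*t + 2 * sum_list ts}" unfolding sh_def by (simp add: lessThan_atLeast0 add.commute)
  have m2: "mpair {2*t..<2*t + 2 * sum_list ts} (act sh A0) (act sh B0)"
    using mpair_act[OF AB0(1) ish] shS by simp
  have md2: "mdist_on {2*t..<2*t + 2 * sum_list ts} (act sh A0) (act sh B0) = mset (map (\<lambda>t. 2*t) ts)"
    using mpair.mdist_on_act[OF AB0(1) ish] shS AB0(2) by simp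
  interpret mpair_Un "{..<2*t}" "cycle_A t" "cycle_B t" "{2*t..<2*t + 2 * sum_list ts}" "act sh A0" "act sh B0"
    unfolding mpair_Un_def mpair_Un_axioms_def using mpair_cycle m2 by auto
  have U: "{..<2*t} \<union> {2*t..<2*t + 2 * sum_list ts} = {..<2 * sum_list (t # ts)}" by auto
  show ?case
    using mpair_union mdist_on_Un mdist_on_cycle[OF t] md2 U by (intro exI[of _ "cycle_A t \<union> act sh A0"] exI[of _ "cycle_B t \<union> act sh B0"]) simp
qed

lemma ex_mpair_mdist_on_interval:
  assumes H1: "\<forall>x\<in>#H. 1 \<le> x"
  shows "\<exists>A B. mpair {1..2 * sum_mset H} A B \<and> mdist_on {1..2 * sum_mset H} A B = dbl H"
proof -
  let ?m = "2 * sum_mset H"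
  obtain ts where ts: "mset ts = H" using ex_mset by blast
  then have "\<forall>t\<in>set ts. 1 \<le> t" "sum_list ts = sum_mset H" using H1 by (auto simp: sum_mset_sum_list)
  then obtain A0 B0 where AB0: "mpair {..<?m} A0 B0" "mdist_on {..<?m} A0 B0 = dbl H"
    using ex_mpair_mdist_on ts unfolding dbl_def by (metis mset_map)
  have sh: "inj_on Suc {..<?m}" "Suc ` {..<?m} = {1..?m}"
    by (auto simp: lessThan_atLeast0 atLeastLessThanSuc_atLeastAtMost)
  show ?thesis
    using mpair_act[OF AB0(1) sh(1)] mpair.mdist_on_act[OF AB0(1) sh(1)] AB0(2) sh(2) by metis
qed

lemma (in mpair) ex_matching_mdist_on_Imatch_eq:
  assumes S: "S = {1..2*r}"
  shows "\<exists>B'. is_matching S B' \<and> mdist_on S (Imatch r) B' = mdist_on S A B"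
proof -
  have mI: "is_matching S (Imatch r)" using is_matching_Imatch S by simp
  interpret mpair2 S A A S "Imatch r" "Imatch r"
    unfolding mpair2_def mpair_def using mA mI fin by simp
  have "card A = r" using card_carrier_matching[OF mA fin] S by simp
  then have "mdist_on S A A = mdist_on S (Imatch r) (Imatch r)"
    using mdist_on_self[OF mA fin] mdist_on_self[OF mI fin] card_Imatch by simp
  then obtain q where q: "bij_betw q S S" "act q A = Imatch r" using mdist_on_eq_imp_iso by blast
  then have iq: "inj_on q S" "q ` S = S" by (auto simp: bij_betw_def)
  show ?thesis
    using is_matching_act[OF mB iq(1)] mdist_on_act[OF iq(1)] iq(2) q(2) by (intro exI[of _ "act q B"]) simp
qed

theorem ex_matching_mdist_on_Imatch:
  assumes tau: "\<forall>x\<in>#tau. 2 \<le> x" and r: "sum_mset tau \<le> r"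
  shows "\<exists>B. is_matching {1..2*r} B \<and> mdist_on {1..2*r} (Imatch r) B = dbl (pad1 tau r)"
proof -
  have "\<forall>x\<in>#pad1 tau r. 1 \<le> x" "sum_mset (pad1 tau r) = r" using tau r unfolding pad1_def by auto
  then obtain A B where "mpair {1..2*r} A B" "mdist_on {1..2*r} A B = dbl (pad1 tau r)"
    using ex_mpair_mdist_on_interval by metis
  then show ?thesis using mpair.ex_matching_mdist_on_Imatch_eq by metis
qed

text \<open>The same choice as in \<open>mcount\<close>, so that \<open>mcount\<close> is literally a \<open>perm_count\<close>.\<close>

definition ref_matching :: "nat multiset \<Rightarrow> nat \<Rightarrow> nat set set" where
  "ref_matching tau r = (SOME A. A \<in> pmatch r \<and> mdist r (Imatch r) A = dbl (pad1 tau r))"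

definition touch_count :: "nat multiset \<Rightarrow> nat multiset \<Rightarrow> nat \<Rightarrow> nat" where
  "touch_count mu tau r = perm_count mu True {1..2*r} (Imatch r) (ref_matching tau r)"

lemma ref_matching_prop: assumes tau: "\<forall>x\<in>#tau. 2 \<le> x" and r: "sum_mset tau \<le> r"
  shows "is_matching {1..2*r} (ref_matching tau r)" "mdist_on {1..2*r} (Imatch r) (ref_matching tau r) = dbl (pad1 tau r)"
proof -
  have "\<exists>A. A \<in> pmatch r \<and> mdist r (Imatch r) A = dbl (pad1 tau r)"
    using ex_matching_mdist_on_Imatch[OF tau r] unfolding pmatch_iff_is_matching mdist_eq_mdist_on .
  then have "ref_matching tau r \<in> pmatch r \<and> mdist r (Imatch r) (ref_matching tau r) = dbl (pad1 tau r)"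
    unfolding ref_matching_def by (rule someI_ex)
  then show "is_matching {1..2*r} (ref_matching tau r)" "mdist_on {1..2*r} (Imatch r) (ref_matching tau r) = dbl (pad1 tau r)"
    unfolding pmatch_iff_is_matching mdist_eq_mdist_on by auto
qed

lemma mpair_ref_matching: assumes tau: "\<forall>x\<in>#tau. 2 \<le> x" and r: "sum_mset tau \<le> r"
  shows "mpair {1..2*r} (Imatch r) (ref_matching tau r)"
  unfolding mpair_def using ref_matching_prop[OF tau r] is_matching_Imatch by simp

lemma perm_count_iso_invariant: assumes m1: "mpair S A B" and m2: "mpair S' A' B'" and md: "mdist_on S A B = mdist_on S' A' B'"
  shows "perm_count mu b S A B = perm_count mu b S' A' B'"
proof -
  interpret mpair2 S A B S' A' B' unfolding mpair2_def using m1 m2 by simp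
  obtain q where q: "bij_betw q S S'" "act q A = A'" "act q B = B'" using mdist_on_eq_imp_iso[OF md] by blast
  have "perm_count mu b S' (act q A) (act q B) = perm_count mu b S A B"
    by (rule perm_count_transport[OF q(1) c1.fin matching_subset_Pow[OF c1.mA] matching_subset_Pow[OF c1.mB]])
  then show ?thesis using q by simp
qed

lemma perm_count_touching_eq_touch_count: assumes m: "mpair S A B" and md: "mdist_on S A B = dbl (pad1 tau r)"
  and tau: "\<forall>x\<in>#tau. 2 \<le> x" and r: "sum_mset tau \<le> r"
  shows "perm_count mu True S A B = touch_count mu tau r"
  unfolding touch_count_def using perm_count_iso_invariant[OF m mpair_ref_matching[OF tau r]] md ref_matching_prop(2)[OF tau r] by simp

section \<open>Sorting permutations by the edges they touch\<close>

definition touched :: "nat set set \<Rightarrow> (nat \<Rightarrow> nat) \<Rightarrow> nat set set" where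
  "touched A p = {e \<in> A. \<exists>x\<in>e. p x \<noteq> x}"

lemma untouched_subset:
  assumes "act p A = B" shows "A - touched A p \<subseteq> B"
proof
  fix e assume e: "e \<in> A - touched A p"
  then have "p ` e = e" unfolding touched_def by auto
  then have "e \<in> act p A" using e unfolding act_def by (metis DiffD1 image_eqI)
  then show "e \<in> B" using assms by simp
qed

context mpair begin

lemma permutes_Union_touched:
  assumes p: "p permutes S" shows "p permutes \<Union>(touched A p)"
proof -
  have "p x = x" if "x \<notin> \<Union>(touched A p)" for x
    using that p is_matching_Union[OF mA] unfolding touched_def permutes_def by blast
  then show ?thesis using p unfolding permutes_def by blast
qed
lemma act_touched:
  assumes p: "p permutes S" and ap: "act p A = B"
  shows "act p (touched A p) = B - (A - touched A p)"
proof -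
  let ?W = "touched A p"
  have pU: "p permutes \<Union>?W" by (rule permutes_Union_touched[OF p])
  have disj: "\<Union>?W \<inter> \<Union>(A - ?W) = {}"
    using matching_split(4)[OF mpair_axioms _ untouched_subset[OF ap]] unfolding touched_def by blast
  have "p ` e \<noteq> e'" if e: "e \<in> ?W" and e': "e' \<in> A - ?W" for e e'
  proof -
    obtain x where x: "x \<in> e" using e unfolding touched_def by blast
    then have "p x \<in> \<Union>?W" using permutes_in_image[OF pU] e by blast
    then show ?thesis using disj e' x by blast
  qed
  then have "act p ?W \<inter> (A - ?W) = {}" unfolding act_def by blast
  moreover have "act p A = act p ?W \<union> (A - ?W)"
  proof -
    have "p ` e = e" if "e \<in> A - ?W" for e using that unfolding touched_def by auto
    then have "act p (A - ?W) = A - ?W" unfolding act_def by (metis (no_types, lifting) image_cong image_ident)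
    moreover have "A = ?W \<union> (A - ?W)" unfolding touched_def by blast
    ultimately show ?thesis unfolding act_def by (metis image_Un)
  qed
  ultimately show ?thesis using ap by blast
qed

lemma act_extend_untouched:
  assumes W: "W \<subseteq> A" and AW: "A - W \<subseteq> B" and p: "p permutes \<Union>W"
    and aW: "act p W = B - (A - W)"
  shows "act p A = B"
proof -
  have "p ` e = e" if e: "e \<in> A - W" for e
  proof -
    have "x \<notin> \<Union>W" if "x \<in> e" for x using matching_split(4)[OF mpair_axioms W AW] e that by blast
    then show ?thesis using permutes_not_in[OF p] by auto
  qed
  then have "act p (A - W) = A - W" unfolding act_def by (metis (no_types, lifting) image_cong image_ident)
  moreover have "act p A = act p W \<union> act p (A - W)" using W unfolding act_def by blast
  ultimately show ?thesis using aW AW by blast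
qed

lemma perms_with_touched_eq:
  assumes W: "W \<subseteq> A" and AW: "A - W \<subseteq> B"
  shows "{p. p permutes S \<and> filter_mset (\<lambda>l. 2 \<le> l) (cycle_type S p) = mu \<and> act p A = B
              \<and> touched A p = W}
       = {p. p permutes \<Union>W \<and> filter_mset (\<lambda>l. 2 \<le> l) (cycle_type (\<Union>W) p) = mu
              \<and> act p W = B - (A - W) \<and> (\<forall>e\<in>W. \<exists>x\<in>e. p x \<noteq> x)}"
    (is "?L = ?R")
proof
  have US: "\<Union>W \<subseteq> S" using matching_split(5)[OF mpair_axioms W AW] by blast
  show "?L \<subseteq> ?R"
  proof
    fix p assume "p \<in> ?L"
    then have p: "p permutes S" and ft: "filter_mset (\<lambda>l. 2 \<le> l) (cycle_type S p) = mu"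
      and ap: "act p A = B" and tp: "touched A p = W" by auto
    have pU: "p permutes \<Union>W" using permutes_Union_touched[OF p] tp by simp
    moreover have "act p W = B - (A - W)" using act_touched[OF p ap] tp by simp
    moreover have "\<forall>e\<in>W. \<exists>x\<in>e. p x \<noteq> x" using tp unfolding touched_def by blast
    ultimately show "p \<in> ?R" using ft nontrivial_cycle_type_superset[OF pU US fin] by simp
  qed
  show "?R \<subseteq> ?L"
  proof
    fix p assume "p \<in> ?R"
    then have p: "p permutes \<Union>W" and ft: "filter_mset (\<lambda>l. 2 \<le> l) (cycle_type (\<Union>W) p) = mu"
      and aW: "act p W = B - (A - W)" and t: "\<forall>e\<in>W. \<exists>x\<in>e. p x \<noteq> x" by auto
    have "p x = x" if "e \<in> A - W" "x \<in> e" for e x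
      using matching_split(4)[OF mpair_axioms W AW] that permutes_not_in[OF p] by blast
    then have "touched A p = W" using t W unfolding touched_def by blast
    then show "p \<in> ?L"
      using permutes_subset[OF p US] act_extend_untouched[OF W AW p aW] ft
        nontrivial_cycle_type_superset[OF p US fin] by simp
  qed
qed

end
lemma (in mpair) card_matching_parts:
  assumes cS: "card S = 2 * m" and md: "mdist_on S A B = dbl (pad1 tau m)"
    and tau: "\<forall>x\<in>#tau. 2 \<le> x" and j: "sum_mset tau = j" and jm: "j \<le> m"
  shows "card A = m" "card (A \<inter> B) = m - j" "card (A - B) = j"
proof -
  show cA: "card A = m" using card_carrier_matching[OF mA fin] cS by simp
  have "card (A \<inter> B) = count (dbl tau + replicate_mset (m - j) 2) 2"
    using count_mdist_on_2 md dbl_pad[of tau m] j jm by simp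
  then show cAB: "card (A \<inter> B) = m - j" using count_dbl_2[OF tau] by simp
  have "card A = card (A \<inter> B) + card (A - B)"
    using card_Un_disjoint[of "A \<inter> B" "A - B"] finite_matching[OF mA fin]
    by (metis Int_Diff_Un Int_Diff_disjoint finite_Diff finite_Int)
  then show "card (A - B) = j" using cA cAB jm by simp
qed

lemma card_perms_with_touched:
  assumes m: "mpair S A B" and cS: "card S = 2 * m" and md: "mdist_on S A B = dbl (pad1 tau m)"
    and tau: "\<forall>x\<in>#tau. 2 \<le> x" and j: "sum_mset tau = j" and jm: "j \<le> m"
    and W: "A - B \<subseteq> W" "W \<subseteq> A"
  shows "card {p. p permutes S \<and> filter_mset (\<lambda>l. 2 \<le> l) (cycle_type S p) = mu \<and> act p A = B
                \<and> touched A p = W} = touch_count mu tau (card W)"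
proof -
  interpret mpair S A B by (rule m)
  note c = card_matching_parts[OF cS md tau j jm]
  have AW: "A - W \<subseteq> B" using W by blast
  have fA: "finite A" by (rule finite_matching[OF mA fin])
  have cW: "j \<le> card W" "card W \<le> m"
    using card_mono[OF finite_subset[OF W(2) fA] W(1)] card_mono[OF fA W(2)] c by auto
  note ss = matching_split[OF m W(2) AW]
  have fAW: "finite (\<Union>(A - W))" using ss(5) fin finite_subset by blast
  have "dbl tau + replicate_mset (m - j) 2
      = mdist_on (\<Union>W) W (B - (A - W)) + replicate_mset (m - card W) 2"
    using mdist_on_split(1)[OF m W(2) AW] mdist_on_self[OF ss(3) fAW] md dbl_pad[of tau m] j jm
      card_Diff_subset[OF finite_subset[OF W(2) fA] W(2)] c(1) by simp
  moreover have "replicate_mset (m - j) (2::nat)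
      = replicate_mset (card W - j) 2 + replicate_mset (m - card W) 2"
    using cW by (intro multiset_eqI) simp
  ultimately have "mdist_on (\<Union>W) W (B - (A - W)) = dbl tau + replicate_mset (card W - j) 2"
    by (metis add.assoc add_right_cancel)
  then have "mdist_on (\<Union>W) W (B - (A - W)) = dbl (pad1 tau (card W))"
    using dbl_pad[of tau "card W"] j cW by simp
  then show ?thesis
    using perms_with_touched_eq[OF W(2) AW] j cW
      perm_count_touching_eq_touch_count[OF mdist_on_split(2)[OF m W(2) AW] _ tau, of "card W" mu]
    unfolding perm_count_def by simp
qed

text \<open>Sorting the permutations by the set of edges of \<open>A\<close> they touch: such a set contains the
  \<open>j\<close> edges of \<open>A - B\<close>, and there are \<open>(m - j) choose (r - j)\<close> of them of size \<open>r\<close>.\<close>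

theorem perm_count_eq_sum_touch_count:
  assumes m: "mpair S A B" and cS: "card S = 2 * m" and md: "mdist_on S A B = dbl (pad1 tau m)"
    and tau: "\<forall>x\<in>#tau. 2 \<le> x" and j: "sum_mset tau = j" and jm: "j \<le> m"
  shows "perm_count mu False S A B = (\<Sum>r = j..m. ((m - j) choose (r - j)) * touch_count mu tau r)"
proof -
  interpret mpair S A B by (rule m)
  note c = card_matching_parts[OF cS md tau j jm]
  have fA: "finite A" by (rule finite_matching[OF mA fin])
  define X where "X = {p. p permutes S \<and> filter_mset (\<lambda>l. 2 \<le> l) (cycle_type S p) = mu \<and> act p A = B}"
  define Ws where "Ws = {W. A - B \<subseteq> W \<and> W \<subseteq> A}"
  have fX: "finite X" unfolding X_def using finite_permutations[OF fin] by (rule rev_finite_subset) blast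
  have fWs: "finite Ws" unfolding Ws_def using fA by simp
  have cW: "card W \<in> {j..m}" if "W \<in> Ws" for W
  proof -
    have "A - B \<subseteq> W" "W \<subseteq> A" using that unfolding Ws_def by auto
    then show ?thesis using card_mono[OF finite_subset[OF \<open>W \<subseteq> A\<close> fA]] card_mono[OF fA] c by auto
  qed
  have "touched A p \<in> Ws" if "p \<in> X" for p
  proof -
    have "A - touched A p \<subseteq> B" using untouched_subset that unfolding X_def by blast
    moreover have "touched A p \<subseteq> A" unfolding touched_def by blast
    ultimately show ?thesis unfolding Ws_def by blast
  qed
  then have "X = (\<Union>W\<in>Ws. {p \<in> X. touched A p = W})" by blast
  then have "card X = card (\<Union>W\<in>Ws. {p \<in> X. touched A p = W})" by (rule arg_cong[of _ _ card])
  also have "\<dots> = (\<Sum>W\<in>Ws. card {p \<in> X. touched A p = W})"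
    by (rule card_UN_disjoint[OF fWs]) (use fX in auto)
  also have "\<dots> = (\<Sum>W\<in>Ws. touch_count mu tau (card W))"
    using card_perms_with_touched[OF m cS md tau j jm] unfolding X_def Ws_def
    by (intro sum.cong refl) (simp add: conj_assoc)
  also have "\<dots> = (\<Sum>r = j..m. \<Sum>W\<in>{W \<in> Ws. card W = r}. touch_count mu tau (card W))"
    by (rule sum.group[symmetric]) (use fWs cW in auto)
  also have "\<dots> = (\<Sum>r = j..m. ((m - j) choose (r - j)) * touch_count mu tau r)"
    using card_supersets_eq_choose[OF fA, of "A - B"] c unfolding Ws_def
    by (intro sum.cong refl) (auto simp: conj_assoc)
  finally show ?thesis unfolding perm_count_def X_def by simp
qed

section \<open>Vanishing of the touching counts\<close>

lemma perm_count_eq_0_if_large: assumes fS: "finite S" and k: "card S < sum_mset mu" shows "perm_count mu b S A B = 0"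
proof -
  have "filter_mset (\<lambda>l. 2 \<le> l) (cycle_type S p) \<noteq> mu" if p: "p permutes S" for p
  proof
    assume h: "filter_mset (\<lambda>l. 2 \<le> l) (cycle_type S p) = mu"
    have "sum_mset mu \<le> sum_mset (cycle_type S p)" using sum_filter_le h by metis
    also have "\<dots> = card S" using sum_cycle_type[OF p fS] .
    finally show False using k by simp
  qed
  then show ?thesis unfolding perm_count_def by (auto simp: card_eq_0_iff)
qed

lemma touching_choice:
  assumes m: "is_matching S A" and t: "\<forall>e\<in>A. \<exists>x\<in>e. p x \<noteq> x"
  obtains f where "inj_on f A" "\<forall>e\<in>A. f e \<in> e \<and> p (f e) \<noteq> f e" "f ` A \<subseteq> {x\<in>S. p x \<noteq> x}"
proof -
  define f where "f e = (SOME x. x \<in> e \<and> p x \<noteq> x)" for e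
  have f: "f e \<in> e \<and> p (f e) \<noteq> f e" if e: "e \<in> A" for e
  proof -
    have "\<exists>x. x \<in> e \<and> p x \<noteq> x" using t e by blast
    then show ?thesis unfolding f_def by (rule someI_ex)
  qed
  have inj: "inj_on f A"
  proof (rule inj_onI)
    fix e1 e2 assume e: "e1 \<in> A" "e2 \<in> A" "f e1 = f e2"
    have "f e1 \<in> e1" "f e1 \<in> e2" using f[OF e(1)] f[OF e(2)] e(3) by auto
    then show "e1 = e2" using edge_unique[OF m e(1) e(2)] by blast
  qed
  have "f ` A \<subseteq> {x\<in>S. p x \<noteq> x}" using f edge_subset[OF m] by blast
  then show ?thesis using that inj f by blast
qed

lemma card_le_moved_if_touching: assumes m: "is_matching S A" and fS: "finite S" and t: "\<forall>e\<in>A. \<exists>x\<in>e. p x \<noteq> x"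
  shows "card A \<le> card {x\<in>S. p x \<noteq> x}"
proof -
  obtain f where f: "inj_on f A" "f ` A \<subseteq> {x\<in>S. p x \<noteq> x}" using touching_choice[OF m t] by metis
  have "card A = card (f ` A)" using card_image[OF f(1)] by simp
  also have "\<dots> \<le> card {x\<in>S. p x \<noteq> x}" using card_mono[OF _ f(2)] fS by simp
  finally show ?thesis .
qed

lemma touching_tight_unique: assumes m: "is_matching S A" and fS: "finite S" and t: "\<forall>e\<in>A. \<exists>x\<in>e. p x \<noteq> x"
  and c: "card {x\<in>S. p x \<noteq> x} \<le> card A"
  and e: "e \<in> A" "x \<in> e" "y \<in> e" "p x \<noteq> x" "p y \<noteq> y"
  shows "x = y"
proof -
  obtain f where f: "inj_on f A" "\<forall>e\<in>A. f e \<in> e \<and> p (f e) \<noteq> f e" "f ` A \<subseteq> {x\<in>S. p x \<noteq> x}"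
    using touching_choice[OF m t] by metis
  have fin: "finite {x\<in>S. p x \<noteq> x}" using fS by simp
  have "card (f ` A) = card A" using card_image[OF f(1)] .
  then have eq: "f ` A = {x\<in>S. p x \<noteq> x}" using card_subset_eq[OF fin f(3)] c card_mono[OF fin f(3)] by simp
  have xS: "x \<in> S" "y \<in> S" using edge_subset[OF m e(1)] e(2,3) by auto
  obtain e1 where e1: "e1 \<in> A" "x = f e1" using eq xS(1) e(4) by (metis (mono_tags, lifting) imageE mem_Collect_eq)
  obtain e2 where e2: "e2 \<in> A" "y = f e2" using eq xS(2) e(5) by (metis (mono_tags, lifting) imageE mem_Collect_eq)
  have "e1 = e" using edge_unique[OF m e1(1) e(1)] f(2) e1 e(2) by blast
  moreover have "e2 = e" using edge_unique[OF m e2(1) e(1)] f(2) e2 e(3) by blast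
  ultimately show ?thesis using e1 e2 by simp
qed

lemma perm_count_eq_0_if_many_edges: assumes m: "is_matching S A" and fS: "finite S" and k: "sum_mset mu < card A"
  shows "perm_count mu True S A B = 0"
proof -
  have "\<not> (filter_mset (\<lambda>l. 2 \<le> l) (cycle_type S p) = mu \<and> (\<forall>e\<in>A. \<exists>x\<in>e. p x \<noteq> x))" if p: "p permutes S" for p
  proof
    assume h: "filter_mset (\<lambda>l. 2 \<le> l) (cycle_type S p) = mu \<and> (\<forall>e\<in>A. \<exists>x\<in>e. p x \<noteq> x)"
    have "card A \<le> card {x\<in>S. p x \<noteq> x}" using card_le_moved_if_touching[OF m fS] h by blast
    also have "\<dots> = sum_mset mu" using sum_nontrivial_cycle_type[OF p fS] h by simp
    finally show False using k by simp
  qed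
  then show ?thesis unfolding perm_count_def by (auto simp: card_eq_0_iff)
qed

lemma perm_count_eq_0_if_common_edge: assumes m: "mpair S A B" and cm: "card A = sum_mset mu" and ne: "A \<inter> B \<noteq> {}"
  shows "perm_count mu True S A B = 0"
proof -
  interpret mpair S A B by (rule m)
  have "\<not> (act p A = B \<and> filter_mset (\<lambda>l. 2 \<le> l) (cycle_type S p) = mu \<and> (\<forall>e\<in>A. \<exists>x\<in>e. p x \<noteq> x))"
    if p: "p permutes S" for p
  proof
    assume h: "act p A = B \<and> filter_mset (\<lambda>l. 2 \<le> l) (cycle_type S p) = mu \<and> (\<forall>e\<in>A. \<exists>x\<in>e. p x \<noteq> x)"
    have t: "\<forall>e\<in>A. \<exists>x\<in>e. p x \<noteq> x" using h by blast
    have c: "card {x\<in>S. p x \<noteq> x} \<le> card A" using sum_nontrivial_cycle_type[OF p fin] h cm by simp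
    obtain e where e: "e \<in> A" "e \<in> B" using ne by blast
    obtain z where z: "z \<in> e" "p z \<noteq> z" using t e(1) by blast
    have zS: "z \<in> S" using edge_subset[OF mA e(1)] z(1) by blast
    define w where "w = mate A z"
    have ew: "e = {z, w}" unfolding w_def using edge_eq_mate[OF mA e(1) z(1)] .
    have wz: "w \<noteq> z" unfolding w_def using mate_neq[OF mA zS] .
    have pw: "p w = w"
    proof (rule ccontr)
      assume "p w \<noteq> w"
      then have "w = z" using touching_tight_unique[OF mA fin t c e(1), of w z] ew z(2) by simp
      then show False using wz by simp
    qed
    have "p ` e \<in> B" using h e(1) unfolding act_def by blast
    moreover have "w \<in> p ` e" using pw ew by (metis imageI insertCI)
    ultimately have "p ` e = e" using edge_unique[OF mB _ e(2), of "p ` e" w] ew by simp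
    then have "p z \<in> e" using z(1) by blast
    moreover have "p z \<noteq> w" using pw wz permutes_inj[OF p] unfolding inj_def by metis
    ultimately show False using ew z(2) by simp
  qed
  then show ?thesis unfolding perm_count_def by (auto simp: card_eq_0_iff)
qed

section \<open>The top touching count\<close>

context mpair begin

definition transversal :: "nat set \<Rightarrow> bool" where
  "transversal M \<longleftrightarrow> M \<subseteq> S \<and> (\<forall>x\<in>S. x \<in> M \<longleftrightarrow> mate A x \<notin> M) \<and> (\<forall>x\<in>S. x \<in> M \<longleftrightarrow> mate B x \<notin> M)"

lemma transversal_walk_step: "transversal M \<Longrightarrow> y \<in> S \<Longrightarrow> (walk_step i y \<in> M \<longleftrightarrow> y \<notin> M)"
  unfolding transversal_def walk_step_def by auto

lemma transversal_alt_walk: assumes c: "transversal M" and x: "x \<in> S" shows "alt_walk A B x i \<in> M \<longleftrightarrow> (x \<in> M \<longleftrightarrow> even i)"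
proof (induction i)
  case 0 then show ?case by simp
next
  case (Suc i)
  have "alt_walk A B x (Suc i) \<in> M \<longleftrightarrow> alt_walk A B x i \<notin> M"
    using transversal_walk_step[OF c alt_walk_in[OF x]] by (simp add: alt_walk_Suc)
  then show ?case using Suc by simp
qed

lemma alt_walk_parity: assumes x: "x \<in> S" and e: "alt_walk A B x i = alt_walk A B x i'" shows "even i = even i'"
proof (rule ccontr)
  assume "even i \<noteq> even i'"
  then have "odd (i + i')" by simp
  then show False using alt_walk_odd_distance_neq[OF x] e by blast
qed

definition walk_class :: "nat \<Rightarrow> bool \<Rightarrow> nat set" where
  "walk_class x b = {alt_walk A B x i | i. even i = b}"

lemma mate_walk_class:
  assumes x: "x \<in> S" and y: "y \<in> walk_class x b"
  shows "mate A y \<in> walk_class x (\<not> b)" "mate B y \<in> walk_class x (\<not> b)"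
proof -
  obtain i where i: "y = alt_walk A B x i" "even i = b" using y unfolding walk_class_def by blast
  have P: "even (walk_period A B x)" "0 < walk_period A B x"
    using walk_period_even[OF x] walk_period_pos[OF x] .
  show "mate A y \<in> walk_class x (\<not> b)"
    using mate_A_alt_walk[OF x, of i] mate_A_index_parity[OF P(1), of i] i unfolding walk_class_def by auto
  show "mate B y \<in> walk_class x (\<not> b)"
    using mate_B_alt_walk[OF x, of i] mate_B_index_parity[OF P, of i] i unfolding walk_class_def by auto
qed

lemma walk_class_unique: "x \<in> S \<Longrightarrow> y \<in> walk_class x b \<Longrightarrow> y \<in> walk_class x b' \<Longrightarrow> b = b'"
  unfolding walk_class_def using alt_walk_parity by blast

lemma walk_class_subset: "x \<in> S \<Longrightarrow> walk_class x b \<subseteq> comp_of S A B x"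
  unfolding walk_class_def using comp_of_eq_alt_walk range_alt_walk by blast

lemma comp_of_walk_class: "x \<in> S \<Longrightarrow> y \<in> comp_of S A B x \<Longrightarrow> \<exists>b. y \<in> walk_class x b"
  unfolding walk_class_def using comp_of_eq_alt_walk by blast

lemma transversal_Int_comp_of:
  assumes M: "transversal M" and x: "x \<in> S"
  shows "M \<inter> comp_of S A B x = walk_class x (x \<in> M)"
proof -
  have "alt_walk A B x i \<in> comp_of S A B x" for i
    using walk_class_subset[OF x, of "even i"] unfolding walk_class_def by blast
  moreover have "\<exists>i. y = alt_walk A B x i" if "y \<in> comp_of S A B x" for y
    using that comp_of_eq_alt_walk[OF x] by blast
  ultimately show ?thesis using transversal_alt_walk[OF M x] unfolding walk_class_def by blast
qed

definition comp_rep :: "nat set \<Rightarrow> nat" where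
  "comp_rep C = (SOME x. x \<in> C)"

lemma comp_rep: assumes "x \<in> S" shows "comp_rep (comp_of S A B x) \<in> S"
  "comp_of S A B (comp_rep (comp_of S A B x)) = comp_of S A B x"
proof -
  have "comp_rep (comp_of S A B x) \<in> comp_of S A B x"
    unfolding comp_rep_def using comp_of_self[OF assms] by (rule someI)
  then show "comp_rep (comp_of S A B x) \<in> S" "comp_of S A B (comp_rep (comp_of S A B x)) = comp_of S A B x"
    using comp_of_subset comp_of_eq by blast+
qed

text \<open>A transversal is determined by choosing, in every component, which of the two walk
  classes of its base point it contains.\<close>

definition transversal_of :: "nat set set \<Rightarrow> nat set" where
  "transversal_of K = (\<Union>C\<in>comp_of S A B ` S. walk_class (comp_rep C) (C \<in> K))"

lemma mem_transversal_of:
  assumes y: "y \<in> S"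
  shows "y \<in> transversal_of K \<longleftrightarrow> y \<in> walk_class (comp_rep (comp_of S A B y)) (comp_of S A B y \<in> K)"
proof
  assume "y \<in> transversal_of K"
  then obtain x where x: "x \<in> S" "y \<in> walk_class (comp_rep (comp_of S A B x)) (comp_of S A B x \<in> K)"
    unfolding transversal_of_def by blast
  then have "comp_of S A B y = comp_of S A B x"
    using walk_class_subset[OF comp_rep(1)[OF x(1)]] comp_rep(2)[OF x(1)] comp_of_eq by blast
  then show "y \<in> walk_class (comp_rep (comp_of S A B y)) (comp_of S A B y \<in> K)" using x by simp
qed (use y in \<open>auto simp: transversal_of_def\<close>)

lemma transversal_of_subset: "transversal_of K \<subseteq> S"
  unfolding transversal_of_def using walk_class_subset comp_rep comp_of_subset by blast

lemma transversal_transversal_of: "transversal (transversal_of K)"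
  unfolding transversal_def
proof (intro conjI ballI transversal_of_subset)
  fix y assume y: "y \<in> S"
  let ?C = "comp_of S A B y"
  let ?x = "comp_rep ?C"
  have x: "?x \<in> S" "comp_of S A B ?x = ?C" using comp_rep[OF y] by auto
  obtain b where b: "y \<in> walk_class ?x b" using comp_of_walk_class[OF x(1)] comp_of_self[OF y] x(2) by auto
  have cls: "z \<in> walk_class ?x c \<longleftrightarrow> c = b'" if "z \<in> walk_class ?x b'" for z b' c
    using walk_class_unique[OF x(1)] that by blast
  have "y \<in> transversal_of K \<longleftrightarrow> (?C \<in> K) = b"
    using mem_transversal_of[OF y] cls[OF b] by simp
  moreover have "comp_of S A B (mate A y) = ?C" "comp_of S A B (mate B y) = ?C"
    using comp_of_eq comp_of_mate_A comp_of_mate_B comp_of_self[OF y] by blast+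
  then have "mate A y \<in> transversal_of K \<longleftrightarrow> (?C \<in> K) = (\<not> b)"
    and "mate B y \<in> transversal_of K \<longleftrightarrow> (?C \<in> K) = (\<not> b)"
    using mem_transversal_of[OF mate_in[OF mA y]] mem_transversal_of[OF mate_in[OF mB y]]
      cls[OF mate_walk_class(1)[OF x(1) b]] cls[OF mate_walk_class(2)[OF x(1) b]] by simp_all
  ultimately show "y \<in> transversal_of K \<longleftrightarrow> mate A y \<notin> transversal_of K"
    and "y \<in> transversal_of K \<longleftrightarrow> mate B y \<notin> transversal_of K" by auto
qed

lemma self_walk_class: "x \<in> walk_class x True"
  unfolding walk_class_def by (rule CollectI, rule exI[of _ 0]) simp

lemma transversal_of_choice:
  assumes M: "transversal M"
  shows "transversal_of {C \<in> comp_of S A B ` S. comp_rep C \<in> M} = M"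
proof -
  have "y \<in> transversal_of {C \<in> comp_of S A B ` S. comp_rep C \<in> M} \<longleftrightarrow> y \<in> M" if y: "y \<in> S" for y
  proof -
    let ?x = "comp_rep (comp_of S A B y)"
    have x: "?x \<in> S" "comp_of S A B ?x = comp_of S A B y" using comp_rep[OF y] by auto
    have "y \<in> transversal_of {C \<in> comp_of S A B ` S. comp_rep C \<in> M} \<longleftrightarrow> y \<in> walk_class ?x (?x \<in> M)"
      using mem_transversal_of[OF y] y by simp
    also have "\<dots> \<longleftrightarrow> y \<in> M \<inter> comp_of S A B y"
      using transversal_Int_comp_of[OF M x(1)] x(2) by simp
    finally show ?thesis using comp_of_self[OF y] by blast
  qed
  then show ?thesis using transversal_of_subset M unfolding transversal_def by blast
qed

lemma choice_transversal_of:
  assumes K: "K \<subseteq> comp_of S A B ` S"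
  shows "{C \<in> comp_of S A B ` S. comp_rep C \<in> transversal_of K} = K"
proof -
  have "comp_rep C \<in> transversal_of K \<longleftrightarrow> C \<in> K" if C: "C \<in> comp_of S A B ` S" for C
  proof -
    obtain x where "x \<in> S" "C = comp_of S A B x" using C by blast
    then have x: "comp_rep C \<in> S" "comp_of S A B (comp_rep C) = C" using comp_rep by auto
    have iff: "comp_rep C \<in> transversal_of K \<longleftrightarrow> comp_rep C \<in> walk_class (comp_rep C) (C \<in> K)"
      using mem_transversal_of[OF x(1)] x(2) by simp
    show ?thesis
    proof (cases "C \<in> K")
      case True then show ?thesis using iff self_walk_class by simp
    next
      case False
      then show ?thesis
        using iff self_walk_class walk_class_unique[OF x(1), of "comp_rep C" True False] by auto
    qed
  qed
  then show ?thesis using K by blast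
qed

lemma card_transversals: "card {M. transversal M} = 2 ^ card (comp_of S A B ` S)"
proof -
  let ?X = "comp_of S A B ` S"
  have "bij_betw (\<lambda>M. {C \<in> ?X. comp_rep C \<in> M}) {M. transversal M} (Pow ?X)"
    by (rule bij_betw_byWitness[where f' = transversal_of])
      (use transversal_of_choice choice_transversal_of transversal_transversal_of in auto)
  then have "card {M. transversal M} = card (Pow ?X)" by (rule bij_betw_same_card)
  then show ?thesis using card_Pow finite_comps by simp
qed

end

context mpair begin

definition rot :: "nat \<Rightarrow> nat" where "rot x = mate B (mate A x)"
definition rot_on :: "nat set \<Rightarrow> nat \<Rightarrow> nat" where "rot_on M x = (if x \<in> M then rot x else x)"

lemma rot_in: "x \<in> S \<Longrightarrow> rot x \<in> S" unfolding rot_def using mate_in[OF mA] mate_in[OF mB] by simp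

lemma inj_on_rot: "inj_on rot S"
proof (rule inj_onI)
  fix x y assume x: "x \<in> S" and y: "y \<in> S" and e: "rot x = rot y"
  have "mate A x = mate A y" using e mate_mate[OF mB mate_in[OF mA x]] mate_mate[OF mB mate_in[OF mA y]] unfolding rot_def by metis
  then show "x = y" using mate_mate[OF mA x] mate_mate[OF mA y] by metis
qed

lemma transversal_rot: "transversal M \<Longrightarrow> x \<in> M \<Longrightarrow> rot x \<in> M"
proof -
  assume c: "transversal M" and x: "x \<in> M"
  have xS: "x \<in> S" using c x unfolding transversal_def by blast
  have a: "mate A x \<notin> M" using c x xS unfolding transversal_def by blast
  have "mate A x \<in> S" using mate_in[OF mA xS] .
  then have "mate B (mate A x) \<in> M" using c a unfolding transversal_def by blast
  then show ?thesis unfolding rot_def .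
qed

lemma card_transversal: assumes c: "transversal M" shows "card M = card A"
proof -
  have MS: "M \<subseteq> S" using c unfolding transversal_def by blast
  have img: "mate A ` M = S - M"
  proof
    show "mate A ` M \<subseteq> S - M" using c MS mate_in[OF mA] unfolding transversal_def by blast
    show "S - M \<subseteq> mate A ` M"
    proof
      fix y assume y: "y \<in> S - M"
      then have "mate A y \<in> M" using c unfolding transversal_def by blast
      moreover have "mate A (mate A y) = y" using mate_mate[OF mA] y by blast
      ultimately show "y \<in> mate A ` M" by (metis imageI)
    qed
  qed
  have inj: "inj_on (mate A) M"
    by (rule inj_onI) (metis MS mate_mate[OF mA] subsetD)
  have "card (S - M) = card M" using card_image[OF inj] img by simp
  moreover have "card S = card M + card (S - M)" using MS fin by (metis card_Diff_subset add_diff_inverse_nat card_mono finite_subset le_add_diff_inverse not_less)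
  ultimately have "card S = 2 * card M" by simp
  then show ?thesis using card_carrier_matching[OF mA fin] by simp
qed

context assumes nc: "\<forall>x\<in>S. mate A x \<noteq> mate B x"
begin

lemma rot_neq: "x \<in> S \<Longrightarrow> rot x \<noteq> x"
proof
  assume x: "x \<in> S" and e: "rot x = x"
  have "mate B x = mate B (mate B (mate A x))" using e unfolding rot_def by simp
  also have "\<dots> = mate A x" using mate_mate[OF mB mate_in[OF mA x]] .
  finally show False using nc x by metis
qed

lemma rot_on_permutes: assumes c: "transversal M" shows "rot_on M permutes S"
proof -
  have MS: "M \<subseteq> S" using c unfolding transversal_def by blast
  have sgM: "rot ` M \<subseteq> M" using transversal_rot[OF c] by blast
  have sgMM: "rot ` M = M"
    by (rule endo_inj_surj[OF finite_subset[OF MS fin] sgM inj_on_subset[OF inj_on_rot MS]])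
  have inj: "inj_on (rot_on M) S"
  proof (rule inj_onI)
    fix x y assume x: "x \<in> S" and y: "y \<in> S" and e: "rot_on M x = rot_on M y"
    show "x = y"
    proof (cases "x \<in> M"; cases "y \<in> M")
      assume "x \<in> M" "y \<in> M"
      then show "x = y" using e inj_on_rot x y unfolding rot_on_def inj_on_def by auto
    next
      assume a: "x \<in> M" "y \<notin> M"
      then have "rot x = y" using e unfolding rot_on_def by simp
      then show "x = y" using transversal_rot[OF c a(1)] a(2) by simp
    next
      assume a: "x \<notin> M" "y \<in> M"
      then have "x = rot y" using e unfolding rot_on_def by simp
      then show "x = y" using transversal_rot[OF c a(2)] a(1) by simp
    next
      assume "x \<notin> M" "y \<notin> M"
      then show "x = y" using e unfolding rot_on_def by simp
    qed
  qed
  have sub: "rot_on M ` S \<subseteq> S" using rot_in MS unfolding rot_on_def by auto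
  have "rot_on M ` S = S" by (rule endo_inj_surj[OF fin sub inj])
  then have "bij_betw (rot_on M) S S" using inj unfolding bij_betw_def by simp
  moreover have "rot_on M x = x" if "x \<notin> S" for x using that MS unfolding rot_on_def by auto
  ultimately show ?thesis by (rule bij_imp_permutes)
qed

lemma rot_on_moved: assumes c: "transversal M" shows "{x\<in>S. rot_on M x \<noteq> x} = M"
  using c rot_neq unfolding transversal_def rot_on_def by auto

lemma act_rot_on: assumes c: "transversal M" shows "act (rot_on M) A = B"
proof -
  have MS: "M \<subseteq> S" using c unfolding transversal_def by blast
  have sub: "act (rot_on M) A \<subseteq> B"
  proof
    fix b assume "b \<in> act (rot_on M) A"
    then obtain e where e: "e \<in> A" "b = rot_on M ` e" unfolding act_def by blast
    obtain i j where ij: "i \<noteq> j" "e = {i,j}" using is_matching_edge_form[OF mA e(1)] by blast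
    have xS: "i \<in> S" using edge_subset[OF mA e(1)] ij by blast
    have ee: "e = {i, mate A i}" using edge_eq_mate[OF mA e(1)] ij by blast
    have aS: "mate A i \<in> S" using mate_in[OF mA xS] .
    show "b \<in> B"
    proof (cases "i \<in> M")
      case True
      then have "mate A i \<notin> M" using c xS unfolding transversal_def by blast
      then have "b = {rot i, mate A i}" using e(2) ee True unfolding rot_on_def by (auto simp: insert_commute)
      also have "\<dots> = {mate A i, mate B (mate A i)}" unfolding rot_def by (simp add: insert_commute)
      finally show ?thesis using mate_edge[OF mB aS] by simp
    next
      case False
      then have aM: "mate A i \<in> M" using c xS unfolding transversal_def by blast
      then have "b = {i, rot (mate A i)}" using e(2) ee False unfolding rot_on_def by simp
      also have "\<dots> = {i, mate B i}" unfolding rot_def using mate_mate[OF mA xS] by simp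
      finally show ?thesis using mate_edge[OF mB xS] by simp
    qed
  qed
  have p: "rot_on M permutes S" using rot_on_permutes[OF c] .
  have "is_matching (rot_on M ` S) (act (rot_on M) A)" using is_matching_act[OF mA permutes_inj_on[OF p]] .
  then have "is_matching S (act (rot_on M) A)" using permutes_image[OF p] by simp
  then show ?thesis using matching_subset_eq[OF _ mB sub] by simp
qed

lemma rot_on_touching: assumes c: "transversal M" shows "\<forall>e\<in>A. \<exists>x\<in>e. rot_on M x \<noteq> x"
proof
  fix e assume e: "e \<in> A"
  obtain i j where ij: "i \<noteq> j" "e = {i,j}" using is_matching_edge_form[OF mA e] by blast
  have xS: "i \<in> S" using edge_subset[OF mA e] ij by blast
  have ee: "e = {i, mate A i}" using edge_eq_mate[OF mA e] ij by blast
  have aS: "mate A i \<in> S" using mate_in[OF mA xS] .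
  have "i \<in> M \<or> mate A i \<in> M" using c xS unfolding transversal_def by blast
  then show "\<exists>x\<in>e. rot_on M x \<noteq> x" using ee rot_neq xS aS unfolding rot_on_def by auto
qed

definition tight_perms where "tight_perms = {p. p permutes S \<and> act p A = B \<and> (\<forall>e\<in>A. \<exists>x\<in>e. p x \<noteq> x) \<and> card {x\<in>S. p x \<noteq> x} = card A}"

lemma tight_perm_moves_one_endpoint:
  assumes p: "p \<in> tight_perms" and x: "x \<in> S"
  shows "p x \<noteq> x \<longleftrightarrow> p (mate A x) = mate A x"
proof -
  have t: "\<forall>e\<in>A. \<exists>x\<in>e. p x \<noteq> x" and cM: "card {x\<in>S. p x \<noteq> x} = card A"
    using p unfolding tight_perms_def by auto
  have e: "{x, mate A x} \<in> A" and ne: "mate A x \<noteq> x" using mate_edge[OF mA x] mate_neq[OF mA x] by auto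
  have "x = mate A x" if "p x \<noteq> x" "p (mate A x) \<noteq> mate A x"
    using touching_tight_unique[OF mA fin t _ e _ _ that] cM by simp
  moreover have "p x \<noteq> x \<or> p (mate A x) \<noteq> mate A x" using t e by auto
  ultimately show ?thesis using ne by auto
qed

lemma tight_perm_eq_rot:
  assumes p: "p \<in> tight_perms" and x: "x \<in> S" and px: "p x \<noteq> x"
  shows "p x = rot x"
proof -
  have pp: "p permutes S" and ap: "act p A = B" using p unfolding tight_perms_def by auto
  let ?a = "mate A x"
  have aS: "?a \<in> S" by (rule mate_in[OF mA x])
  have pa: "p ?a = ?a" using tight_perm_moves_one_endpoint[OF p x] px by simp
  have "p ` {x, ?a} \<in> B" using ap mate_edge[OF mA x] unfolding act_def by blast
  then have "{?a, p x} \<in> B" using pa by (simp add: insert_commute)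
  moreover have "p x \<noteq> ?a"
    using pa permutes_inj[OF pp] mate_neq[OF mA x] unfolding inj_def by metis
  ultimately have "mate B ?a = p x" using mate_eqI[OF mB aS] by simp
  then show ?thesis unfolding rot_def by simp
qed

lemma tight_perm_transversal:
  assumes p: "p \<in> tight_perms" shows "transversal {x\<in>S. p x \<noteq> x}"
proof -
  let ?M = "{x\<in>S. p x \<noteq> x}"
  have pp: "p permutes S" using p unfolding tight_perms_def by auto
  have colA: "x \<in> ?M \<longleftrightarrow> mate A x \<notin> ?M" if x: "x \<in> S" for x
    using tight_perm_moves_one_endpoint[OF p x] x mate_in[OF mA x] by auto
  have pM: "p x \<in> ?M" if "x \<in> ?M" for x
    using that permutes_in_image[OF pp] permutes_inj[OF pp] unfolding inj_def by auto
  have colB: "x \<in> ?M \<longleftrightarrow> mate B x \<notin> ?M" if x: "x \<in> S" for x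
  proof
    assume xM: "x \<in> ?M"
    obtain x' where x': "p x' = x" using permutes_surj[OF pp] by (metis surj_def)
    then have x'M: "x' \<in> ?M" using xM permutes_not_in[OF pp] by (cases "x' \<in> S") auto
    then have "x = mate B (mate A x')" using tight_perm_eq_rot[OF p] x' unfolding rot_def by auto
    then have "mate B x = mate A x'" using mate_mate[OF mB mate_in[OF mA]] x'M by simp
    moreover have "mate A x' \<notin> ?M" using colA[of x'] x'M by blast
    ultimately show "mate B x \<notin> ?M" by simp
  next
    assume bM: "mate B x \<notin> ?M"
    show "x \<in> ?M"
    proof (rule ccontr)
      assume "x \<notin> ?M"
      then have aM: "mate A x \<in> ?M" using colA[OF x] by blast
      have "p (mate A x) = rot (mate A x)" using tight_perm_eq_rot[OF p] aM by blast
      also have "\<dots> = mate B x" unfolding rot_def using mate_mate[OF mA x] by simp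
      finally have "p (mate A x) = mate B x" .
      then show False using pM[OF aM] bM by simp
    qed
  qed
  show ?thesis unfolding transversal_def using colA colB by blast
qed

lemma tight_perm_eq_rot_on:
  assumes p: "p \<in> tight_perms" shows "p = rot_on {x\<in>S. p x \<noteq> x}"
proof
  fix x
  have pp: "p permutes S" using p unfolding tight_perms_def by simp
  show "p x = rot_on {x\<in>S. p x \<noteq> x} x"
  proof (cases "x \<in> S \<and> p x \<noteq> x")
    case True then show ?thesis using tight_perm_eq_rot[OF p] unfolding rot_on_def by simp
  next
    case False then have "p x = x" using permutes_not_in[OF pp] by blast
    then show ?thesis unfolding rot_on_def by simp
  qed
qed

lemma card_tight_perms: "card tight_perms = card {M. transversal M}"
proof -
  have img: "tight_perms = rot_on ` {M. transversal M}"
  proof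
    show "tight_perms \<subseteq> rot_on ` {M. transversal M}" using tight_perm_transversal tight_perm_eq_rot_on by blast
    show "rot_on ` {M. transversal M} \<subseteq> tight_perms"
    proof
      fix p assume "p \<in> rot_on ` {M. transversal M}"
      then obtain M where M: "transversal M" "p = rot_on M" by blast
      have "card {x\<in>S. p x \<noteq> x} = card A" using rot_on_moved[OF M(1)] card_transversal[OF M(1)] M(2) by simp
      then show "p \<in> tight_perms" unfolding tight_perms_def using rot_on_permutes[OF M(1)] act_rot_on[OF M(1)] rot_on_touching[OF M(1)] M(2) by simp
    qed
  qed
  have "inj_on rot_on {M. transversal M}"
  proof (rule inj_onI)
    fix M1 M2 assume a: "M1 \<in> {M. transversal M}" "M2 \<in> {M. transversal M}" and e: "rot_on M1 = rot_on M2"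
    have "M1 = {x\<in>S. rot_on M1 x \<noteq> x}" using rot_on_moved[of M1] a(1) by simp
    also have "\<dots> = {x\<in>S. rot_on M2 x \<noteq> x}" using e by simp
    also have "\<dots> = M2" using rot_on_moved[of M2] a(2) by simp
    finally show "M1 = M2" .
  qed
  then show ?thesis using img card_image by simp
qed

end
end

context mpair begin
context assumes nc: "\<forall>x\<in>S. mate A x \<noteq> mate B x"
begin

lemma walk_period_ge4: "x \<in> S \<Longrightarrow> 4 \<le> walk_period A B x"
proof -
  assume x: "x \<in> S"
  have "walk_period A B x \<noteq> 2" using walk_period_eq_2_iff[OF x] nc x by simp
  then show ?thesis using walk_period_even[OF x] walk_period_ge2[OF x] by presburger
qed

context fixes M assumes c: "transversal M"
begin

lemma transversal_subset: "M \<subseteq> S" using c unfolding transversal_def by blast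

lemma funpow_rot_on: "x \<in> M \<Longrightarrow> (rot_on M ^^ n) x = alt_walk A B x (2*n)"
proof (induction n)
  case 0 then show ?case by simp
next
  case (Suc n)
  have xS: "x \<in> S" using Suc.prems transversal_subset by blast
  have wM: "alt_walk A B x (2*n) \<in> M" using transversal_alt_walk[OF c xS, of "2*n"] Suc.prems by simp
  have "(rot_on M ^^ Suc n) x = rot_on M (alt_walk A B x (2*n))" using Suc by simp
  also have "\<dots> = mate B (mate A (alt_walk A B x (2*n)))" using wM unfolding rot_on_def rot_def by simp
  also have "\<dots> = alt_walk A B x (2 * Suc n)" by (simp add: alt_walk.simps(2))
  finally show ?case .
qed

lemma alt_walk_in_comp_of: "x \<in> S \<Longrightarrow> alt_walk A B x k \<in> comp_of S A B x"
  using range_alt_walk comp_of_eq_alt_walk by blast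

lemma orbit_rot_on_in: assumes xM: "x \<in> M" shows "orbit (rot_on M) x = M \<inter> comp_of S A B x"
proof -
  have xS: "x \<in> S" using xM transversal_subset by blast
  have p: "rot_on M permutes S" using rot_on_permutes[OF nc c] .
  have "orbit (rot_on M) x = {(rot_on M ^^ n) x | n. True}" using orbit_eq_funpow_set[OF p fin] by simp
  also have "\<dots> = {alt_walk A B x (2*n) | n. True}" using funpow_rot_on[OF xM] by simp
  also have "\<dots> = M \<inter> comp_of S A B x"
  proof
    show "{alt_walk A B x (2*n) | n. True} \<subseteq> M \<inter> comp_of S A B x"
      using transversal_alt_walk[OF c xS] xM alt_walk_in_comp_of[OF xS] by auto
    show "M \<inter> comp_of S A B x \<subseteq> {alt_walk A B x (2*n) | n. True}"
    proof
      fix y assume y: "y \<in> M \<inter> comp_of S A B x"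
      then obtain i where i: "y = alt_walk A B x i" using comp_of_eq_alt_walk[OF xS] by blast
      have "even i" using transversal_alt_walk[OF c xS, of i] i y xM by simp
      then obtain n where "i = 2*n" by blast
      then show "y \<in> {alt_walk A B x (2*n) | n. True}" using i by blast
    qed
  qed
  finally show ?thesis .
qed

lemma orbit_rot_on_out: assumes x: "x \<notin> M" shows "orbit (rot_on M) x = {x}"
  using orbit_eq_singleton_iff[of "rot_on M" x] x unfolding rot_on_def by simp

lemma card_transversal_comp: assumes x: "x \<in> S" shows "2 * card (M \<inter> comp_of S A B x) = card (comp_of S A B x)"
proof -
  define C where "C = comp_of S A B x"
  have CS: "C \<subseteq> S" unfolding C_def by (rule comp_of_subset)
  have fC: "finite C" using CS fin finite_subset by blast
  have img: "mate A ` (M \<inter> C) = C - M"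
  proof
    show "mate A ` (M \<inter> C) \<subseteq> C - M"
      using c CS comp_of_mate_A unfolding transversal_def C_def by blast
    show "C - M \<subseteq> mate A ` (M \<inter> C)"
    proof
      fix y assume y: "y \<in> C - M"
      have yS: "y \<in> S" using y CS by blast
      have "mate A y \<in> M" using c y yS unfolding transversal_def by blast
      moreover have "mate A y \<in> C" using comp_of_mate_A y unfolding C_def by blast
      moreover have "mate A (mate A y) = y" using mate_mate[OF mA yS] .
      ultimately show "y \<in> mate A ` (M \<inter> C)" by (intro image_eqI[of _ _ "mate A y"]) auto
    qed
  qed
  have inj: "inj_on (mate A) (M \<inter> C)"
  proof (rule inj_onI)
    fix a b assume "a \<in> M \<inter> C" "b \<in> M \<inter> C" "mate A a = mate A b"
    then have "mate A (mate A a) = mate A (mate A b)" by simp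
    moreover have "a \<in> S" "b \<in> S" using \<open>a \<in> M \<inter> C\<close> \<open>b \<in> M \<inter> C\<close> CS by auto
    ultimately show "a = b" using mate_mate[OF mA] by simp
  qed
  have "card (C - M) = card (M \<inter> C)" using card_image[OF inj] img by simp
  moreover have "card C = card (M \<inter> C) + card (C - M)"
  proof -
    have "card ((M \<inter> C) \<union> (C - M)) = card (M \<inter> C) + card (C - M)"
      by (rule card_Un_disjoint) (use fC in auto)
    moreover have "(M \<inter> C) \<union> (C - M) = C" by blast
    ultimately show ?thesis by simp
  qed
  ultimately show ?thesis unfolding C_def by simp
qed

lemma card_transversal_Int_comp_of:
  assumes C: "C \<in> comp_of S A B ` S"
  shows "card (M \<inter> C) = card C div 2" "2 \<le> card (M \<inter> C)"
proof -
  obtain x where x: "x \<in> S" "C = comp_of S A B x" using C by blast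
  have e: "2 * card (M \<inter> C) = card C" using card_transversal_comp[OF x(1)] x(2) by simp
  then show "card (M \<inter> C) = card C div 2" by simp
  have "4 \<le> card C" using walk_period_ge4[OF x(1)] card_comp_of[OF x(1)] x(2) by simp
  then show "2 \<le> card (M \<inter> C)" using e by simp
qed

lemma orbits_rot_on:
  "orbit (rot_on M) ` S = (\<lambda>y. {y}) ` (S - M) \<union> (\<lambda>C. M \<inter> C) ` (comp_of S A B ` S)"
proof
  show "orbit (rot_on M) ` S \<subseteq> (\<lambda>y. {y}) ` (S - M) \<union> (\<lambda>C. M \<inter> C) ` (comp_of S A B ` S)"
    using orbit_rot_on_in orbit_rot_on_out by blast
  have "M \<inter> comp_of S A B x \<in> orbit (rot_on M) ` S" if x: "x \<in> S" for x
  proof (cases "x \<in> M")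
    case True then show ?thesis using orbit_rot_on_in x by blast
  next
    case False
    then have aM: "mate A x \<in> M" using c x unfolding transversal_def by blast
    have "comp_of S A B (mate A x) = comp_of S A B x"
      by (rule comp_of_eq[OF comp_of_mate_A[OF comp_of_self[OF x]]])
    then show ?thesis using orbit_rot_on_in[OF aM] aM transversal_subset by (metis imageI subsetD)
  qed
  then show "(\<lambda>y. {y}) ` (S - M) \<union> (\<lambda>C. M \<inter> C) ` (comp_of S A B ` S) \<subseteq> orbit (rot_on M) ` S"
    using orbit_rot_on_out by blast
qed

lemma nontrivial_cycle_type_rot_on: "filter_mset (\<lambda>l. 2 \<le> l) (cycle_type S (rot_on M)) =
     image_mset (\<lambda>C. card C div 2) (mset_set (comp_of S A B ` S))"
proof -
  let ?X = "comp_of S A B ` S"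
  let ?Sing = "(\<lambda>y. {y}) ` (S - M)" and ?Half = "(\<lambda>C. M \<inter> C) ` ?X"
  have fX: "finite ?X" using fin by simp
  have "{Ob \<in> ?Sing \<union> ?Half. 2 \<le> card Ob} = ?Half"
    using card_transversal_Int_comp_of(2) by auto
  then have "filter_mset (\<lambda>l. 2 \<le> l) (cycle_type S (rot_on M)) = image_mset card (mset_set ?Half)"
    using cycle_type_eq_orbits[OF rot_on_permutes[OF nc c] fin] orbits_rot_on fin
    by (simp add: filter_mset_image_mset)
  also have "\<dots> = image_mset (card \<circ> (\<lambda>C. M \<inter> C)) (mset_set ?X)"
  proof -
    have "inj_on (\<lambda>C. M \<inter> C) ?X"
    proof (rule inj_onI)
      fix C1 C2 assume C: "C1 \<in> ?X" "C2 \<in> ?X" and e: "M \<inter> C1 = M \<inter> C2"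
      have "M \<inter> C1 \<noteq> {}" using card_transversal_Int_comp_of(2)[OF C(1)] by auto
      then show "C1 = C2" using e C comp_of_disjoint by blast
    qed
    then have "mset_set ?Half = image_mset (\<lambda>C. M \<inter> C) (mset_set ?X)"
      by (rule image_mset_mset_set[symmetric])
    then show ?thesis by (simp add: multiset.map_comp)
  qed
  also have "\<dots> = image_mset (\<lambda>C. card C div 2) (mset_set ?X)"
    by (rule image_mset_cong) (use card_transversal_Int_comp_of(1) fX in auto)
  finally show ?thesis .
qed

end
end
end

context mpair begin

lemma mate_neq_if_no_2: "2 \<notin># mdist_on S A B \<Longrightarrow> x \<in> S \<Longrightarrow> mate A x \<noteq> mate B x"
  using walk_period_eq_2_iff card_comp_of fin unfolding mdist_on_def by force

context assumes nc: "\<forall>x\<in>S. mate A x \<noteq> mate B x"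
begin

text \<open>A permutation touching all \<open>card A\<close> edges of \<open>A\<close> with only \<open>card A\<close> moved points is
  tight, so it is \<open>rot_on M\<close> for a transversal \<open>M\<close> and its cycle type is forced.\<close>

lemma perms_touching_all_eq:
  assumes k: "sum_mset mu = card A"
  shows "{p. p permutes S \<and> filter_mset (\<lambda>l. 2 \<le> l) (cycle_type S p) = mu \<and> act p A = B
            \<and> (\<forall>e\<in>A. \<exists>x\<in>e. p x \<noteq> x)}
       = (if mu = image_mset (\<lambda>C. card C div 2) (mset_set (comp_of S A B ` S)) then tight_perms else {})"
proof -
  let ?half = "image_mset (\<lambda>C. card C div 2) (mset_set (comp_of S A B ` S))"
  have half: "filter_mset (\<lambda>l. 2 \<le> l) (cycle_type S p) = ?half" if p: "p \<in> tight_perms" for p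
    using nontrivial_cycle_type_rot_on[OF nc tight_perm_transversal[OF nc p]] tight_perm_eq_rot_on[OF nc p]
    by metis
  have "{p. p permutes S \<and> filter_mset (\<lambda>l. 2 \<le> l) (cycle_type S p) = mu \<and> act p A = B
            \<and> (\<forall>e\<in>A. \<exists>x\<in>e. p x \<noteq> x)}
      = {p \<in> tight_perms. filter_mset (\<lambda>l. 2 \<le> l) (cycle_type S p) = mu}"
    using sum_nontrivial_cycle_type[OF _ fin] k unfolding tight_perms_def[OF nc] by fastforce
  also have "\<dots> = (if mu = ?half then tight_perms else {})" using half by auto
  finally show ?thesis .
qed

end
end

theorem touch_count_top:
  assumes tau: "\<forall>x\<in>#tau. 2 \<le> x" and k: "sum_mset tau = k" and muk: "sum_mset mu = k"
  shows "touch_count mu tau k = (if tau = mu then 2 ^ size tau else 0)"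
proof -
  interpret mpair "{1..2*k}" "Imatch k" "ref_matching tau k"
    using mpair_ref_matching[OF tau] k by simp
  have md: "mdist_on {1..2*k} (Imatch k) (ref_matching tau k) = dbl tau"
    using ref_matching_prop(2)[OF tau] k by (simp add: pad1_def)
  have nc: "\<forall>x\<in>{1..2*k}. mate (Imatch k) x \<noteq> mate (ref_matching tau k) x"
    using mate_neq_if_no_2 md tau unfolding dbl_def by fastforce
  let ?X = "comp_of {1..2*k} (Imatch k) (ref_matching tau k) ` {1..2*k}"
  have "image_mset (\<lambda>C. card C div 2) (mset_set ?X)
      = image_mset (\<lambda>m. m div 2) (image_mset card (mset_set ?X))"
    by (simp add: multiset.map_comp comp_def)
  also have "\<dots> = image_mset (\<lambda>m. m div 2) (dbl tau)" using md unfolding mdist_on_def by simp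
  finally have half: "image_mset (\<lambda>C. card C div 2) (mset_set ?X) = tau"
    unfolding dbl_def by (simp add: multiset.map_comp comp_def)
  have "card ?X = size tau" using arg_cong[OF md, of size] unfolding mdist_on_def dbl_def by simp
  then have "card tight_perms = 2 ^ size tau" using card_tight_perms[OF nc] card_transversals by simp
  then show ?thesis
    using perms_touching_all_eq[OF nc] half card_Imatch muk
    unfolding touch_count_def perm_count_def by auto
qed

lemma mdist_on_eq_dbl_pad1: assumes m: "mpair S A B" and cS: "card S = 2 * n"
  shows "\<exists>tau. tau \<in> P2n n \<and> mdist_on S A B = dbl (pad1 tau n)"
proof -
  interpret mpair S A B by (rule m)
  define H where "H = image_mset (\<lambda>m. m div 2) (mdist_on S A B)"
  have dH: "dbl H = mdist_on S A B"
  proof -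
    have "dbl H = image_mset (\<lambda>m. 2 * (m div 2)) (mdist_on S A B)"
      unfolding dbl_def H_def by (simp add: multiset.map_comp comp_def)
    also have "\<dots> = image_mset (\<lambda>m. m) (mdist_on S A B)"
      by (rule image_mset_cong) (use mdist_on_member in auto)
    finally show ?thesis by simp
  qed
  have H1: "\<forall>x\<in>#H. 1 \<le> x" unfolding H_def using mdist_on_member by fastforce
  have "2 * sum_mset H = 2 * n" using sum_dbl[of H] dH sum_mdist_on cS by simp
  then have Hs: "sum_mset H = n" by simp
  define tau where "tau = filter_mset (\<lambda>l. 2 \<le> l) H"
  have tP: "tau \<in> P2n n"
  proof -
    have "sum_mset tau \<le> sum_mset H" unfolding tau_def using sum_filter_le .
    then show ?thesis unfolding P2n_def P2_def tau_def using Hs by auto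
  qed
  have "pad1 tau n = H" unfolding tau_def by (rule pad1_filter[OF H1 Hs])
  then show ?thesis using tP dH by metis
qed

section \<open>The coefficients \<open>d\<^sup>\<tau>\<^sub>\<mu>(2n)\<close>\<close>

definition dcoef_explicit :: "nat multiset \<Rightarrow> nat \<Rightarrow> nat multiset \<Rightarrow> complex" where
  "dcoef_explicit mu n tau = (if tau \<in> P2n n then of_nat (perm_count mu False {1..2*n} (Imatch n) (ref_matching tau n)) else 0)"

lemma finite_P2n: "finite (P2n n)"
proof -
  have "P2n n \<subseteq> (\<Union>m\<in>{..n}. multisets_of_size {..n} m)"
  proof
    fix tau assume t: "tau \<in> P2n n"
    then have t2: "\<forall>x\<in>#tau. 2 \<le> x" and ts: "sum_mset tau \<le> n" using P2n_D by auto
    have "x \<le> sum_mset tau" if xt: "x \<in># tau" for x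
    proof -
      obtain T where "tau = add_mset x T" using multi_member_split[OF xt] by blast
      then show ?thesis by simp
    qed
    then have "set_mset tau \<subseteq> {..n}" using ts by fastforce
    moreover have "size tau \<le> sum_mset tau"
      using t2 by (induction tau) auto
    ultimately show "tau \<in> (\<Union>m\<in>{..n}. multisets_of_size {..n} m)"
      unfolding multisets_of_size_def using ts by auto
  qed
  moreover have "finite (\<Union>m\<in>{..n}. multisets_of_size {..n} m)" by auto
  ultimately show ?thesis by (rule finite_subset)
qed

lemma Mop_eq_indicator: assumes A: "A \<in> pmatch n" and B: "B \<in> pmatch n"
  and md: "mdist_on {1..2*n} A B = dbl (pad1 tau0 n)" and t0: "tau0 \<in> P2n n" and t: "tau \<in> P2n n"
  shows "Mop tau n A B = (if tau = tau0 then 1 else 0)"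
proof -
  have "sum_mset tau \<le> n" using P2n_D[OF t] by simp
  then have "Mop tau n A B = (if mdist_on {1..2*n} A B = dbl (pad1 tau n) then 1 else 0)"
    unfolding Mop_def Nop_def using B mdist_eq_mdist_on by simp
  also have "(mdist_on {1..2*n} A B = dbl (pad1 tau n)) \<longleftrightarrow> tau = tau0"
    using md dbl_pad1_inj[of tau tau0 n] P2n_D[OF t] P2n_D[OF t0] by auto
  finally show ?thesis .
qed

lemma Mop_out: "B \<notin> pmatch n \<Longrightarrow> Mop tau n A B = 0"
  unfolding Mop_def Nop_def by simp

lemma sum_indicator: "finite P \<Longrightarrow> t0 \<in> P \<Longrightarrow> (\<Sum>t\<in>P. c t * (if t = t0 then 1 else 0)) = (c t0 :: complex)"
  by (simp add: if_distrib sum.delta' cong: if_cong)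

lemma act_pmatch: assumes A: "A \<in> pmatch n" and p: "p permutes {1..2*n}" shows "act p A \<in> pmatch n"
proof -
  have "is_matching (p ` {1..2*n}) (act p A)" using is_matching_act[OF _ permutes_inj_on[OF p]] A pmatch_iff_is_matching by blast
  then show ?thesis using permutes_image[OF p] pmatch_iff_is_matching by simp
qed

lemma fop_out: assumes A: "A \<in> pmatch n" and B: "B \<notin> pmatch n" shows "fop mu n A B = 0"
proof -
  have "act p A \<noteq> B" if "p permutes {1..2*n}" for p using act_pmatch[OF A that] B by auto
  then show ?thesis unfolding fop_eq_perm_count perm_count_def by (auto simp: card_eq_0_iff)
qed

lemma mpair_pmatch: "A \<in> pmatch n \<Longrightarrow> B \<in> pmatch n \<Longrightarrow> mpair {1..2*n} A B"
  unfolding mpair_def pmatch_iff_is_matching by simp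

lemma ref_matching_pmatch: "tau \<in> P2n n \<Longrightarrow> ref_matching tau n \<in> pmatch n"
  using ref_matching_prop(1) P2n_D pmatch_iff_is_matching by blast

lemma Imatch_pmatch: "Imatch n \<in> pmatch n" using is_matching_Imatch pmatch_iff_is_matching by blast

lemma mdist_on_ref_matching: "tau \<in> P2n n \<Longrightarrow> mdist_on {1..2*n} (Imatch n) (ref_matching tau n) = dbl (pad1 tau n)"
  using ref_matching_prop(2) P2n_D by blast

lemma fop_expansion: assumes A: "A \<in> pmatch n"
  shows "fop mu n A B = (\<Sum>tau\<in>P2n n. dcoef_explicit mu n tau * Mop tau n A B)"
proof (cases "B \<in> pmatch n")
  case False
  then show ?thesis using fop_out[OF A False] Mop_out[OF False] by simp
next
  case True
  have m: "mpair {1..2*n} A B" using mpair_pmatch[OF A True] .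
  obtain tau0 where t0: "tau0 \<in> P2n n" "mdist_on {1..2*n} A B = dbl (pad1 tau0 n)"
    using mdist_on_eq_dbl_pad1[OF m] by auto
  have "(\<Sum>tau\<in>P2n n. dcoef_explicit mu n tau * Mop tau n A B) = (\<Sum>tau\<in>P2n n. dcoef_explicit mu n tau * (if tau = tau0 then 1 else 0))"
    using Mop_eq_indicator[OF A True t0(2) t0(1)] by simp
  also have "\<dots> = dcoef_explicit mu n tau0" by (rule sum_indicator[OF finite_P2n t0(1)])
  also have "\<dots> = of_nat (perm_count mu False {1..2*n} (Imatch n) (ref_matching tau0 n))" unfolding dcoef_explicit_def using t0(1) by simp
  also have "\<dots> = of_nat (perm_count mu False {1..2*n} A B)"
    using perm_count_iso_invariant[OF mpair_pmatch[OF Imatch_pmatch ref_matching_pmatch[OF t0(1)]] m] mdist_on_ref_matching[OF t0(1)] t0(2) by simp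
  also have "\<dots> = fop mu n A B" unfolding fop_eq_perm_count ..
  finally show ?thesis by simp
qed

lemma dcoef_eq_explicit: "dcoef mu n = dcoef_explicit mu n"
  unfolding dcoef_def
proof (rule the_equality)
  show "(\<forall>tau. tau \<notin> P2n n \<longrightarrow> dcoef_explicit mu n tau = 0) \<and>
        (\<forall>A\<in>pmatch n. fop mu n A = (\<lambda>B. \<Sum>tau\<in>P2n n. dcoef_explicit mu n tau * Mop tau n A B))"
    using fop_expansion by (auto simp: dcoef_explicit_def)
next
  fix d assume h: "(\<forall>tau. tau \<notin> P2n n \<longrightarrow> d tau = 0) \<and>
        (\<forall>A\<in>pmatch n. fop mu n A = (\<lambda>B. \<Sum>tau\<in>P2n n. d tau * Mop tau n A B))"
  show "d = dcoef_explicit mu n"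
  proof
    fix tau show "d tau = dcoef_explicit mu n tau"
    proof (cases "tau \<in> P2n n")
      case False then show ?thesis using h unfolding dcoef_explicit_def by simp
    next
      case True
      define B where "B = ref_matching tau n"
      have Mv: "Mop t n (Imatch n) B = (if t = tau then 1 else 0)" if "t \<in> P2n n" for t
        using Mop_eq_indicator[OF Imatch_pmatch ref_matching_pmatch[OF True] mdist_on_ref_matching[OF True] True that] unfolding B_def .
      have "fop mu n (Imatch n) B = (\<Sum>t\<in>P2n n. d t * Mop t n (Imatch n) B)" using h Imatch_pmatch by metis
      also have "\<dots> = (\<Sum>t\<in>P2n n. d t * (if t = tau then 1 else 0))" using Mv by simp
      also have "\<dots> = d tau" by (rule sum_indicator[OF finite_P2n True])
      finally have 1: "fop mu n (Imatch n) B = d tau" .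
      have "fop mu n (Imatch n) B = (\<Sum>t\<in>P2n n. dcoef_explicit mu n t * Mop t n (Imatch n) B)" using fop_expansion[OF Imatch_pmatch] .
      also have "\<dots> = (\<Sum>t\<in>P2n n. dcoef_explicit mu n t * (if t = tau then 1 else 0))" using Mv by simp
      also have "\<dots> = dcoef_explicit mu n tau" by (rule sum_indicator[OF finite_P2n True])
      finally show ?thesis using 1 by simp
    qed
  qed
qed

lemma dcoef_eq_perm_count: "tau \<in> P2n n \<Longrightarrow> dcoef mu n tau = of_nat (perm_count mu False {1..2*n} (Imatch n) (ref_matching tau n))"
  unfolding dcoef_eq_explicit dcoef_explicit_def by simp

lemma dcoef_expansion: "A \<in> pmatch n \<Longrightarrow> fop mu n A B = (\<Sum>tau\<in>P2n n. dcoef mu n tau * Mop tau n A B)"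
  unfolding dcoef_eq_explicit by (rule fop_expansion)

lemma touch_count_eq_0_if_small: "2*r < sum_mset mu \<Longrightarrow> touch_count mu tau r = 0"
  unfolding touch_count_def by (rule perm_count_eq_0_if_large) auto

lemma touch_count_eq_0_if_large: "sum_mset mu < r \<Longrightarrow> touch_count mu tau r = 0"
  unfolding touch_count_def by (rule perm_count_eq_0_if_many_edges[OF is_matching_Imatch]) (auto simp: card_Imatch)

lemma touch_count_top_eq_0: assumes t2: "\<forall>x\<in>#tau. 2 \<le> x" and j: "sum_mset tau = j" and jk: "j < k" and k: "sum_mset mu = k"
  shows "touch_count mu tau k = 0"
proof -
  have tk: "sum_mset tau \<le> k" using j jk by simp
  have m: "mpair {1..2*k} (Imatch k) (ref_matching tau k)" using mpair_ref_matching[OF t2 tk] .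
  have "card (Imatch k \<inter> ref_matching tau k) = count (mdist_on {1..2*k} (Imatch k) (ref_matching tau k)) 2"
    using mpair.count_mdist_on_2[OF m] by simp
  also have "\<dots> = count (dbl tau + replicate_mset (k - j) 2) 2" using ref_matching_prop(2)[OF t2 tk] dbl_pad[OF tk] j by simp
  also have "\<dots> = k - j" using count_dbl_2[OF t2] by simp
  finally have "card (Imatch k \<inter> ref_matching tau k) > 0" using jk by simp
  then have ne: "Imatch k \<inter> ref_matching tau k \<noteq> {}" by (metis card.empty less_irrefl)
  show ?thesis unfolding touch_count_def by (rule perm_count_eq_0_if_common_edge[OF m _ ne]) (use card_Imatch k in simp)
qed

lemma mcount_eq_perm_count: assumes mu2: "\<forall>x\<in>#mu. 2 \<le> x" and k: "sum_mset mu = k" and ks: "k \<le> 2*s"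
  shows "mcount (pad1 mu (2*s)) (dbl (pad1 tau s)) = perm_count mu False {1..2*s} (Imatch s) (ref_matching tau s)"
proof -
  have sp: "sum_mset (pad1 mu (2*s)) div 2 = s" unfolding pad1_def using k ks by simp
  have "mcount (pad1 mu (2*s)) (dbl (pad1 tau s)) = card {p. p permutes {1..2*s} \<and> cycle_type {1..2*s} p = pad1 mu (2*s) \<and> act p (Imatch s) = ref_matching tau s}"
    unfolding mcount_def Let_def sp ref_matching_def ..
  also have "{p. p permutes {1..2*s} \<and> cycle_type {1..2*s} p = pad1 mu (2*s) \<and> act p (Imatch s) = ref_matching tau s}
      = {p. p permutes {1..2*s} \<and> filter_mset (\<lambda>l. 2 \<le> l) (cycle_type {1..2*s} p) = mu \<and> act p (Imatch s) = ref_matching tau s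
          \<and> (False \<longrightarrow> (\<forall>e\<in>Imatch s. \<exists>x\<in>e. p x \<noteq> x))}"
  proof -
    have "cycle_type {1..2*s} p = pad1 mu (2*s) \<longleftrightarrow> filter_mset (\<lambda>l. 2 \<le> l) (cycle_type {1..2*s} p) = mu"
      if p: "p permutes {1..2*s}" for p
      using nontrivial_cycle_type_eq_iff[OF p _ mu2, of] k ks by simp
    then show ?thesis by blast
  qed
  finally show ?thesis unfolding perm_count_def .
qed

lemma dcoef_eq_sum_touch_count:
  assumes tau: "tau \<in> P2n n"
  shows "dcoef mu n tau = of_nat (\<Sum>r = sum_mset tau..n.
           ((n - sum_mset tau) choose (r - sum_mset tau)) * touch_count mu tau r)"
proof -
  have "\<forall>x\<in>#tau. 2 \<le> x" "sum_mset tau \<le> n" using P2n_D[OF tau] by auto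
  then show ?thesis
    using dcoef_eq_perm_count[OF tau] perm_count_eq_sum_touch_count[OF mpair_pmatch[OF Imatch_pmatch
        ref_matching_pmatch[OF tau]] _ mdist_on_ref_matching[OF tau]]
    by simp
qed

lemma mcount_eq_sum_touch_count:
  assumes mu2: "\<forall>x\<in>#mu. 2 \<le> x" and k: "sum_mset mu = k" and ks: "k \<le> 2 * s"
    and t2: "\<forall>x\<in>#tau. 2 \<le> x" and j: "sum_mset tau = j" and js: "j \<le> s"
  shows "int (mcount (pad1 mu (2 * s)) (dbl (pad1 tau s)))
       = (\<Sum>t = j..s. int ((s - j) choose (t - j)) * int (touch_count mu tau t))"
proof -
  have tau: "tau \<in> P2n s" unfolding P2n_def P2_def using t2 j js by simp
  have "perm_count mu False {1..2*s} (Imatch s) (ref_matching tau s)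
      = (\<Sum>t = j..s. ((s - j) choose (t - j)) * touch_count mu tau t)"
    using perm_count_eq_sum_touch_count[OF mpair_pmatch[OF Imatch_pmatch ref_matching_pmatch[OF tau]]
        _ mdist_on_ref_matching[OF tau] t2 j js] by simp
  then show ?thesis using mcount_eq_perm_count[OF mu2 k ks, of tau] by simp
qed

text \<open>Each touched edge carries one or two of the \<open>k\<close> moved points; for \<open>r = k\<close> it carries
  exactly one, which is impossible for an edge of \<open>I \<inter> B\<close>.\<close>

lemma touch_count_eq_0_outside:
  assumes t2: "\<forall>x\<in>#tau. 2 \<le> x" and j: "sum_mset tau = j" and jk: "j < k" and k: "sum_mset mu = k"
    and r: "r < max j ((k + 1) div 2) \<or> k \<le> r" and jr: "j \<le> r"
  shows "touch_count mu tau r = 0"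
proof -
  consider "2 * r < k" | "r = k" | "k < r" using r jr by linarith
  then show ?thesis
    using touch_count_eq_0_if_small[of r mu tau] touch_count_top_eq_0[OF t2 j jk k]
      touch_count_eq_0_if_large[of mu r tau] k by cases auto
qed

lemma touch_count_eq_alternating_sum:
  assumes mu2: "\<forall>x\<in>#mu. 2 \<le> x" and k: "sum_mset mu = k"
    and t2: "\<forall>x\<in>#tau. 2 \<le> x" and j: "sum_mset tau = j" and jk: "j < k"
    and r: "max j ((k + 1) div 2) \<le> r"
  shows "int (touch_count mu tau r) = (\<Sum>s = max j ((k + 1) div 2)..r.
           (-1) ^ (r - s) * int ((r - j) choose (s - j)) * int (mcount (pad1 mu (2 * s)) (dbl (pad1 tau s))))"
proof -
  let ?lo = "max j ((k + 1) div 2)"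
  let ?G = "\<lambda>s. \<Sum>t = j..s. int ((s - j) choose (t - j)) * int (touch_count mu tau t)"
  have jr: "j \<le> r" using r by simp
  have G0: "?G s = 0" if "s < ?lo" for s
    using touch_count_eq_0_outside[OF t2 j jk k] that by (intro sum.neutral) auto
  have "int (touch_count mu tau r) = (\<Sum>s = j..r. (-1) ^ (r - s) * int ((r - j) choose (s - j)) * ?G s)"
    using binomial_inversion[OF jr, of "\<lambda>t. int (touch_count mu tau t)"] by simp
  also have "\<dots> = (\<Sum>s = ?lo..r. (-1) ^ (r - s) * int ((r - j) choose (s - j)) * ?G s)"
    using G0 by (intro sum.mono_neutral_right) auto
  also have "\<dots> = (\<Sum>s = ?lo..r. (-1) ^ (r - s) * int ((r - j) choose (s - j))
                   * int (mcount (pad1 mu (2 * s)) (dbl (pad1 tau s))))"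
    using mcount_eq_sum_touch_count[OF mu2 k _ t2 j] by (intro sum.cong refl) auto
  finally show ?thesis .
qed

lemma dcoef_eq_0_if_bigger:
  assumes mu: "mu \<in> P2n n" and tau: "tau \<in> P2n n" and lt: "sum_mset mu < sum_mset tau"
  shows "dcoef mu n tau = 0"
  using dcoef_eq_sum_touch_count[OF tau, of mu] touch_count_eq_0_if_large[of mu _ tau] lt by simp

lemma dcoef_eq_top_touch_count:
  assumes mu: "mu \<in> P2n n" and tau: "tau \<in> P2n n" and eq: "sum_mset tau = sum_mset mu"
  shows "dcoef mu n tau = touch_count mu tau (sum_mset mu)"
proof -
  let ?k = "sum_mset mu"
  have kn: "?k \<le> n" using P2n_D[OF mu] by simp
  have "(\<Sum>r = ?k..n. ((n - ?k) choose (r - ?k)) * touch_count mu tau r)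
      = (\<Sum>r = ?k..n. if r = ?k then touch_count mu tau ?k else 0)"
    using touch_count_eq_0_if_large[of mu _ tau] by (intro sum.cong refl) auto
  then show ?thesis using dcoef_eq_sum_touch_count[OF tau, of mu] eq kn by simp
qed

lemma dcoef_eq_0_if_same_size:
  assumes mu: "mu \<in> P2n n" and tau: "tau \<in> P2n n" and eq: "sum_mset tau = sum_mset mu"
    and ne: "tau \<noteq> mu"
  shows "dcoef mu n tau = 0"
  using dcoef_eq_top_touch_count[OF mu tau eq] touch_count_top[OF _ eq refl] P2n_D[OF tau] ne by simp

lemma dcoef_diagonal: "mu \<in> P2n n \<Longrightarrow> dcoef mu n mu = 2 ^ size mu"
  using dcoef_eq_top_touch_count touch_count_top P2n_D by simp

lemma dcoef_formula:
  assumes mu: "mu \<in> P2n n" and tau: "tau \<in> P2n n"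
    and k: "sum_mset mu = k" and j: "sum_mset tau = j" and jk: "j < k"
  shows "dcoef mu n tau = of_int
           (\<Sum>r = max j ((k + 1) div 2)..k - 1.
              (\<Sum>s = max j ((k + 1) div 2)..r.
                  (-1) ^ (r - s) * int ((r - j) choose (s - j))
                  * int (mcount (pad1 mu (2 * s)) (dbl (pad1 tau s))))
              * int ((n - j) choose (r - j)))"
proof -
  let ?lo = "max j ((k + 1) div 2)"
  have mu2: "\<forall>x\<in>#mu. 2 \<le> x" and kn: "k \<le> n" using P2n_D[OF mu] k by auto
  have t2: "\<forall>x\<in>#tau. 2 \<le> x" using P2n_D[OF tau] by simp
  have "int (\<Sum>r = j..n. ((n - j) choose (r - j)) * touch_count mu tau r)
      = (\<Sum>r = j..n. int (touch_count mu tau r) * int ((n - j) choose (r - j)))"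
    by (simp add: mult.commute)
  also have "\<dots> = (\<Sum>r = ?lo..k - 1. int (touch_count mu tau r) * int ((n - j) choose (r - j)))"
    by (intro sum.mono_neutral_right) (use kn jk in \<open>auto intro!: touch_count_eq_0_outside[OF t2 j jk k]\<close>)
  also have "\<dots> = (\<Sum>r = ?lo..k - 1.
                   (\<Sum>s = ?lo..r. (-1) ^ (r - s) * int ((r - j) choose (s - j))
                      * int (mcount (pad1 mu (2 * s)) (dbl (pad1 tau s))))
                   * int ((n - j) choose (r - j)))"
    using touch_count_eq_alternating_sum[OF mu2 k t2 j jk] by (intro sum.cong refl) auto
  finally show ?thesis using dcoef_eq_sum_touch_count[OF tau, of mu] j by (metis of_int_of_nat_eq)
qed

lemma act_id: "act id B = B" unfolding act_def by simp

section \<open>The basis \<open>f(\<mu>, 2n)\<close>\<close>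

lemma equivariant_fop: "equivariant_op n (fop mu n)"
  unfolding equivariant_op_def
proof (intro conjI ballI allI impI)
  fix A B assume A: "A \<in> pmatch n" and B: "B \<notin> pmatch n"
  show "fop mu n A B = 0" by (rule fop_out[OF A B])
next
  fix p A B assume p: "p permutes {1..2*n}" and A: "A \<in> pmatch n"
  have pA: "act p A \<in> pmatch n" by (rule act_pmatch[OF A p])
  show "fop mu n (act p A) (act p B) = fop mu n A B"
  proof (cases "B \<in> pmatch n")
    case True
    have pB: "act p B \<in> pmatch n" by (rule act_pmatch[OF True p])
    have m: "mpair {1..2*n} A B" by (rule mpair_pmatch[OF A True])
    have "mdist_on (p ` {1..2*n}) (act p A) (act p B) = mdist_on {1..2*n} A B"
      by (rule mpair.mdist_on_act[OF m permutes_inj_on[OF p]])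
    then have md: "mdist_on {1..2*n} A B = mdist_on {1..2*n} (act p A) (act p B)"
      using permutes_image[OF p] by simp
    show ?thesis unfolding fop_eq_perm_count using perm_count_iso_invariant[OF m mpair_pmatch[OF pA pB] md] by simp
  next
    case False
    have "act p B \<notin> pmatch n"
    proof
      assume "act p B \<in> pmatch n"
      then have "act (inv p) (act p B) \<in> pmatch n" using act_pmatch permutes_inv[OF p] by blast
      moreover have "act (inv p) (act p B) = B"
        using act_comp[of "inv p" p B] permutes_inv_o(2)[OF p] act_id by simp
      ultimately show False using False by simp
    qed
    then show ?thesis using fop_out[OF A] fop_out[OF pA] False by simp
  qed
qed

lemma coefficient_at_ref_matching:
  assumes t1: "tau1 \<in> P2n n" and F: "\<forall>A\<in>pmatch n. \<forall>B. F A B = (\<Sum>tau\<in>P2n n. c tau * Mop tau n A B)"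
  shows "F (Imatch n) (ref_matching tau1 n) = c tau1"
proof -
  have Mv: "Mop t n (Imatch n) (ref_matching tau1 n) = (if t = tau1 then 1 else 0)" if "t \<in> P2n n" for t
    using Mop_eq_indicator[OF Imatch_pmatch ref_matching_pmatch[OF t1] mdist_on_ref_matching[OF t1] t1 that] .
  have "F (Imatch n) (ref_matching tau1 n) = (\<Sum>t\<in>P2n n. c t * Mop t n (Imatch n) (ref_matching tau1 n))" using F Imatch_pmatch by blast
  also have "\<dots> = (\<Sum>t\<in>P2n n. c t * (if t = tau1 then 1 else 0))" using Mv by simp
  also have "\<dots> = c tau1" by (rule sum_indicator[OF finite_P2n t1])
  finally show ?thesis .
qed

lemma fop_at_ref_matching: "tau1 \<in> P2n n \<Longrightarrow> fop mu n (Imatch n) (ref_matching tau1 n) = dcoef mu n tau1"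
  using coefficient_at_ref_matching[where F="fop mu n" and c="dcoef mu n"] dcoef_expansion by blast

text \<open>Evaluating at \<open>(I, ref_matching \<mu>\<^sub>0 n)\<close> for a \<open>\<mu>\<^sub>0\<close> of maximal size with \<open>c \<mu>\<^sub>0 \<noteq> 0\<close>
  isolates \<open>c \<mu>\<^sub>0 * 2 ^ size \<mu>\<^sub>0\<close>, by triangularity.\<close>

lemma fop_linear_independent:
  assumes H: "\<forall>A\<in>pmatch n. \<forall>B. (\<Sum>mu\<in>P2n n. c mu * fop mu n A B) = 0"
  shows "\<forall>mu\<in>P2n n. c mu = 0"
proof (rule ccontr)
  assume "\<not> (\<forall>mu\<in>P2n n. c mu = 0)"
  define Z where "Z = {mu \<in> P2n n. c mu \<noteq> 0}"
  have Zne: "Z \<noteq> {}" using \<open>\<not> (\<forall>mu\<in>P2n n. c mu = 0)\<close> unfolding Z_def by blast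
  have fZ: "finite Z" unfolding Z_def using finite_P2n by simp
  define m where "m = Max (sum_mset ` Z)"
  have "m \<in> sum_mset ` Z" unfolding m_def using fZ Zne by simp
  then obtain mu0 where mu0: "mu0 \<in> Z" "sum_mset mu0 = m" by blast
  have mx: "sum_mset mu \<le> sum_mset mu0" if "mu \<in> Z" for mu using that mu0(2) fZ unfolding m_def by simp
  have m0P: "mu0 \<in> P2n n" and cm0: "c mu0 \<noteq> 0" using mu0(1) unfolding Z_def by auto
  have "0 = (\<Sum>mu\<in>P2n n. c mu * fop mu n (Imatch n) (ref_matching mu0 n))" using H Imatch_pmatch by simp
  also have "\<dots> = (\<Sum>mu\<in>P2n n. c mu * dcoef mu n mu0)" using fop_at_ref_matching[OF m0P] by simp
  also have "\<dots> = c mu0 * dcoef mu0 n mu0 + (\<Sum>mu\<in>P2n n - {mu0}. c mu * dcoef mu n mu0)"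
    by (rule sum.remove[OF finite_P2n m0P])
  also have "(\<Sum>mu\<in>P2n n - {mu0}. c mu * dcoef mu n mu0) = 0"
  proof (rule sum.neutral, rule ballI)
    fix mu assume mu: "mu \<in> P2n n - {mu0}"
    show "c mu * dcoef mu n mu0 = 0"
    proof (cases "c mu = 0")
      case True then show ?thesis by simp
    next
      case False
      then have "mu \<in> Z" using mu unfolding Z_def by simp
      then have le: "sum_mset mu \<le> sum_mset mu0" by (rule mx)
      show ?thesis
      proof (cases "sum_mset mu < sum_mset mu0")
        case True then show ?thesis using dcoef_eq_0_if_bigger[of mu n mu0] mu m0P by simp
      next
        case False
        then have "sum_mset mu0 = sum_mset mu" using le by simp
        then show ?thesis using dcoef_eq_0_if_same_size[of mu n mu0] mu m0P by auto
      qed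
    qed
  qed
  finally have "c mu0 * dcoef mu0 n mu0 = 0" by simp
  then show False using dcoef_diagonal[OF m0P] cm0 by simp
qed

definition in_f_span :: "nat \<Rightarrow> (nat set set \<Rightarrow> nat set set \<Rightarrow> complex) \<Rightarrow> bool" where
  "in_f_span n F \<longleftrightarrow> (\<exists>c. \<forall>A\<in>pmatch n. \<forall>B. F A B = (\<Sum>mu\<in>P2n n. c mu * fop mu n A B))"

lemma in_f_span_cong: "in_f_span n G \<Longrightarrow> (\<forall>A\<in>pmatch n. \<forall>B. F A B = G A B) \<Longrightarrow> in_f_span n F"
  unfolding in_f_span_def by simp

lemma in_f_span_sum: assumes fI: "finite I" and h: "\<forall>i\<in>I. in_f_span n (F i)"
  shows "in_f_span n (\<lambda>A B. \<Sum>i\<in>I. w i * F i A B)"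
proof -
  have "\<forall>i\<in>I. \<exists>c. \<forall>A\<in>pmatch n. \<forall>B. F i A B = (\<Sum>mu\<in>P2n n. c mu * fop mu n A B)"
    using h unfolding in_f_span_def by blast
  then obtain C where C: "\<forall>i\<in>I. \<forall>A\<in>pmatch n. \<forall>B. F i A B = (\<Sum>mu\<in>P2n n. C i mu * fop mu n A B)"
    by (metis (no_types) bchoice)
  show ?thesis unfolding in_f_span_def
  proof (intro exI[of _ "\<lambda>mu. \<Sum>i\<in>I. w i * C i mu"] ballI allI)
    fix A B assume A: "A \<in> pmatch n"
    have "(\<Sum>i\<in>I. w i * F i A B) = (\<Sum>i\<in>I. w i * (\<Sum>mu\<in>P2n n. C i mu * fop mu n A B))"
      using C A by simp
    also have "\<dots> = (\<Sum>i\<in>I. \<Sum>mu\<in>P2n n. w i * C i mu * fop mu n A B)"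
      by (simp add: sum_distrib_left mult.assoc)
    also have "\<dots> = (\<Sum>mu\<in>P2n n. \<Sum>i\<in>I. w i * C i mu * fop mu n A B)" by (rule sum.swap)
    also have "\<dots> = (\<Sum>mu\<in>P2n n. (\<Sum>i\<in>I. w i * C i mu) * fop mu n A B)"
      by (simp add: sum_distrib_right)
    finally show "(\<Sum>i\<in>I. w i * F i A B) = (\<Sum>mu\<in>P2n n. (\<Sum>i\<in>I. w i * C i mu) * fop mu n A B)" .
  qed
qed

lemma in_f_span_fop: assumes m: "mu0 \<in> P2n n" shows "in_f_span n (fop mu0 n)"
  unfolding in_f_span_def
proof (intro exI[of _ "\<lambda>mu. if mu = mu0 then 1 else 0"] ballI allI)
  fix A B
  have "(\<Sum>mu\<in>P2n n. (if mu = mu0 then 1 else 0) * fop mu n A B) = (\<Sum>mu\<in>P2n n. fop mu n A B * (if mu = mu0 then 1 else 0))"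
    by (simp add: mult.commute)
  also have "\<dots> = fop mu0 n A B" by (rule sum_indicator[OF finite_P2n m])
  finally show "fop mu0 n A B = (\<Sum>mu\<in>P2n n. (if mu = mu0 then 1 else 0) * fop mu n A B)" by simp
qed

lemma in_f_span_lin: "in_f_span n F \<Longrightarrow> in_f_span n G \<Longrightarrow> in_f_span n (\<lambda>A B. a * F A B + b * G A B)"
proof -
  assume f: "in_f_span n F" and g: "in_f_span n G"
  have "in_f_span n (\<lambda>A B. \<Sum>i\<in>{True, False}. (if i then a else b) * (if i then F else G) A B)"
    by (rule in_f_span_sum) (use f g in auto)
  then show ?thesis by simp
qed

text \<open>By induction on \<open>|\<tau>|\<close>, since \<open>f(\<tau>, 2n)\<close> is \<open>2 ^ size \<tau>\<close> times \<open>M\<^sub>\<tau>\<close> plus a combination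
  of the \<open>M\<^sub>\<sigma>\<close> with \<open>|\<sigma>| < |\<tau>|\<close>.\<close>

lemma in_f_span_Mop: "tau \<in> P2n n \<Longrightarrow> in_f_span n (Mop tau n)"
proof (induction "sum_mset tau" arbitrary: tau rule: less_induct)
  case less
  have t: "tau \<in> P2n n" by fact
  define L where "L = {t \<in> P2n n. sum_mset t < sum_mset tau}"
  have fL: "finite L" unfolding L_def using finite_P2n by simp
  have IH: "\<forall>t\<in>L. in_f_span n (Mop t n)" using less.hyps unfolding L_def by blast
  have exp: "fop tau n A B = 2 ^ size tau * Mop tau n A B + (\<Sum>t\<in>L. dcoef tau n t * Mop t n A B)"
    if A: "A \<in> pmatch n" for A B
  proof -
    have "fop tau n A B = (\<Sum>t\<in>P2n n. dcoef tau n t * Mop t n A B)" by (rule dcoef_expansion[OF A])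
    also have "\<dots> = dcoef tau n tau * Mop tau n A B + (\<Sum>t\<in>P2n n - {tau}. dcoef tau n t * Mop t n A B)"
      by (rule sum.remove[OF finite_P2n t])
    also have "(\<Sum>t\<in>P2n n - {tau}. dcoef tau n t * Mop t n A B) = (\<Sum>t\<in>L. dcoef tau n t * Mop t n A B)"
    proof (rule sum.mono_neutral_right)
      show "finite (P2n n - {tau})" using finite_P2n by simp
      show "L \<subseteq> P2n n - {tau}" unfolding L_def by auto
      show "\<forall>i\<in>P2n n - {tau} - L. dcoef tau n i * Mop i n A B = 0"
      proof
        fix i assume i: "i \<in> P2n n - {tau} - L"
        then have "sum_mset tau \<le> sum_mset i" "i \<in> P2n n" "i \<noteq> tau" unfolding L_def by auto
        then have "dcoef tau n i = 0" using dcoef_eq_0_if_bigger[OF t, of i] dcoef_eq_0_if_same_size[OF t, of i] by (cases "sum_mset tau < sum_mset i") auto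
        then show "dcoef tau n i * Mop i n A B = 0" by simp
      qed
    qed
    finally show ?thesis using dcoef_diagonal[OF t] by simp
  qed
  have i1: "in_f_span n (\<lambda>A B. \<Sum>t\<in>L. dcoef tau n t * Mop t n A B)" by (rule in_f_span_sum[OF fL IH])
  have i2: "in_f_span n (\<lambda>A B. (1 / 2 ^ size tau) * fop tau n A B + (- 1 / 2 ^ size tau) * (\<Sum>t\<in>L. dcoef tau n t * Mop t n A B))"
    by (rule in_f_span_lin[OF in_f_span_fop[OF t] i1])
  show ?case
  proof (rule in_f_span_cong[OF i2], intro ballI allI)
    fix A B assume A: "A \<in> pmatch n"
    have "(2::complex) ^ size tau \<noteq> 0" by simp
    then show "Mop tau n A B = (1 / 2 ^ size tau) * fop tau n A B + (- 1 / 2 ^ size tau) * (\<Sum>t\<in>L. dcoef tau n t * Mop t n A B)"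
      using exp[OF A, of B] by (simp add: field_simps)
  qed
qed

lemma permutes_onto_ref_matching:
  assumes A: "A \<in> pmatch n" and B: "B \<in> pmatch n" and t0: "tau0 \<in> P2n n"
    and md: "mdist_on {1..2*n} A B = dbl (pad1 tau0 n)"
  obtains p where "p permutes {1..2*n}" "act p A = Imatch n" "act p B = ref_matching tau0 n"
proof -
  interpret mpair2 "{1..2*n}" A B "{1..2*n}" "Imatch n" "ref_matching tau0 n"
    unfolding mpair2_def using mpair_pmatch[OF A B] mpair_pmatch[OF Imatch_pmatch ref_matching_pmatch[OF t0]]
    by simp
  obtain q where q: "bij_betw q {1..2*n} {1..2*n}" "act q A = Imatch n" "act q B = ref_matching tau0 n"
    using mdist_on_eq_imp_iso md mdist_on_ref_matching[OF t0] by metis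
  define p where "p x = (if x \<in> {1..2*n} then q x else x)" for x
  have "bij_betw p {1..2*n} {1..2*n}" using q(1) unfolding p_def by (rule bij_betw_cong[THEN iffD1, rotated]) simp
  then have pp: "p permutes {1..2*n}" by (rule bij_imp_permutes) (auto simp: p_def)
  have "act p M = act q M" if "is_matching {1..2*n} M" for M
  proof -
    have "p ` e = q ` e" if "e \<in> M" for e
      using edge_subset[OF \<open>is_matching {1..2*n} M\<close> that] unfolding p_def by (auto intro!: image_cong)
    then show ?thesis unfolding act_def by (auto intro!: image_cong)
  qed
  then show ?thesis using that pp q c1.mA c1.mB by metis
qed

lemma equivariant_in_f_span:
  assumes T: "equivariant_op n T"
  shows "\<exists>c :: nat multiset \<Rightarrow> complex. \<forall>A\<in>pmatch n. \<forall>B. T A B = (\<Sum>mu\<in>P2n n. c mu * fop mu n A B)"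
proof -
  have T0: "\<forall>A\<in>pmatch n. \<forall>B. B \<notin> pmatch n \<longrightarrow> T A B = 0"
    and Tinv: "\<forall>p. p permutes {1..2*n} \<longrightarrow> (\<forall>A\<in>pmatch n. \<forall>B. T (act p A) (act p B) = T A B)"
    using T unfolding equivariant_op_def by auto
  have rep: "T A B = (\<Sum>tau\<in>P2n n. T (Imatch n) (ref_matching tau n) * Mop tau n A B)" if A: "A \<in> pmatch n" for A B
  proof (cases "B \<in> pmatch n")
    case False then show ?thesis using T0 A Mop_out[OF False] by simp
  next
    case True
    obtain tau0 where t0: "tau0 \<in> P2n n" "mdist_on {1..2*n} A B = dbl (pad1 tau0 n)"
      using mdist_on_eq_dbl_pad1[OF mpair_pmatch[OF A True]] by auto
    obtain p where "p permutes {1..2*n}" "act p A = Imatch n" "act p B = ref_matching tau0 n"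
      using permutes_onto_ref_matching[OF A True t0] .
    then have e: "T A B = T (Imatch n) (ref_matching tau0 n)" using Tinv A by metis
    have "(\<Sum>tau\<in>P2n n. T (Imatch n) (ref_matching tau n) * Mop tau n A B)
        = (\<Sum>tau\<in>P2n n. T (Imatch n) (ref_matching tau n) * (if tau = tau0 then 1 else 0))"
      using Mop_eq_indicator[OF A True t0(2) t0(1)] by simp
    also have "\<dots> = T (Imatch n) (ref_matching tau0 n)" by (rule sum_indicator[OF finite_P2n t0(1)])
    finally show ?thesis using e by simp
  qed
  have "in_f_span n (\<lambda>A B. \<Sum>tau\<in>P2n n. T (Imatch n) (ref_matching tau n) * Mop tau n A B)"
    by (rule in_f_span_sum[OF finite_P2n]) (use in_f_span_Mop in blast)
  then have "in_f_span n T" by (rule in_f_span_cong) (use rep in blast)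
  then show ?thesis unfolding in_f_span_def .
qed

theorem f_basis_holds: "f_basis n"
  unfolding f_basis_def using equivariant_fop fop_linear_independent equivariant_in_f_span by blast

theorem theorem3p3:
  shows "(\<forall>mu k n tau. mu \<in> P2 \<and> sum_mset mu = k \<and> k \<le> n \<and> tau \<in> P2n n \<longrightarrow>
            (sum_mset tau > k \<longrightarrow> dcoef mu n tau = 0) \<and>
            (sum_mset tau = k \<and> tau \<noteq> mu \<longrightarrow> dcoef mu n tau = 0) \<and>
            (tau = mu \<longrightarrow> dcoef mu n tau = 2 ^ size mu) \<and>
            (\<forall>j. sum_mset tau = j \<and> j < k \<longrightarrow>
               dcoef mu n tau = of_int
                 (\<Sum>r = max j ((k + 1) div 2)..k - 1.
                    (\<Sum>s = max j ((k + 1) div 2)..r.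
                        (-1) ^ (r - s) * int ((r - j) choose (s - j))
                        * int (mcount (pad1 mu (2 * s)) (dbl (pad1 tau s))))
                    * int ((n - j) choose (r - j)))))
         \<and> (\<forall>n. f_basis n)"
proof (intro conjI allI impI f_basis_holds; elim conjE)
  fix mu k n tau
  assume "mu \<in> P2" "sum_mset mu = k" "k \<le> n" and tau: "tau \<in> P2n n"
  then have mu: "mu \<in> P2n n" unfolding P2n_def by simp
  then show "k < sum_mset tau \<Longrightarrow> dcoef mu n tau = 0"
    and "sum_mset tau = k \<Longrightarrow> tau \<noteq> mu \<Longrightarrow> dcoef mu n tau = 0"
    and "tau = mu \<Longrightarrow> dcoef mu n tau = 2 ^ size mu"
    using dcoef_eq_0_if_bigger[OF mu tau] dcoef_eq_0_if_same_size[OF mu tau] dcoef_diagonal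
    by (simp_all add: \<open>sum_mset mu = k\<close>)
  fix j assume "sum_mset tau = j" "j < k"
  then show "dcoef mu n tau = of_int
                 (\<Sum>r = max j ((k + 1) div 2)..k - 1.
                    (\<Sum>s = max j ((k + 1) div 2)..r.
                        (-1) ^ (r - s) * int ((r - j) choose (s - j))
                        * int (mcount (pad1 mu (2 * s)) (dbl (pad1 tau s))))
                    * int ((n - j) choose (r - j)))"
    by (rule dcoef_formula[OF mu tau \<open>sum_mset mu = k\<close>])
qed

end
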